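(* Let $\Phi$ be a formal diffeomorphism. Suppose that $\Phi$ formally conjugates an analytic vector field $S+N_k+R_k$, where $N_k$ is resonant of quasi-order $1$ and $R_k$ has quasi-order $k+1$, to a formal resonant vector field $NF_1=S+R$, where $R$ has quasi-order $1$; that is, for all $j\in\mathbb{N}$, $$T^j(DT^j\Phi\cdot NF_1)=T^j\big[(S+N_k+R_k)\circ T^j\Phi\big].$$ Then $T^k\Phi$ is a resonant diffeomorphism.
   Context: Fix $\omega\in\mathbb{R}^d$, $\lambda_1,\dots,\lambda_n\in\mathbb{C}$, $S=\sum_{j=1}^d\omega_j\partial_{X_j}+\sum_{j'=1}^n\lambda_{j'}Y_{j'}\partial_{Y_{j'}}$. $X$ periodic, $Y\in\mathbb{C}^n$, $|Q|=\sum Q_j$, $\langle Q,\Lambda\rangle=\sum Q_j\lambda_j$. Formal Fourier–Taylor series: $f=\sum f_{P,Q}e^{i\langle P,X\rangle}Y^Q$ with $\sum_P|f_{P,Q}|^2<\infty$ for each $Q$; order $k$ if $f_{P,Q}=0$ for $|Q|\le k-1$; resonant if $f_{P,Q}\neq0\Rightarrow i\langle P,\omega\rangle+\langle Q,\Lambda\rangle=0$. A (formal) vector field $F=(F_1,\dots,F_{d+n})$ has quasi-order $k$ if $F_1,\dots,F_d$ have order $k$ and $F_{d+1},\dots,F_{d+n}$ have order $k+1$; it is resonant if $F_1,\dots,F_d$ are resonant and $F_{d+j',P,Q}\ne0\Rightarrow i\langle P,\omega\rangle+\langle Q,\Lambda\rangle-\lambda_{j'}=0$. Truncation: $T^kf=\sum_{|Q|\le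 k}f_{P,Q}e^{i\langle P,X\rangle}Y^Q$; for vector fields/maps $T^kF=(T^kF_1,\dots,T^kF_d,T^{k+1}F_{d+1},\dots,T^{k+1}F_{d+n})$; degree $k$ means $T^kF=F$. A formal diffeomorphism $\Phi$ is a sequence $(\Phi_k)$ of analytic diffeomorphisms on non-increasing domains, $\Phi_k$ of degree $k$, $T^j\Phi_k=\Phi_j$ (restricted) for $j\le k$; $T^k\Phi:=\Phi_k$. For a map of the form $\Phi_j=X_j+\tilde\Phi_j$ ($j\le d$), $\Phi_{d+j'}=Y_{j'}\tilde\Phi_{d+j'}$, it is resonant if all $\tilde\Phi_j$ are resonant series; $T^k\Phi$ resonant means all $T^k\tilde\Phi_j$ are resonant. *)

theory Defs
  imports "HOL-Analysis.Analysis"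
begin

text \<open>
Variables: X :: 'd \<Rightarrow> complex (angles, 2\<pi>-periodic, complexified to a strip),
Y :: 'n \<Rightarrow> complex.
A (formal) Fourier--Taylor series is represented by its coefficient array
f P Q (coefficient of e^{i<P,X>} Y^Q).  A vector field has components indexed
by 'd + 'n: Inl l is the d/dX_l component, Inr j the d/dY_j component.
\<close>

type_synonym ('d, 'n) fts = "('d \<Rightarrow> int) \<Rightarrow> ('n \<Rightarrow> nat) \<Rightarrow> complex"
type_synonym ('d, 'n) fvf = "'d + 'n \<Rightarrow> ('d, 'n) fts"

definition degQ :: "('n::finite \<Rightarrow> nat) \<Rightarrow> nat" where
  "degQ Q = (\<Sum>j\<in>UNIV. Q j)"

definition unitQ :: "'n \<Rightarrow> ('n \<Rightarrow> nat)" where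
  "unitQ j = (\<lambda>i. if i = j then 1 else 0)"

definition formal_series :: "('d::finite, 'n::finite) fts \<Rightarrow> bool" where
  "formal_series f \<longleftrightarrow> (\<forall>Q. (\<lambda>P. (cmod (f P Q))\<^sup>2) summable_on UNIV)"

definition formal_vf :: "('d::finite, 'n::finite) fvf \<Rightarrow> bool" where
  "formal_vf F \<longleftrightarrow> (\<forall>a. formal_series (F a))"

definition has_order :: "nat \<Rightarrow> ('d::finite, 'n::finite) fts \<Rightarrow> bool" where
  "has_order k f \<longleftrightarrow> (\<forall>P Q. degQ Q < k \<longrightarrow> f P Q = 0)"

definition small_div :: "('d::finite \<Rightarrow> real) \<Rightarrow> ('n::finite \<Rightarrow> complex)
    \<Rightarrow> ('d \<Rightarrow> int) \<Rightarrow> ('n \<Rightarrow> nat) \<Rightarrow> complex" where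
  "small_div \<omega> \<Lambda> P Q = \<i> * complex_of_real (\<Sum>l\<in>UNIV. of_int (P l) * \<omega> l)
                        + (\<Sum>j\<in>UNIV. of_nat (Q j) * \<Lambda> j)"

definition resonant :: "('d::finite \<Rightarrow> real) \<Rightarrow> ('n::finite \<Rightarrow> complex)
    \<Rightarrow> ('d, 'n) fts \<Rightarrow> bool" where
  "resonant \<omega> \<Lambda> f \<longleftrightarrow> (\<forall>P Q. f P Q \<noteq> 0 \<longrightarrow> small_div \<omega> \<Lambda> P Q = 0)"

definition quasi_order :: "nat \<Rightarrow> ('d::finite, 'n::finite) fvf \<Rightarrow> bool" where
  "quasi_order k F \<longleftrightarrow> (\<forall>l. has_order k (F (Inl l))) \<and> (\<forall>j. has_order (k + 1) (F (Inr j)))"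

definition resonant_vf :: "('d::finite \<Rightarrow> real) \<Rightarrow> ('n::finite \<Rightarrow> complex)
    \<Rightarrow> ('d, 'n) fvf \<Rightarrow> bool" where
  "resonant_vf \<omega> \<Lambda> F \<longleftrightarrow> (\<forall>l. resonant \<omega> \<Lambda> (F (Inl l))) \<and>
     (\<forall>j P Q. F (Inr j) P Q \<noteq> 0 \<longrightarrow> small_div \<omega> \<Lambda> P Q - \<Lambda> j = 0)"

definition trunc :: "nat \<Rightarrow> ('d::finite, 'n::finite) fts \<Rightarrow> ('d, 'n) fts" where
  "trunc k f = (\<lambda>P Q. if degQ Q \<le> k then f P Q else 0)"

definition trunc_vf :: "nat \<Rightarrow> ('d::finite, 'n::finite) fvf \<Rightarrow> ('d, 'n) fvf" where
  "trunc_vf k F = (\<lambda>a. case a of Inl l \<Rightarrow> trunc k (F (Inl l)) | Inr j \<Rightarrow> trunc (k + 1) (F (Inr j)))"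

definition S_vf :: "('d::finite \<Rightarrow> real) \<Rightarrow> ('n::finite \<Rightarrow> complex) \<Rightarrow> ('d, 'n) fvf" where
  "S_vf \<omega> \<Lambda> = (\<lambda>a. case a of
      Inl l \<Rightarrow> (\<lambda>P Q. if P = (\<lambda>_. 0) \<and> Q = (\<lambda>_. 0) then complex_of_real (\<omega> l) else 0)
    | Inr j \<Rightarrow> (\<lambda>P Q. if P = (\<lambda>_. 0) \<and> Q = unitQ j then \<Lambda> j else 0))"

definition add_vf :: "('d, 'n) fvf \<Rightarrow> ('d, 'n) fvf \<Rightarrow> ('d, 'n) fvf" where
  "add_vf F G = (\<lambda>a P Q. F a P Q + G a P Q)"

text \<open>Analytic periodic functions near the torus {Y = 0}: the coefficients satisfy
  \<Sum> |f_{P,Q}| e^{r|P|} \<rho>^{|Q|} < \<infinity>; the series then converges on the domain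
  |Im X_l| < r, |Y_j| < \<rho>.\<close>
definition analytic_fts :: "real \<Rightarrow> real \<Rightarrow> ('d::finite, 'n::finite) fts \<Rightarrow> bool" where
  "analytic_fts r \<rho> f \<longleftrightarrow> 0 < r \<and> 0 < \<rho> \<and>
     (\<lambda>(P, Q). cmod (f P Q) * exp (r * (\<Sum>l\<in>UNIV. \<bar>real_of_int (P l)\<bar>)) * \<rho> ^ degQ Q)
       summable_on UNIV"

definition dom_strip :: "real \<Rightarrow> real \<Rightarrow> (('d::finite \<Rightarrow> complex) \<times> ('n::finite \<Rightarrow> complex)) set" where
  "dom_strip r \<rho> = {(X, Y). (\<forall>l. \<bar>Im (X l)\<bar> < r) \<and> (\<forall>j. cmod (Y j) < \<rho>)}"

definition mono_term :: "('d::finite \<Rightarrow> int) \<Rightarrow> ('n::finite \<Rightarrow> nat)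
    \<Rightarrow> ('d \<Rightarrow> complex) \<Rightarrow> ('n \<Rightarrow> complex) \<Rightarrow> complex" where
  "mono_term P Q X Y = exp (\<i> * (\<Sum>l\<in>UNIV. of_int (P l) * X l)) * (\<Prod>j\<in>UNIV. Y j ^ Q j)"

definition eval_fts :: "('d::finite, 'n::finite) fts \<Rightarrow> ('d \<Rightarrow> complex) \<Rightarrow> ('n \<Rightarrow> complex) \<Rightarrow> complex" where
  "eval_fts f X Y = (\<Sum>\<^sub>\<infinity>(P, Q)\<in>UNIV. f P Q * mono_term P Q X Y)"

definition represents :: "('d::finite, 'n::finite) fts
    \<Rightarrow> (('d \<Rightarrow> complex) \<Rightarrow> ('n \<Rightarrow> complex) \<Rightarrow> complex)
    \<Rightarrow> (('d \<Rightarrow> complex) \<times> ('n \<Rightarrow> complex)) set \<Rightarrow> bool" where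
  "represents c g D \<longleftrightarrow>
     (\<forall>(X, Y)\<in>D. ((\<lambda>(P, Q). c P Q * mono_term P Q X Y) has_sum g X Y) UNIV)"

definition one_fts :: "('d, 'n) fts" where
  "one_fts = (\<lambda>P Q. if P = (\<lambda>_. 0) \<and> Q = (\<lambda>_. 0) then 1 else 0)"

definition dX :: "'d \<Rightarrow> ('d, 'n) fts \<Rightarrow> ('d, 'n) fts" where
  "dX m f = (\<lambda>P Q. \<i> * of_int (P m) * f P Q)"

definition dY :: "'n \<Rightarrow> ('d, 'n) fts \<Rightarrow> ('d, 'n) fts" where
  "dY j f = (\<lambda>P Q. of_nat (Q j + 1) * f P (\<lambda>i. Q i + unitQ j i))"

definition mulY :: "'n \<Rightarrow> ('d, 'n) fts \<Rightarrow> ('d, 'n) fts" where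
  "mulY i f = (\<lambda>P Q. if 1 \<le> Q i then f P (\<lambda>j. Q j - unitQ i j) else 0)"

definition mul_fts :: "('d::finite, 'n::finite) fts \<Rightarrow> ('d, 'n) fts \<Rightarrow> ('d, 'n) fts" where
  "mul_fts g f = (\<lambda>P Q. \<Sum>\<^sub>\<infinity>P'\<in>UNIV.
      \<Sum>Q'\<in>{Q'. \<forall>j. Q' j \<le> Q j}. g P' Q' * f (\<lambda>l. P l - P' l) (\<lambda>j. Q j - Q' j))"

text \<open>A map \<Phi> in the form \<Phi>_l = X_l + \<Phi>t(Inl l), \<Phi>_{d+j} = Y_j * \<Phi>t(Inr j),
  given by the array \<Phi>t of its tilde components.\<close>
definition jac :: "('d::finite, 'n::finite) fvf \<Rightarrow> 'd + 'n \<Rightarrow> 'd + 'n \<Rightarrow> ('d, 'n) fts" where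
  "jac \<Phi>t a b = (case a of
      Inl l \<Rightarrow> (case b of
          Inl m \<Rightarrow> (\<lambda>P Q. (if l = m then one_fts P Q else 0) + dX m (\<Phi>t (Inl l)) P Q)
        | Inr j \<Rightarrow> dY j (\<Phi>t (Inl l)))
    | Inr i \<Rightarrow> (case b of
          Inl m \<Rightarrow> mulY i (dX m (\<Phi>t (Inr i)))
        | Inr j \<Rightarrow> (\<lambda>P Q. (if i = j then \<Phi>t (Inr i) P Q else 0) + mulY i (dY j (\<Phi>t (Inr i))) P Q)))"

definition jac_apply :: "('d::finite, 'n::finite) fvf \<Rightarrow> ('d, 'n) fvf \<Rightarrow> ('d, 'n) fvf" where
  "jac_apply \<Phi>t F = (\<lambda>a P Q. \<Sum>b\<in>UNIV. mul_fts (jac \<Phi>t a b) (F b) P Q)"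

definition map_X :: "('d::finite, 'n::finite) fvf \<Rightarrow> ('d \<Rightarrow> complex) \<Rightarrow> ('n \<Rightarrow> complex) \<Rightarrow> ('d \<Rightarrow> complex)" where
  "map_X \<Phi>t X Y = (\<lambda>l. X l + eval_fts (\<Phi>t (Inl l)) X Y)"

definition map_Y :: "('d::finite, 'n::finite) fvf \<Rightarrow> ('d \<Rightarrow> complex) \<Rightarrow> ('n \<Rightarrow> complex) \<Rightarrow> ('n \<Rightarrow> complex)" where
  "map_Y \<Phi>t X Y = (\<lambda>j. Y j * eval_fts (\<Phi>t (Inr j)) X Y)"

definition analytic_diffeo :: "real \<Rightarrow> real \<Rightarrow> ('d::finite, 'n::finite) fvf \<Rightarrow> bool" where
  "analytic_diffeo r \<rho> \<Phi>t \<longleftrightarrow>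
     (\<forall>a. analytic_fts r \<rho> (\<Phi>t a)) \<and>
     inj_on (\<lambda>(X, Y). (map_X \<Phi>t X Y, map_Y \<Phi>t X Y)) (dom_strip r \<rho>) \<and>
     (\<forall>(X, Y)\<in>dom_strip r \<rho>.
        det (\<chi> a b. eval_fts (jac \<Phi>t a b) X Y :: complex^('d + 'n)^('d + 'n)) \<noteq> 0)"

text \<open>A formal diffeomorphism: a sequence of analytic diffeomorphisms \<Phi>_k (given by their
  tilde components \<Phi>t k) on non-increasing domains, \<Phi>_k of degree k, compatible under
  truncation.  (Degree k of the map is degree k of all tilde components.)\<close>
definition formal_diffeo :: "(nat \<Rightarrow> ('d::finite, 'n::finite) fvf) \<Rightarrow> bool" where
  "formal_diffeo \<Phi>t \<longleftrightarrow> (\<exists>r \<rho> :: nat \<Rightarrow> real.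
      antimono r \<and> antimono \<rho> \<and>
      (\<forall>k. analytic_diffeo (r k) (\<rho> k) (\<Phi>t k)) \<and>
      (\<forall>k a. trunc k (\<Phi>t k a) = \<Phi>t k a) \<and>
      (\<forall>j k a. j \<le> k \<longrightarrow> trunc j (\<Phi>t k a) = \<Phi>t j a))"

definition conj_eq :: "real \<Rightarrow> real \<Rightarrow> ('d::finite, 'n::finite) fvf \<Rightarrow> ('d, 'n) fvf
    \<Rightarrow> ('d, 'n) fvf \<Rightarrow> nat \<Rightarrow> bool" where
  "conj_eq rV \<rho>V V NF \<Phi>j j \<longleftrightarrow> (\<exists>r \<rho> c. 0 < r \<and> 0 < \<rho> \<and>
      (\<forall>(X, Y)\<in>dom_strip r \<rho>. (map_X \<Phi>j X Y, map_Y \<Phi>j X Y) \<in> dom_strip rV \<rho>V) \<and>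
      (\<forall>a. represents (c a) (\<lambda>X Y. eval_fts (V a) (map_X \<Phi>j X Y) (map_Y \<Phi>j X Y))
                       (dom_strip r \<rho>)) \<and>
      trunc_vf j (jac_apply \<Phi>j NF) = trunc_vf j c)"

end

theory Submission
  imports Defs
begin

text \<open>
  Induction on the Taylor degree \<open>|Q|\<close>.  Suppose the coefficients of \<open>\<Phi> = T^k \<Phi>\<close> below
  degree \<open>m\<close> are resonant and let \<open>(P, Q)\<close> with \<open>|Q| = m\<close> have small divisor \<open>\<mu> \<noteq> 0\<close>.
  Resonance of the normal form and the induction hypothesis leave only the linear part \<open>S\<close>
  in the \<open>(P, Q)\<close>-coefficient of \<open>D\<Phi> \<cdot> NF\<close>, which is therefore \<open>(\<mu> + \<lambda>) \<Phi>_PQ\<close>, where \<open>\<lambda>\<close>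
  is the eigenvalue of the component (\<open>0\<close> for \<open>X\<close>, \<open>\<lambda>_i\<close> for \<open>Y_i\<close>).  By the conjugacy
  equation this is also the coefficient of \<open>(S + N + R) \<circ> \<Phi>\<close>, and \<open>S \<circ> \<Phi>\<close> contributes
  \<open>\<lambda> \<Phi>_PQ\<close>.  It remains to see that \<open>G = (N + R) \<circ> \<Phi>\<close> has no coefficient at \<open>(P, Q)\<close>.
  Along the linear flow \<open>e^(tS)\<close>, the resonant part \<open>A\<close> of \<open>N\<close> (up to degree \<open>k\<close>) is
  multiplied by \<open>e^(t\<lambda>)\<close>, \<open>\<Phi>\<close> commutes with the flow up to \<open>O(|Y|^m)\<close> by induction, and
  the rest of \<open>R\<close> is \<open>O(|Y|^(k+1))\<close>; hence \<open>G \<circ> e^(tS) - e^(t\<lambda>) G = O(|Y|^(m+1))\<close> on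
  real \<open>X\<close>.  The \<open>(P, Q)\<close>-coefficient of the left side is \<open>e^(t(\<mu>+\<lambda>)) - e^(t\<lambda>)\<close> times
  that of \<open>G\<close>, and a discrete Cauchy estimate on a grid of roots of unity shows that it
  vanishes.  Choosing \<open>t\<close> with \<open>e^(t\<mu>) \<noteq> 1\<close> gives \<open>\<mu> \<Phi>_PQ = 0\<close>.
\<close>

section \<open>Weighted norms of analytic Fourier--Taylor series\<close>

definition normP :: "('d::finite \<Rightarrow> int) \<Rightarrow> real" where
  "normP P = (\<Sum>l\<in>UNIV. \<bar>real_of_int (P l)\<bar>)"

definition coeff_weight :: "real \<Rightarrow> real \<Rightarrow> ('d::finite, 'n::finite) fts \<Rightarrow> ('d \<Rightarrow> int) \<times> ('n \<Rightarrow> nat) \<Rightarrow> real" where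
  "coeff_weight r \<rho> a = (\<lambda>(P, Q). cmod (a P Q) * exp (r * normP P) * \<rho> ^ degQ Q)"

definition weighted_norm :: "real \<Rightarrow> real \<Rightarrow> ('d::finite, 'n::finite) fts \<Rightarrow> real" where
  "weighted_norm r \<rho> a = infsum (coeff_weight r \<rho> a) UNIV"

lemma analytic_fts_iff_weight:
  "analytic_fts r \<rho> a \<longleftrightarrow> 0 < r \<and> 0 < \<rho> \<and> coeff_weight r \<rho> a summable_on UNIV"
  by (simp add: analytic_fts_def coeff_weight_def normP_def)

lemma has_sum_weighted_norm:
  "analytic_fts r \<rho> a \<Longrightarrow> (coeff_weight r \<rho> a has_sum weighted_norm r \<rho> a) UNIV"
  by (simp add: analytic_fts_iff_weight weighted_norm_def)

lemma normP_nonneg: "0 \<le> normP P"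
  by (simp add: normP_def sum_nonneg)

lemma weighted_norm_nonneg: "analytic_fts r \<rho> a \<Longrightarrow> 0 \<le> weighted_norm r \<rho> a"
  unfolding weighted_norm_def
  by (rule infsum_nonneg) (auto simp: coeff_weight_def analytic_fts_def split: prod.splits)

lemma analytic_fts_dominated:
  assumes "analytic_fts r \<rho> V" "\<And>P Q. cmod (A P Q) \<le> cmod (V P Q)"
  shows "analytic_fts r \<rho> A"
proof -
  have pos: "0 < r" "0 < \<rho>" using assms by (auto simp: analytic_fts_def)
  have "coeff_weight r \<rho> V summable_on UNIV" using assms by (simp add: analytic_fts_iff_weight)
  then have "coeff_weight r \<rho> A summable_on UNIV"
    by (rule summable_on_comparison_test)
       (use assms(2) pos in \<open>auto simp: coeff_weight_def intro!: mult_right_mono split: prod.splits\<close>)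
  then show ?thesis using pos by (simp add: analytic_fts_iff_weight)
qed

lemma norm_mono_term:
  "cmod (mono_term P Q X Y) = exp (- (\<Sum>l\<in>UNIV. of_int (P l) * Im (X l))) * (\<Prod>j\<in>UNIV. cmod (Y j) ^ Q j)"
proof -
  have "Re (\<i> * (\<Sum>l\<in>UNIV. of_int (P l) * X l)) = - (\<Sum>l\<in>UNIV. of_int (P l) * Im (X l))"
    by (simp add: Im_sum)
  then show ?thesis
    by (simp add: mono_term_def norm_mult prod_norm[symmetric] norm_power)
qed

lemma norm_mono_term_real:
  assumes "\<forall>l. Im (X l) = 0" "\<forall>j. cmod (Y j) = \<epsilon>"
  shows "cmod (mono_term P Q X Y) = \<epsilon> ^ degQ Q"
  using assms by (simp add: norm_mono_term degQ_def power_sum)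

lemma abs_Im_sum_le:
  assumes "\<forall>l. \<bar>Im (X l)\<bar> \<le> r"
  shows "\<bar>Im (\<Sum>l\<in>UNIV. of_int (P l) * X l)\<bar> \<le> r * normP P"
proof -
  have "\<bar>Im (\<Sum>l\<in>UNIV. of_int (P l) * X l)\<bar> = \<bar>\<Sum>l\<in>UNIV. of_int (P l) * Im (X l)\<bar>"
    by (simp add: Im_sum)
  also have "\<dots> \<le> (\<Sum>l\<in>UNIV. \<bar>of_int (P l) * Im (X l)\<bar>)" by (rule sum_abs)
  also have "\<dots> \<le> (\<Sum>l\<in>UNIV. r * \<bar>real_of_int (P l)\<bar>)"
    using assms by (intro sum_mono) (simp add: abs_mult mult.commute[of r] mult_left_mono)
  finally show ?thesis by (simp add: normP_def sum_distrib_left)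
qed

lemma norm_prod_power_le:
  assumes "\<forall>j. cmod (Y j) \<le> s"
  shows "cmod (\<Prod>j\<in>UNIV. Y j ^ Q j) \<le> s ^ degQ Q"
proof -
  have "cmod (\<Prod>j\<in>UNIV. Y j ^ Q j) = (\<Prod>j\<in>UNIV. cmod (Y j) ^ Q j)"
    by (simp add: prod_norm[symmetric] norm_power)
  also have "\<dots> \<le> (\<Prod>j\<in>UNIV. s ^ Q j)" using assms by (intro prod_mono) (auto intro: power_mono)
  also have "\<dots> = s ^ degQ Q" by (simp add: degQ_def power_sum)
  finally show ?thesis .
qed

lemma norm_mono_term_le:
  assumes "\<forall>l. \<bar>Im (X l)\<bar> \<le> r" "\<forall>j. cmod (Y j) \<le> s"
  shows "cmod (mono_term P Q X Y) \<le> exp (r * normP P) * s ^ degQ Q"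
proof -
  have "cmod (exp (\<i> * (\<Sum>l\<in>UNIV. of_int (P l) * X l))) \<le> exp (r * normP P)"
    using abs_Im_sum_le[OF assms(1), of P] by simp
  then show ?thesis unfolding mono_term_def norm_mult
    by (rule mult_mono[OF _ norm_prod_power_le[OF assms(2)]]) auto
qed

lemma has_sum_diff:
  fixes f g :: "'a \<Rightarrow> 'b::topological_ab_group_add"
  assumes "(f has_sum a) A" "(g has_sum b) A"
  shows "((\<lambda>x. f x - g x) has_sum (a - b)) A"
proof -
  have "((\<lambda>x. - g x) has_sum (- b)) A" using has_sum_uminus[where f=g and a="-b" and A=A] assms(2) by simp
  from has_sum_add[OF assms(1) this] show ?thesis by simp
qed

lemma has_sum_delta: "((\<lambda>x. if x = a then c else 0) has_sum c) UNIV"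
  by (rule has_sum_finite_neutralI[of "{a}"]) auto

lemma has_sum_sum:
  fixes f :: "'i \<Rightarrow> 'a \<Rightarrow> 'b::topological_comm_monoid_add"
  assumes "finite I" "\<And>i. i \<in> I \<Longrightarrow> (f i has_sum s i) A"
  shows "((\<lambda>x. \<Sum>i\<in>I. f i x) has_sum (\<Sum>i\<in>I. s i)) A"
  using assms by (induction I rule: finite_induct) (auto intro: has_sum_add)

lemma analytic_fts_abs_summable:
  assumes "analytic_fts r \<rho> a" "\<forall>l. \<bar>Im (X l)\<bar> \<le> r" "\<forall>j. cmod (Y j) \<le> \<rho>"
  shows "(\<lambda>x. norm ((\<lambda>(P, Q). a P Q * mono_term P Q X Y) x)) summable_on UNIV"
proof (rule summable_on_comparison_test)
  show "coeff_weight r \<rho> a summable_on UNIV" using assms(1) by (simp add: analytic_fts_iff_weight)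
  fix x :: "('a \<Rightarrow> int) \<times> ('b \<Rightarrow> nat)"
  obtain P Q where x: "x = (P, Q)" by (cases x)
  have "cmod (a P Q * mono_term P Q X Y) \<le> cmod (a P Q) * (exp (r * normP P) * \<rho> ^ degQ Q)"
    unfolding norm_mult by (intro mult_left_mono norm_mono_term_le assms) auto
  then show "norm ((\<lambda>(P, Q). a P Q * mono_term P Q X Y) x) \<le> coeff_weight r \<rho> a x"
    by (simp add: x coeff_weight_def mult.assoc)
qed auto

lemma analytic_fts_has_sum:
  assumes "analytic_fts r \<rho> a" "\<forall>l. \<bar>Im (X l)\<bar> \<le> r" "\<forall>j. cmod (Y j) \<le> \<rho>"
  shows "((\<lambda>(P, Q). a P Q * mono_term P Q X Y) has_sum eval_fts a X Y) UNIV"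
  using abs_summable_summable[OF analytic_fts_abs_summable[OF assms]]
  by (simp add: eval_fts_def)

lemma norm_le_weighted_norm_termwise:
  assumes an: "analytic_fts r \<rho> a"
    and hs: "((\<lambda>(P, Q). a P Q * f P Q) has_sum v) UNIV"
    and terms_le: "\<And>P Q. a P Q \<noteq> 0 \<Longrightarrow> cmod (f P Q) \<le> exp (r * normP P) * \<rho> ^ degQ Q * C"
  shows "cmod v \<le> weighted_norm r \<rho> a * C"
proof (rule norm_infsum_le[OF hs has_sum_cmult_left[OF has_sum_weighted_norm[OF an]]])
  fix x :: "('a \<Rightarrow> int) \<times> ('b \<Rightarrow> nat)"
  obtain P Q where x: "x = (P, Q)" by (cases x)
  have "cmod (a P Q * f P Q) \<le> cmod (a P Q) * (exp (r * normP P) * \<rho> ^ degQ Q * C)"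
  proof (cases "a P Q = 0")
    case False
    then show ?thesis unfolding norm_mult by (intro mult_left_mono terms_le) auto
  qed simp
  then show "norm ((\<lambda>(P, Q). a P Q * f P Q) x) \<le> coeff_weight r \<rho> a x * C"
    by (simp add: x coeff_weight_def mult_ac)
qed

lemma norm_eval_fts_diff_le_termwise:
  assumes an: "analytic_fts r \<rho> a"
    and X1: "\<forall>l. \<bar>Im (X1 l)\<bar> \<le> r" and Y1: "\<forall>j. cmod (Y1 j) \<le> \<rho>"
    and X2: "\<forall>l. \<bar>Im (X2 l)\<bar> \<le> r" and Y2: "\<forall>j. cmod (Y2 j) \<le> \<rho>"
    and terms_le: "\<And>P Q. a P Q \<noteq> 0 \<Longrightarrow>
      cmod (mono_term P Q X1 Y1 - mono_term P Q X2 Y2) \<le> exp (r * normP P) * \<rho> ^ degQ Q * C"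
  shows "cmod (eval_fts a X1 Y1 - eval_fts a X2 Y2) \<le> weighted_norm r \<rho> a * C"
proof (rule norm_le_weighted_norm_termwise[OF an _ terms_le])
  show "((\<lambda>(P, Q). a P Q * (mono_term P Q X1 Y1 - mono_term P Q X2 Y2))
      has_sum (eval_fts a X1 Y1 - eval_fts a X2 Y2)) UNIV"
    using has_sum_diff[OF analytic_fts_has_sum[OF an X1 Y1] analytic_fts_has_sum[OF an X2 Y2]]
    by (simp add: case_prod_unfold right_diff_distrib)
qed

lemma norm_eval_fts_le_order:
  assumes an: "analytic_fts r \<rho> a" and ord: "has_order ko a"
    and X: "\<forall>l. \<bar>Im (X l)\<bar> \<le> r" and Y: "\<forall>j. cmod (Y j) \<le> s" and s: "0 \<le> s" "s \<le> \<rho>"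
  shows "cmod (eval_fts a X Y) \<le> weighted_norm r \<rho> a * (s / \<rho>) ^ ko"
proof -
  have rho: "0 < \<rho>" using an by (simp add: analytic_fts_def)
  have Y': "\<forall>j. cmod (Y j) \<le> \<rho>" using Y s by (meson order_trans)
  show ?thesis
  proof (rule norm_le_weighted_norm_termwise[OF an analytic_fts_has_sum[OF an X Y']])
    fix P Q assume "a P Q \<noteq> 0"
    then have ko: "ko \<le> degQ Q" using ord by (meson has_order_def not_le)
    have "cmod (mono_term P Q X Y) \<le> exp (r * normP P) * s ^ degQ Q" by (rule norm_mono_term_le[OF X Y])
    also have "s ^ degQ Q = \<rho> ^ degQ Q * (s / \<rho>) ^ degQ Q" using rho by (simp add: power_divide)
    also have "exp (r * normP P) * \<dots> \<le> exp (r * normP P) * \<rho> ^ degQ Q * (s / \<rho>) ^ ko"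
      using ko rho s by (auto intro!: mult_left_mono power_decreasing simp: mult.assoc)
    finally show "cmod (mono_term P Q X Y) \<le> exp (r * normP P) * \<rho> ^ degQ Q * (s / \<rho>) ^ ko" .
  qed
qed

lemma norm_exp_i_diff_le:
  fixes w1 w2 :: complex
  assumes "\<bar>Im w1\<bar> \<le> B" "\<bar>Im w2\<bar> \<le> B"
  shows "cmod (exp (\<i> * w1) - exp (\<i> * w2)) \<le> exp B * cmod (w1 - w2)"
proof (rule field_differentiable_bound[where S = "closed_segment w2 w1" and f = "\<lambda>w. exp (\<i> * w)"
      and f' = "\<lambda>w. \<i> * exp (\<i> * w)"])
  show "convex (closed_segment w2 w1)" by simp
  show "w1 \<in> closed_segment w2 w1" "w2 \<in> closed_segment w2 w1" by auto
  fix z assume z: "z \<in> closed_segment w2 w1"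
  show "((\<lambda>w. exp (\<i> * w)) has_field_derivative \<i> * exp (\<i> * z)) (at z within closed_segment w2 w1)"
    by (auto intro!: derivative_eq_intros)
  obtain u where u: "0 \<le> u" "u \<le> 1" "z = (1 - u) *\<^sub>R w2 + u *\<^sub>R w1"
    using z by (auto simp: closed_segment_def)
  have "Im z = (1 - u) * Im w2 + u * Im w1" using u by simp
  then have "\<bar>Im z\<bar> \<le> (1 - u) * \<bar>Im w2\<bar> + u * \<bar>Im w1\<bar>"
    using u abs_triangle_ineq[of "(1 - u) * Im w2" "u * Im w1"] by (simp add: abs_mult)
  also have "\<dots> \<le> (1 - u) * B + u * B"
    using u assms by (intro add_mono mult_left_mono) auto
  finally have "\<bar>Im z\<bar> \<le> B" by (simp add: algebra_simps)
  then show "cmod (\<i> * exp (\<i> * z)) \<le> exp B"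
    by (simp add: norm_mult)
qed

lemma norm_prod_power_diff_le:
  fixes Y1 Y2 :: "'n::finite \<Rightarrow> complex"
  assumes s: "0 < s" and Y1: "\<forall>j. cmod (Y1 j) \<le> s" and Y2: "\<forall>j. cmod (Y2 j) \<le> s"
    and e: "\<forall>j. cmod (Y1 j - Y2 j) \<le> eY"
  shows "cmod ((\<Prod>j\<in>UNIV. Y1 j ^ Q j) - (\<Prod>j\<in>UNIV. Y2 j ^ Q j)) \<le> real (degQ Q) * s ^ (degQ Q - 1) * eY"
proof (cases "degQ Q = 0")
  case True
  then have "\<forall>j. Q j = 0" by (simp add: degQ_def)
  then show ?thesis using True by simp
next
  case False
  define z where "z j = Y1 j / of_real s" for j
  define w where "w j = Y2 j / of_real s" for j
  have zb: "cmod (z j) \<le> 1" for j using Y1 s by (simp add: z_def norm_divide)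
  have wb: "cmod (w j) \<le> 1" for j using Y2 s by (simp add: w_def norm_divide)
  have "cmod ((\<Prod>j\<in>UNIV. z j ^ Q j) - (\<Prod>j\<in>UNIV. w j ^ Q j)) \<le> (\<Sum>j\<in>UNIV. cmod (z j ^ Q j - w j ^ Q j))"
    by (rule norm_prod_diff) (auto intro: power_le_one zb wb simp: norm_power)
  also have "\<dots> \<le> (\<Sum>j\<in>UNIV. real (Q j) * (eY / s))"
  proof (rule sum_mono)
    fix j
    have "cmod (z j ^ Q j - w j ^ Q j) \<le> Q j * cmod (z j - w j)"
      by (rule norm_power_diff[OF zb wb])
    also have "cmod (z j - w j) = cmod (Y1 j - Y2 j) / s"
      using s by (simp add: z_def w_def diff_divide_distrib[symmetric] norm_divide)
    also have "\<dots> \<le> eY / s" using e s by (simp add: divide_right_mono)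
    finally show "cmod (z j ^ Q j - w j ^ Q j) \<le> real (Q j) * (eY / s)"
      by (simp add: mult_left_mono order_trans)
  qed
  also have "\<dots> = real (degQ Q) * (eY / s)" by (simp add: degQ_def sum_distrib_right sum_divide_distrib)
  finally have *: "cmod ((\<Prod>j\<in>UNIV. z j ^ Q j) - (\<Prod>j\<in>UNIV. w j ^ Q j)) \<le> real (degQ Q) * (eY / s)" .
  have Y1e: "(\<Prod>j\<in>UNIV. Y1 j ^ Q j) = of_real (s ^ degQ Q) * (\<Prod>j\<in>UNIV. z j ^ Q j)"
    using s by (simp add: z_def power_divide prod_dividef degQ_def power_sum prod.distrib[symmetric]
        flip: of_real_power of_real_prod)
  have Y2e: "(\<Prod>j\<in>UNIV. Y2 j ^ Q j) = of_real (s ^ degQ Q) * (\<Prod>j\<in>UNIV. w j ^ Q j)"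
    using s by (simp add: w_def power_divide prod_dividef degQ_def power_sum prod.distrib[symmetric]
        flip: of_real_power of_real_prod)
  have "cmod ((\<Prod>j\<in>UNIV. Y1 j ^ Q j) - (\<Prod>j\<in>UNIV. Y2 j ^ Q j))
      = s ^ degQ Q * cmod ((\<Prod>j\<in>UNIV. z j ^ Q j) - (\<Prod>j\<in>UNIV. w j ^ Q j))"
    using s by (simp add: Y1e Y2e right_diff_distrib[symmetric] norm_mult norm_power)
  also have "\<dots> \<le> s ^ degQ Q * (real (degQ Q) * (eY / s))"
    using * s by (intro mult_left_mono) auto
  also have "\<dots> = real (degQ Q) * s ^ (degQ Q - 1) * eY"
    using s False by (simp add: field_simps power_eq_if)
  finally show ?thesis .
qed



lemma mult_power_le_geometric:
  fixes q :: real
  assumes "0 \<le> q" "q < 1"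
  shows "real n * q ^ n \<le> 1 / (1 - q)"
proof -
  have "real n * q ^ n = (\<Sum>i<n. q ^ n)" by simp
  also have "\<dots> \<le> (\<Sum>i<n. q ^ i)" using assms by (intro sum_mono power_decreasing) auto
  also have "\<dots> = (1 - q ^ n) / (1 - q)" using assms by (simp add: sum_gp_strict)
  also have "\<dots> \<le> 1 / (1 - q)" using assms by (intro divide_right_mono) auto
  finally show ?thesis .
qed

lemma mult_exp_le:
  fixes x d r' :: real
  assumes "0 < d" "0 \<le> x"
  shows "x * exp (r' * x) \<le> exp ((r' + d) * x) / d"
proof -
  have "d * x \<le> exp (d * x)" using exp_ge_add_one_self[of "d*x"] by linarith
  then have "x \<le> exp (d * x) / d" using assms by (simp add: field_simps)
  then have "x * exp (r' * x) \<le> exp (d * x) / d * exp (r' * x)" by (intro mult_right_mono) auto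
  also have "\<dots> = exp ((r' + d) * x) / d" by (simp add: algebra_simps exp_add[symmetric])
  finally show ?thesis .
qed
lemma power_le_split:
  fixes s \<rho>' \<rho> :: real
  assumes "0 < s" "s \<le> \<rho>'" "\<rho>' \<le> \<rho>" "k \<le> n"
  shows "s ^ n \<le> s ^ k * (\<rho> ^ n / \<rho>' ^ k)"
proof -
  have r0: "0 < \<rho>'" using assms by linarith
  have "s ^ n = s ^ k * s ^ (n - k)" using assms by (simp add: power_add[symmetric])
  also have "\<dots> \<le> s ^ k * \<rho>' ^ (n - k)" using assms by (intro mult_left_mono power_mono) auto
  also have "\<rho>' ^ (n - k) = \<rho>' ^ n / \<rho>' ^ k" using assms r0 by (simp add: power_diff)
  also have "\<dots> \<le> \<rho> ^ n / \<rho>' ^ k" using assms r0 by (intro divide_right_mono power_mono) auto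
  finally show ?thesis using assms by (simp add: mult_left_mono)
qed

lemma mult_power_le_split:
  fixes s \<rho>' \<rho> :: real
  assumes "0 < s" "s \<le> \<rho>'" "\<rho>' < \<rho>" "1 \<le> k" "k \<le> n"
  shows "real n * s ^ (n - 1) \<le> s ^ (k - 1) * (\<rho> ^ n / ((1 - \<rho>' / \<rho>) * \<rho>' ^ k))"
proof -
  have r0: "0 < \<rho>'" "0 < \<rho>" using assms by linarith+
  have "s ^ (n - 1) = s ^ (k - 1) * s ^ (n - k)" using assms by (simp add: power_add[symmetric])
  also have "\<dots> \<le> s ^ (k - 1) * \<rho>' ^ (n - k)" using assms by (intro mult_left_mono power_mono) auto
  finally have a: "real n * s ^ (n - 1) \<le> s ^ (k - 1) * (real n * \<rho>' ^ (n - k))"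
    by (simp add: mult_left_mono mult.left_commute)
  have "real n * \<rho>' ^ (n - k) = (real n * (\<rho>' / \<rho>) ^ n) * \<rho> ^ n / \<rho>' ^ k"
    using assms r0 by (simp add: power_diff power_divide)
  also have "\<dots> \<le> (1 / (1 - \<rho>' / \<rho>)) * \<rho> ^ n / \<rho>' ^ k"
    using r0 assms by (intro divide_right_mono mult_right_mono mult_power_le_geometric) auto
  finally have b: "real n * \<rho>' ^ (n - k) \<le> \<rho> ^ n / ((1 - \<rho>' / \<rho>) * \<rho>' ^ k)" by simp
  show ?thesis using a b by (meson mult_left_mono order_trans zero_le_power assms(1) less_imp_le)
qed

lemma norm_mono_term_diff_le:
  assumes X1: "\<forall>l. \<bar>Im (X1 l)\<bar> \<le> r'" and X2: "\<forall>l. \<bar>Im (X2 l)\<bar> \<le> r'"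
    and s: "0 < s" and Y1: "\<forall>j. cmod (Y1 j) \<le> s" and Y2: "\<forall>j. cmod (Y2 j) \<le> s"
    and eX: "\<forall>l. cmod (X1 l - X2 l) \<le> eX" and eY: "\<forall>j. cmod (Y1 j - Y2 j) \<le> eY"
  shows "cmod (mono_term P Q X1 Y1 - mono_term P Q X2 Y2)
     \<le> exp (r' * normP P) * (normP P * eX * s ^ degQ Q + real (degQ Q) * s ^ (degQ Q - 1) * eY)"
proof -
  have eX0: "0 \<le> eX" using eX[rule_format, of undefined] norm_ge_zero order_trans by blast
  define w1 where "w1 = (\<Sum>l\<in>UNIV. of_int (P l) * X1 l)"
  define w2 where "w2 = (\<Sum>l\<in>UNIV. of_int (P l) * X2 l)"
  define p1 where "p1 = (\<Prod>j\<in>UNIV. Y1 j ^ Q j)"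
  define p2 where "p2 = (\<Prod>j\<in>UNIV. Y2 j ^ Q j)"
  have "cmod (w1 - w2) = cmod (\<Sum>l\<in>UNIV. of_int (P l) * (X1 l - X2 l))"
    by (simp add: w1_def w2_def sum_subtractf right_diff_distrib)
  also have "\<dots> \<le> (\<Sum>l\<in>UNIV. \<bar>real_of_int (P l)\<bar> * eX)"
    using eX by (intro order_trans[OF norm_sum] sum_mono) (simp add: norm_mult mult_left_mono)
  finally have "cmod (w1 - w2) \<le> normP P * eX" by (simp add: normP_def sum_distrib_right)
  then have e1: "cmod (exp (\<i> * w1) - exp (\<i> * w2)) \<le> exp (r' * normP P) * (normP P * eX)"
    using norm_exp_i_diff_le[OF abs_Im_sum_le[OF X1] abs_Im_sum_le[OF X2], of P]
    unfolding w1_def w2_def by (meson exp_ge_zero mult_left_mono order_trans)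
  have e2: "cmod (exp (\<i> * w2)) \<le> exp (r' * normP P)"
    using abs_Im_sum_le[OF X2, of P] unfolding w2_def by simp
  have "mono_term P Q X1 Y1 - mono_term P Q X2 Y2 = (exp (\<i> * w1) - exp (\<i> * w2)) * p1 + exp (\<i> * w2) * (p1 - p2)"
    by (simp add: mono_term_def w1_def w2_def p1_def p2_def algebra_simps)
  then have "cmod (mono_term P Q X1 Y1 - mono_term P Q X2 Y2)
      \<le> cmod (exp (\<i> * w1) - exp (\<i> * w2)) * cmod p1 + cmod (exp (\<i> * w2)) * cmod (p1 - p2)"
    by (metis norm_mult norm_triangle_ineq)
  also have "\<dots> \<le> exp (r' * normP P) * (normP P * eX) * s ^ degQ Q
      + exp (r' * normP P) * (real (degQ Q) * s ^ (degQ Q - 1) * eY)"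
    using e1 e2 norm_prod_power_le[OF Y1, of Q] norm_prod_power_diff_le[OF s Y1 Y2 eY, of Q]
    unfolding p1_def p2_def using eX0 normP_nonneg[of P] by (intro add_mono mult_mono) auto
  finally show ?thesis by (simp add: algebra_simps)
qed

lemma mono_term_diff_le_weight:
  assumes r: "r' < r" and rho: "\<rho>' < \<rho>" and s: "0 < s" "s \<le> \<rho>'"
    and ko: "1 \<le> ko" "ko \<le> degQ Q" and eX: "0 \<le> eX" and eY: "0 \<le> eY"
  shows "exp (r' * normP P) * (normP P * eX * s ^ degQ Q + real (degQ Q) * s ^ (degQ Q - 1) * eY)
    \<le> exp (r * normP P) * \<rho> ^ degQ Q *
       (s ^ ko * eX / ((r - r') * \<rho>' ^ ko) + s ^ (ko - 1) * eY / ((1 - \<rho>' / \<rho>) * \<rho>' ^ ko))"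
proof -
  have X: "exp (r' * normP P) * normP P * s ^ degQ Q
      \<le> exp (r * normP P) * \<rho> ^ degQ Q * (s ^ ko / ((r - r') * \<rho>' ^ ko))"
  proof -
    have "normP P * exp (r' * normP P) \<le> exp ((r' + (r - r')) * normP P) / (r - r')"
      using r by (intro mult_exp_le normP_nonneg) auto
    moreover have "s ^ degQ Q \<le> s ^ ko * (\<rho> ^ degQ Q / \<rho>' ^ ko)"
      using ko s rho by (intro power_le_split) auto
    ultimately have "exp (r' * normP P) * normP P * s ^ degQ Q
        \<le> exp (r * normP P) / (r - r') * (s ^ ko * (\<rho> ^ degQ Q / \<rho>' ^ ko))"
      using r s normP_nonneg[of P] by (intro mult_mono) (auto simp: mult.commute)
    then show ?thesis by (simp add: field_simps)
  qed
  have Y: "exp (r' * normP P) * (real (degQ Q) * s ^ (degQ Q - 1))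
      \<le> exp (r * normP P) * \<rho> ^ degQ Q * (s ^ (ko - 1) / ((1 - \<rho>' / \<rho>) * \<rho>' ^ ko))"
  proof -
    have e: "exp (r' * normP P) \<le> exp (r * normP P)" using r normP_nonneg[of P] by (simp add: mult_right_mono)
    have p: "real (degQ Q) * s ^ (degQ Q - 1) \<le> s ^ (ko - 1) * (\<rho> ^ degQ Q / ((1 - \<rho>' / \<rho>) * \<rho>' ^ ko))"
      using ko s rho by (intro mult_power_le_split) auto
    have "exp (r' * normP P) * (real (degQ Q) * s ^ (degQ Q - 1))
        \<le> exp (r * normP P) * (s ^ (ko - 1) * (\<rho> ^ degQ Q / ((1 - \<rho>' / \<rho>) * \<rho>' ^ ko)))"
      by (rule mult_mono[OF e p]) (use s in auto)
    then show ?thesis by (simp add: field_simps)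
  qed
  show ?thesis
    using mult_right_mono[OF X eX] mult_right_mono[OF Y eY] by (simp add: algebra_simps)
qed

lemma norm_eval_fts_diff_le:
  assumes an: "analytic_fts r \<rho> a" and ord: "has_order ko a" and ko: "1 \<le> ko"
    and rr: "r' < r" and rho': "\<rho>' < \<rho>" and s: "0 < s" "s \<le> \<rho>'"
    and X1: "\<forall>l. \<bar>Im (X1 l)\<bar> \<le> r'" and X2: "\<forall>l. \<bar>Im (X2 l)\<bar> \<le> r'"
    and Y1: "\<forall>j. cmod (Y1 j) \<le> s" and Y2: "\<forall>j. cmod (Y2 j) \<le> s"
    and eX: "\<forall>l. cmod (X1 l - X2 l) \<le> eX" and eY: "\<forall>j. cmod (Y1 j - Y2 j) \<le> eY"
  shows "cmod (eval_fts a X1 Y1 - eval_fts a X2 Y2)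
    \<le> weighted_norm r \<rho> a * (s ^ ko * eX / ((r - r') * \<rho>' ^ ko) + s ^ (ko - 1) * eY / ((1 - \<rho>' / \<rho>) * \<rho>' ^ ko))"
proof (rule norm_eval_fts_diff_le_termwise[OF an])
  have eX0: "0 \<le> eX" and eY0: "0 \<le> eY"
    using eX[rule_format, of undefined] eY[rule_format, of undefined] norm_ge_zero order_trans by blast+
  show "\<forall>l. \<bar>Im (X1 l)\<bar> \<le> r" "\<forall>l. \<bar>Im (X2 l)\<bar> \<le> r"
    using X1 X2 rr by (meson less_imp_le order_trans)+
  show "\<forall>j. cmod (Y1 j) \<le> \<rho>" "\<forall>j. cmod (Y2 j) \<le> \<rho>"
    using Y1 Y2 s rho' by (meson less_imp_le order_trans)+
  fix P Q assume "a P Q \<noteq> 0"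
  then have "ko \<le> degQ Q" using ord by (meson has_order_def not_le)
  then show "cmod (mono_term P Q X1 Y1 - mono_term P Q X2 Y2) \<le> exp (r * normP P) * \<rho> ^ degQ Q *
      (s ^ ko * eX / ((r - r') * \<rho>' ^ ko) + s ^ (ko - 1) * eY / ((1 - \<rho>' / \<rho>) * \<rho>' ^ ko))"
    using norm_mono_term_diff_le[OF X1 X2 s(1) Y1 Y2 eX eY, of P Q]
      mono_term_diff_le_weight[OF rr rho' s ko _ eX0 eY0] by (meson order_trans)
qed

lemma norm_eval_fts_diff_X_le:
  assumes an: "analytic_fts r \<rho> a" and rr: "r' < r"
    and X1: "\<forall>l. \<bar>Im (X1 l)\<bar> \<le> r'" and X2: "\<forall>l. \<bar>Im (X2 l)\<bar> \<le> r'" and Y: "\<forall>j. cmod (Y j) \<le> \<rho>"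
    and eX: "\<forall>l. cmod (X1 l - X2 l) \<le> eX"
  shows "cmod (eval_fts a X1 Y - eval_fts a X2 Y) \<le> weighted_norm r \<rho> a * (eX / (r - r'))"
proof (rule norm_eval_fts_diff_le_termwise[OF an _ Y _ Y])
  have rho0: "0 < \<rho>" using an by (simp add: analytic_fts_def)
  have eX0: "0 \<le> eX" using eX[rule_format, of undefined] norm_ge_zero order_trans by blast
  show "\<forall>l. \<bar>Im (X1 l)\<bar> \<le> r" "\<forall>l. \<bar>Im (X2 l)\<bar> \<le> r"
    using X1 X2 rr by (meson less_imp_le order_trans)+
  fix P :: "'a \<Rightarrow> int" and Q :: "'b \<Rightarrow> nat"
  have "exp (r' * normP P) * normP P \<le> exp (r * normP P) / (r - r')"
    using mult_exp_le[of "r - r'" "normP P" r'] rr normP_nonneg[of P] by (simp add: mult.commute)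
  then have "exp (r' * normP P) * normP P * (eX * \<rho> ^ degQ Q) \<le> exp (r * normP P) / (r - r') * (eX * \<rho> ^ degQ Q)"
    using eX0 rho0 by (intro mult_right_mono) auto
  then show "cmod (mono_term P Q X1 Y - mono_term P Q X2 Y) \<le> exp (r * normP P) * \<rho> ^ degQ Q * (eX / (r - r'))"
    using norm_mono_term_diff_le[OF X1 X2 rho0 Y Y eX, of 0 P Q] by (simp add: field_simps)
qed

lemma norm_eval_fts_diff_Y0_le:
  assumes an: "analytic_fts r \<rho> a" and X: "\<forall>l. \<bar>Im (X l)\<bar> \<le> r"
    and Y: "\<forall>j. cmod (Y j) \<le> s" and s: "0 \<le> s" "s \<le> \<rho>"
  shows "cmod (eval_fts a X Y - eval_fts a X (\<lambda>_. 0)) \<le> weighted_norm r \<rho> a * (s / \<rho>)"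
proof (rule norm_eval_fts_diff_le_termwise[OF an X _ X])
  have rho0: "0 < \<rho>" using an by (simp add: analytic_fts_def)
  show "\<forall>j. cmod (Y j) \<le> \<rho>" using Y s by (meson order_trans)
  show "\<forall>j. cmod ((\<lambda>_. 0::complex) j) \<le> \<rho>" using rho0 by simp
  fix P Q
  show "cmod (mono_term P Q X Y - mono_term P Q X (\<lambda>_. 0)) \<le> exp (r * normP P) * \<rho> ^ degQ Q * (s / \<rho>)"
  proof (cases "degQ Q = 0")
    case True
    then show ?thesis using rho0 s by (simp add: mono_term_def degQ_def)
  next
    case False
    then have "mono_term P Q X (\<lambda>_. 0) = 0" by (auto simp: mono_term_def degQ_def prod_zero_iff)
    moreover have "s ^ degQ Q \<le> \<rho> ^ degQ Q * (s / \<rho>)"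
    proof -
      have "s ^ degQ Q = \<rho> ^ degQ Q * (s / \<rho>) ^ degQ Q" using rho0 by (simp add: power_divide)
      also have "\<dots> \<le> \<rho> ^ degQ Q * (s / \<rho>) ^ 1"
        using False rho0 s by (intro mult_left_mono power_decreasing) auto
      finally show ?thesis by simp
    qed
    ultimately have "cmod (mono_term P Q X Y - mono_term P Q X (\<lambda>_. 0)) \<le> exp (r * normP P) * s ^ degQ Q"
      using norm_mono_term_le[OF X Y, of P Q] by simp
    also have "\<dots> \<le> exp (r * normP P) * (\<rho> ^ degQ Q * (s / \<rho>))"
      using \<open>s ^ degQ Q \<le> \<rho> ^ degQ Q * (s / \<rho>)\<close> by (rule mult_left_mono) simp
    finally show ?thesis by (simp add: mult.assoc)
  qed
qed

section \<open>A discrete Cauchy estimate\<close>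

definition unit_root :: "nat \<Rightarrow> int \<Rightarrow> nat \<Rightarrow> complex" where
  "unit_root N K x = exp (2 * of_real pi * \<i> * of_int K * of_nat x / of_nat N)"

lemma sum_unit_root:
  assumes N: "0 < N"
  shows "(\<Sum>x<N. unit_root N K x) = (if int N dvd K then of_nat N else 0)"
proof -
  define z where "z = exp (2 * of_real pi * \<i> * of_int K / of_nat N)"
  have Ez: "unit_root N K x = z ^ x" for x
    unfolding unit_root_def z_def by (simp add: exp_of_nat_mult[symmetric] field_simps)
  have zN: "z ^ N = 1"
  proof -
    have eq: "of_nat N * (2 * of_real pi * \<i> * of_int K / of_nat N) = \<i> * (of_int K * (of_real pi * 2))"
      using N by (simp add: field_simps)
    have "z ^ N = exp (of_nat N * (2 * of_real pi * \<i> * of_int K / of_nat N))"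
      unfolding z_def by (rule exp_of_nat_mult[symmetric])
    also have "\<dots> = exp (\<i> * (of_int K * (of_real pi * 2)))" by (simp only: eq)
    also have "\<dots> = 1" by (rule exp_2pi_1_int)
    finally show ?thesis .
  qed
  show ?thesis
  proof (cases "int N dvd K")
    case True
    then obtain m where m: "K = int N * m" by (auto elim: dvdE)
    have "z = exp (\<i> * (of_int m * (of_real pi * 2)))" using N by (simp add: z_def m field_simps)
    also have "\<dots> = 1" by (rule exp_2pi_1_int)
    finally have "z = 1" .
    then show ?thesis using True by (simp add: Ez)
  next
    case False
    have z1: "z \<noteq> 1"
    proof
      assume "z = 1"
      then obtain n where n: "Im (2 * of_real pi * \<i> * of_int K / of_nat N) = real_of_int (2 * n) * pi"
        unfolding z_def exp_eq_1 by blast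
      have "2 * pi * real_of_int K / real N = real_of_int (2 * n) * pi" using n by simp
      then have "real_of_int K = real_of_int (n * int N)" using N by (simp add: field_simps)
      then have "K = n * int N" by linarith
      then show False using False by simp
    qed
    have "(\<Sum>x<N. z ^ x) = (1 - z ^ N) / (1 - z)" using z1 by (simp add: sum_gp_strict)
    then show ?thesis using False zN by (simp add: Ez)
  qed
qed

definition grid :: "nat \<Rightarrow> ('a \<Rightarrow> nat) set" where
  "grid N = PiE UNIV (\<lambda>_. {..<N})"

definition grid_X :: "nat \<Rightarrow> ('d \<Rightarrow> nat) \<Rightarrow> 'd \<Rightarrow> complex" where
  "grid_X N u = (\<lambda>l. of_real (2 * pi * real (u l) / real N))"

definition grid_Y :: "nat \<Rightarrow> real \<Rightarrow> ('n \<Rightarrow> nat) \<Rightarrow> 'n \<Rightarrow> complex" where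
  "grid_Y N \<epsilon> v = (\<lambda>j. of_real \<epsilon> * unit_root N 1 (v j))"

definition grid_char :: "nat \<Rightarrow> ('d::finite \<Rightarrow> int) \<Rightarrow> ('n::finite \<Rightarrow> nat) \<Rightarrow> ('d \<Rightarrow> nat) \<Rightarrow> ('n \<Rightarrow> nat) \<Rightarrow> complex" where
  "grid_char N P0 Q0 u v = (\<Prod>l\<in>UNIV. unit_root N (- P0 l) (u l)) * (\<Prod>j\<in>UNIV. unit_root N (- int (Q0 j)) (v j))"

text \<open>The indices that the grid of mesh \<open>N\<close> cannot distinguish from \<open>(P0, Q0)\<close>.\<close>

definition aliases :: "nat \<Rightarrow> ('d::finite \<Rightarrow> int) \<Rightarrow> ('n::finite \<Rightarrow> nat) \<Rightarrow> (('d \<Rightarrow> int) \<times> ('n \<Rightarrow> nat)) set" where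
  "aliases N P0 Q0 = {(P, Q). (\<forall>l. int N dvd P l - P0 l) \<and> (\<forall>j. int N dvd int (Q j) - int (Q0 j))}"

lemma unit_root_mult: "unit_root N a x * unit_root N b x = unit_root N (a + b) x"
  by (simp add: unit_root_def exp_add[symmetric] field_simps add_divide_distrib)

lemma unit_root_power: "unit_root N 1 x ^ q = unit_root N (int q) x"
  by (simp add: unit_root_def exp_of_nat_mult[symmetric] field_simps)

lemma norm_unit_root: "cmod (unit_root N K x) = 1"
  by (simp add: unit_root_def)

lemma finite_grid: "finite (grid N :: ('a::finite \<Rightarrow> nat) set)"
  by (simp add: grid_def finite_PiE)

lemma card_grid: "card (grid N :: ('a::finite \<Rightarrow> nat) set) = N ^ CARD('a)"
  by (simp add: grid_def card_PiE)

lemma sum_grid_unit_root: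
  fixes K :: "'a::finite \<Rightarrow> int"
  assumes N: "0 < N"
  shows "(\<Sum>u\<in>grid N. \<Prod>l\<in>UNIV. unit_root N (K l) (u l))
    = (if \<forall>l. int N dvd K l then of_nat N ^ CARD('a) else 0)"
proof -
  have "(\<Sum>u\<in>grid N. \<Prod>l\<in>UNIV. unit_root N (K l) (u l)) = (\<Prod>l\<in>UNIV. \<Sum>x<N. unit_root N (K l) x)"
    unfolding grid_def by (rule prod_sum_PiE[symmetric]) auto
  also have "\<dots> = (\<Prod>l\<in>(UNIV::'a set). if int N dvd K l then of_nat N else 0)"
    using N by (simp add: sum_unit_root)
  also have "\<dots> = (if \<forall>l. int N dvd K l then of_nat N ^ CARD('a) else 0)"
    by (auto simp: prod_zero_iff)
  finally show ?thesis .
qed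

lemma Im_grid_X: "Im (grid_X N u l) = 0"
  by (simp add: grid_X_def)

lemma norm_grid_Y: "0 \<le> \<epsilon> \<Longrightarrow> cmod (grid_Y N \<epsilon> v j) = \<epsilon>"
  by (simp add: grid_Y_def norm_mult norm_unit_root)

lemma norm_grid_char: "cmod (grid_char N P0 Q0 u v) = 1"
  by (simp add: grid_char_def norm_mult prod_norm[symmetric] norm_unit_root)

lemma mono_term_grid:
  "mono_term P Q (grid_X N u) (grid_Y N \<epsilon> v) * grid_char N P0 Q0 u v
   = of_real (\<epsilon> ^ degQ Q) * ((\<Prod>l\<in>UNIV. unit_root N (P l - P0 l) (u l)) * (\<Prod>j\<in>UNIV. unit_root N (int (Q j) - int (Q0 j)) (v j)))"
proof -
  have "exp (\<i> * (\<Sum>l\<in>UNIV. of_int (P l) * grid_X N u l)) = (\<Prod>l\<in>UNIV. exp (\<i> * (of_int (P l) * grid_X N u l)))"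
    by (simp add: sum_distrib_left exp_sum)
  also have "\<dots> = (\<Prod>l\<in>UNIV. unit_root N (P l) (u l))"
    by (rule prod.cong) (auto simp: unit_root_def grid_X_def field_simps)
  finally have X: "exp (\<i> * (\<Sum>l\<in>UNIV. of_int (P l) * grid_X N u l)) = (\<Prod>l\<in>UNIV. unit_root N (P l) (u l))" .
  have Y: "(\<Prod>j\<in>UNIV. grid_Y N \<epsilon> v j ^ Q j) = of_real (\<epsilon> ^ degQ Q) * (\<Prod>j\<in>UNIV. unit_root N (int (Q j)) (v j))"
    by (simp add: grid_Y_def power_mult_distrib prod.distrib unit_root_power degQ_def power_sum
        flip: of_real_power of_real_prod)
  show ?thesis
    by (simp add: mono_term_def X Y grid_char_def prod.distrib[symmetric] unit_root_mult mult_ac)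
qed

lemma has_sum_grid_average:
  fixes d :: "('d::finite, 'n::finite) fts"
  assumes N: "0 < N"
    and rep: "\<And>u v. ((\<lambda>(P, Q). d P Q * mono_term P Q (grid_X N u) (grid_Y N \<epsilon> v)) has_sum h u v) UNIV"
  shows "((\<lambda>(P, Q). if (P, Q) \<in> aliases N P0 Q0 then d P Q * of_real (\<epsilon> ^ degQ Q) else 0) has_sum
      (\<Sum>u\<in>grid N. \<Sum>v\<in>grid N. h u v * grid_char N P0 Q0 u v) / of_nat N ^ (CARD('d) + CARD('n))) UNIV"
proof -
  define NN :: complex where "NN = of_nat N ^ (CARD('d) + CARD('n))"
  have "(\<Sum>u\<in>grid N. \<Sum>v\<in>grid N. d P Q * mono_term P Q (grid_X N u) (grid_Y N \<epsilon> v) * grid_char N P0 Q0 u v)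
      = NN * (if (P, Q) \<in> aliases N P0 Q0 then d P Q * of_real (\<epsilon> ^ degQ Q) else 0)" for P Q
  proof -
    have "(\<Sum>u\<in>grid N. \<Sum>v\<in>grid N. d P Q * mono_term P Q (grid_X N u) (grid_Y N \<epsilon> v) * grid_char N P0 Q0 u v)
      = d P Q * of_real (\<epsilon> ^ degQ Q) * ((\<Sum>u\<in>grid N. \<Prod>l\<in>UNIV. unit_root N (P l - P0 l) (u l))
          * (\<Sum>v\<in>grid N. \<Prod>j\<in>UNIV. unit_root N (int (Q j) - int (Q0 j)) (v j)))"
      unfolding mult.assoc mono_term_grid sum_product by (simp add: sum_distrib_left mult_ac)
    also have "\<dots> = NN * (if (P, Q) \<in> aliases N P0 Q0 then d P Q * of_real (\<epsilon> ^ degQ Q) else 0)"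
      by (simp add: sum_grid_unit_root[OF N] aliases_def NN_def power_add)
    finally show ?thesis .
  qed
  moreover have "((\<lambda>x. \<Sum>u\<in>grid N. \<Sum>v\<in>grid N. (\<lambda>(P, Q). d P Q * mono_term P Q (grid_X N u) (grid_Y N \<epsilon> v)) x * grid_char N P0 Q0 u v)
      has_sum (\<Sum>u\<in>grid N. \<Sum>v\<in>grid N. h u v * grid_char N P0 Q0 u v)) UNIV"
    by (intro has_sum_sum finite_grid has_sum_cmult_left rep)
  ultimately have "((\<lambda>x. NN * (\<lambda>(P, Q). if (P, Q) \<in> aliases N P0 Q0 then d P Q * of_real (\<epsilon> ^ degQ Q) else 0) x)
      has_sum (\<Sum>u\<in>grid N. \<Sum>v\<in>grid N. h u v * grid_char N P0 Q0 u v)) UNIV"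
    by (simp add: case_prod_unfold)
  from has_sum_divide_const[OF this, of NN] N show ?thesis by (simp add: NN_def)
qed

lemma zero_if_dvd_abs_less:
  fixes k :: int assumes "int N dvd k" "\<bar>k\<bar> < int N" shows "k = 0"
  using assms dvd_imp_le_int[of k "int N"] by (cases "k = 0") auto

lemma aliases_separate:
  assumes "finite F"
  obtains N where "0 < N" "\<And>x. x \<in> aliases N P0 Q0 \<Longrightarrow> x \<in> F \<Longrightarrow> x = (P0, Q0)"
proof
  define dist0 where "dist0 x = (\<Sum>l\<in>UNIV. nat \<bar>fst x l - P0 l\<bar>) + (\<Sum>j\<in>UNIV. nat \<bar>int (snd x j) - int (Q0 j)\<bar>)"
    for x :: "('a \<Rightarrow> int) \<times> ('b \<Rightarrow> nat)"
  define N where "N = Suc (\<Sum>x\<in>F. dist0 x)"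
  show "0 < N" by (simp add: N_def)
  fix x assume al: "x \<in> aliases N P0 Q0" and xF: "x \<in> F"
  obtain P Q where x: "x = (P, Q)" by (cases x)
  have "dist0 x < N" using member_le_sum[OF xF, of dist0] assms by (simp add: N_def)
  then have "\<bar>P l - P0 l\<bar> < int N" "\<bar>int (Q j) - int (Q0 j)\<bar> < int N" for l j
    using member_le_sum[of l UNIV "\<lambda>l. nat \<bar>P l - P0 l\<bar>"]
      member_le_sum[of j UNIV "\<lambda>j. nat \<bar>int (Q j) - int (Q0 j)\<bar>"]
    by (auto simp: dist0_def x)
  with al have "P l = P0 l" "Q j = Q0 j" for l j
    using zero_if_dvd_abs_less[of N "P l - P0 l"] zero_if_dvd_abs_less[of N "int (Q j) - int (Q0 j)"]
    by (auto simp: aliases_def x)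
  then show "x = (P0, Q0)" by (auto simp: x)
qed

text \<open>The grid average of \<open>h\<close> against the character of \<open>(P0, Q0)\<close> recovers the coefficient
  up to the aliased indices, whose contribution is an arbitrarily small tail.\<close>

lemma summable_on_tail_small:
  fixes w :: "'a \<Rightarrow> real"
  assumes "w summable_on UNIV" "0 < e"
  obtains F where "finite F" "w summable_on (UNIV - F)" "infsum w (UNIV - F) \<le> e"
proof -
  obtain F where F: "finite F" "dist (sum w F) (infsum w UNIV) \<le> e"
    using infsum_finite_approximation[OF assms] by auto
  have wsF: "w summable_on (UNIV - F)" by (rule summable_on_subset_banach[OF assms(1)]) auto
  have "infsum w UNIV = infsum w (F \<union> (UNIV - F))" by simp
  also have "\<dots> = infsum w F + infsum w (UNIV - F)"
    by (rule infsum_Un_disjoint) (use F wsF in auto)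
  finally have "infsum w (UNIV - F) \<le> e" using F by (simp add: dist_real_def)
  with F(1) wsF that show ?thesis by blast
qed

lemma cauchy_estimate:
  fixes d :: "('d::finite, 'n::finite) fts"
  assumes \<epsilon>: "0 < \<epsilon>"
    and rep: "\<And>X Y. \<forall>l. Im (X l) = 0 \<Longrightarrow> \<forall>j. cmod (Y j) = \<epsilon> \<Longrightarrow>
       ((\<lambda>(P, Q). d P Q * mono_term P Q X Y) has_sum h X Y) UNIV"
    and bd: "\<And>X Y. \<forall>l. Im (X l) = 0 \<Longrightarrow> \<forall>j. cmod (Y j) = \<epsilon> \<Longrightarrow> cmod (h X Y) \<le> B"
  shows "cmod (d P0 Q0) * \<epsilon> ^ degQ Q0 \<le> B"
proof (rule field_le_epsilon)
  fix e :: real assume e: "0 < e"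
  define w where "w = (\<lambda>(P, Q). cmod (d P Q) * \<epsilon> ^ degQ Q)"
  have w0: "0 \<le> w x" for x using \<epsilon> by (auto simp: w_def split: prod.splits)
  have ws: "w summable_on UNIV"
  proof -
    define X0 :: "'d \<Rightarrow> complex" where "X0 = (\<lambda>_. 0)"
    define Y0 :: "'n \<Rightarrow> complex" where "Y0 = (\<lambda>_. of_real \<epsilon>)"
    have X0: "\<forall>l. Im (X0 l) = 0" and Y0: "\<forall>j. cmod (Y0 j) = \<epsilon>" using \<epsilon> by (simp_all add: X0_def Y0_def)
    have "(\<lambda>x. norm ((\<lambda>(P, Q). d P Q * mono_term P Q X0 Y0) x)) summable_on UNIV"
      using has_sum_imp_summable[OF rep[OF X0 Y0]] summable_on_iff_abs_summable_on_complex by blast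
    moreover have "(\<lambda>x. norm ((\<lambda>(P, Q). d P Q * mono_term P Q X0 Y0) x)) = w"
      using norm_mono_term_real[OF X0 Y0] by (auto simp: w_def norm_mult)
    ultimately show ?thesis by simp
  qed
  obtain F where F: "finite F" and wsF: "w summable_on (UNIV - F)" and tail: "infsum w (UNIV - F) \<le> e"
    using summable_on_tail_small[OF ws e] by blast
  obtain N where N: "0 < N" and sep: "\<And>x. x \<in> aliases N P0 Q0 \<Longrightarrow> x \<in> F \<Longrightarrow> x = (P0, Q0)"
    using aliases_separate[OF F(1)] by blast
  define avg where "avg = (\<Sum>u\<in>grid N. \<Sum>v\<in>grid N. h (grid_X N u) (grid_Y N \<epsilon> v) * grid_char N P0 Q0 u v)
    / of_nat N ^ (CARD('d) + CARD('n))"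
  define c0 where "c0 = d P0 Q0 * of_real (\<epsilon> ^ degQ Q0)"
  have grid_pt: "\<forall>l. Im (grid_X N u l) = 0" "\<forall>j. cmod (grid_Y N \<epsilon> v j) = \<epsilon>" for u v
    using \<epsilon> by (simp_all add: Im_grid_X norm_grid_Y)
  have "cmod avg \<le> B"
  proof -
    have "cmod (\<Sum>u\<in>grid N. \<Sum>v\<in>grid N. h (grid_X N u) (grid_Y N \<epsilon> v) * grid_char N P0 Q0 u v)
        \<le> (\<Sum>u\<in>(grid N :: ('d \<Rightarrow> nat) set). \<Sum>v\<in>(grid N :: ('n \<Rightarrow> nat) set). B)"
      by (intro order_trans[OF norm_sum sum_mono] order_trans[OF norm_sum sum_mono])
         (simp add: norm_mult norm_grid_char bd grid_pt)
    moreover have "cmod (of_nat N ^ (CARD('d) + CARD('n)) :: complex) = real N ^ (CARD('d) + CARD('n))"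
      by (simp only: norm_power norm_of_nat)
    ultimately show ?thesis using N by (simp add: avg_def card_grid norm_divide power_add field_simps)
  qed
  moreover have "cmod (avg - c0) \<le> infsum w (UNIV - F)"
  proof (rule norm_infsum_le)
    show "((\<lambda>x. (\<lambda>(P, Q). if (P, Q) \<in> aliases N P0 Q0 then d P Q * of_real (\<epsilon> ^ degQ Q) else 0) x
        - (if x = (P0, Q0) then c0 else 0)) has_sum avg - c0) UNIV"
      unfolding avg_def by (intro has_sum_diff has_sum_delta has_sum_grid_average[OF N] rep grid_pt)
    show "((\<lambda>x. if x \<in> F then 0 else w x) has_sum infsum w (UNIV - F)) UNIV"
    proof (rule has_sum_cong_neutral[THEN iffD1, rotated -1])
      show "(w has_sum infsum w (UNIV - F)) (UNIV - F)" using wsF by simp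
    qed auto
    fix x :: "('d \<Rightarrow> int) \<times> ('n \<Rightarrow> nat)"
    obtain P Q where x: "x = (P, Q)" by (cases x)
    have "(P0, Q0) \<in> aliases N P0 Q0" by (simp add: aliases_def)
    then show "norm ((\<lambda>(P, Q). if (P, Q) \<in> aliases N P0 Q0 then d P Q * of_real (\<epsilon> ^ degQ Q) else 0) x
        - (if x = (P0, Q0) then c0 else 0)) \<le> (if x \<in> F then 0 else w x)"
      using sep[of x] w0[of x] \<epsilon> by (auto simp: x c0_def w_def norm_mult norm_power)
  qed
  ultimately have "cmod c0 \<le> B + e"
    using tail norm_triangle_ineq2[of c0 avg] norm_minus_commute[of c0 avg] by linarith
  then show "cmod (d P0 Q0) * \<epsilon> ^ degQ Q0 \<le> B + e"
    using \<epsilon> by (simp add: c0_def norm_mult norm_power)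
qed

lemma coeff_zero_if_small:
  fixes d :: "('d::finite, 'n::finite) fts"
  assumes \<delta>: "0 < \<delta>"
    and rep: "\<And>\<epsilon> X Y. 0 < \<epsilon> \<Longrightarrow> \<epsilon> \<le> \<delta> \<Longrightarrow> \<forall>l. Im (X l) = 0 \<Longrightarrow> \<forall>j. cmod (Y j) = \<epsilon> \<Longrightarrow>
           ((\<lambda>(P, Q). d P Q * mono_term P Q X Y) has_sum h X Y) UNIV"
    and bd: "\<And>\<epsilon> X Y. 0 < \<epsilon> \<Longrightarrow> \<epsilon> \<le> \<delta> \<Longrightarrow> \<forall>l. Im (X l) = 0 \<Longrightarrow> \<forall>j. cmod (Y j) = \<epsilon> \<Longrightarrow>
           cmod (h X Y) \<le> C * \<epsilon> ^ M"
    and deg: "degQ Q0 < M"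
  shows "d P0 Q0 = 0"
proof (rule ccontr)
  assume "d P0 Q0 \<noteq> 0"
  then have a: "0 < cmod (d P0 Q0)" by simp
  define q where "q = min \<delta> (min 1 (cmod (d P0 Q0) / (\<bar>C\<bar> + 1)))"
  define \<epsilon> where "\<epsilon> = q / 2"
  have q: "0 < q" "q \<le> \<delta>" "q \<le> 1" "q \<le> cmod (d P0 Q0) / (\<bar>C\<bar> + 1)"
    using \<delta> a by (auto simp: q_def)
  then have "(\<bar>C\<bar> + 1) * q \<le> cmod (d P0 Q0)"
    by (simp add: field_simps add_pos_nonneg)
  have "(\<bar>C\<bar> + 1) * \<epsilon> = ((\<bar>C\<bar> + 1) * q) / 2" by (simp add: \<epsilon>_def)
  with \<open>(\<bar>C\<bar> + 1) * q \<le> cmod (d P0 Q0)\<close> a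
  have "(\<bar>C\<bar> + 1) * \<epsilon> < cmod (d P0 Q0)" by linarith
  with q have \<epsilon>: "0 < \<epsilon>" "\<epsilon> \<le> \<delta>" "\<epsilon> \<le> 1" "(\<bar>C\<bar> + 1) * \<epsilon> < cmod (d P0 Q0)"
    by (simp_all add: \<epsilon>_def)
  have "cmod (d P0 Q0) * \<epsilon> ^ degQ Q0 \<le> C * \<epsilon> ^ M"
    by (rule cauchy_estimate[OF \<epsilon>(1)]) (use \<epsilon> in \<open>auto intro: rep bd\<close>)
  also have "\<dots> \<le> \<bar>C\<bar> * (\<epsilon> * \<epsilon> ^ degQ Q0)"
  proof -
    have "\<epsilon> ^ M \<le> \<epsilon> ^ Suc (degQ Q0)" using \<epsilon> deg by (intro power_decreasing) auto
    then show ?thesis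
      using \<epsilon> by (intro order_trans[OF mult_right_mono[OF abs_ge_self] mult_left_mono]) auto
  qed
  also have "\<dots> < cmod (d P0 Q0) * \<epsilon> ^ degQ Q0"
    using \<epsilon> mult_strict_right_mono[OF \<epsilon>(4), of "\<epsilon> ^ degQ Q0"] by (simp add: algebra_simps)
  finally show False by simp
qed

section \<open>The linear flow of \<open>S\<close>\<close>

definition flow_X :: "('d \<Rightarrow> real) \<Rightarrow> real \<Rightarrow> ('d \<Rightarrow> complex) \<Rightarrow> 'd \<Rightarrow> complex" where
  "flow_X \<omega> t X = (\<lambda>l. X l + of_real (t * \<omega> l))"

definition flow_Y :: "('n \<Rightarrow> complex) \<Rightarrow> real \<Rightarrow> ('n \<Rightarrow> complex) \<Rightarrow> 'n \<Rightarrow> complex" where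
  "flow_Y \<Lambda> t Y = (\<lambda>j. exp (of_real t * \<Lambda> j) * Y j)"

lemma Im_flow_X: "Im (flow_X \<omega> t X l) = Im (X l)"
  by (simp add: flow_X_def)

lemma mono_term_flow:
  "mono_term P Q (flow_X \<omega> t X) (flow_Y \<Lambda> t Y) = exp (of_real t * small_div \<omega> \<Lambda> P Q) * mono_term P Q X Y"
proof -
  have X: "exp (\<i> * (\<Sum>l\<in>UNIV. of_int (P l) * flow_X \<omega> t X l))
      = exp (\<i> * (\<Sum>l\<in>UNIV. of_int (P l) * X l)) * exp (of_real t * (\<i> * of_real (\<Sum>l\<in>UNIV. of_int (P l) * \<omega> l)))"
    by (simp add: flow_X_def distrib_left sum.distrib exp_add[symmetric] sum_distrib_left algebra_simps)
  have "(\<Prod>j\<in>UNIV. flow_Y \<Lambda> t Y j ^ Q j) = (\<Prod>j\<in>UNIV. exp (of_real t * (of_nat (Q j) * \<Lambda> j))) * (\<Prod>j\<in>UNIV. Y j ^ Q j)"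
    by (simp add: flow_Y_def power_mult_distrib prod.distrib exp_of_nat_mult[symmetric] mult_ac)
  also have "(\<Prod>j\<in>UNIV. exp (of_real t * (of_nat (Q j) * \<Lambda> j))) = exp (of_real t * (\<Sum>j\<in>UNIV. of_nat (Q j) * \<Lambda> j))"
    by (simp add: exp_sum sum_distrib_left)
  finally show ?thesis
    unfolding mono_term_def X small_div_def by (simp add: distrib_left exp_add mult_ac)
qed

lemma has_sum_flow:
  assumes "((\<lambda>(P, Q). a P Q * mono_term P Q (flow_X \<omega> t X) (flow_Y \<Lambda> t Y)) has_sum v) UNIV"
  shows "((\<lambda>(P, Q). (a P Q * exp (of_real t * small_div \<omega> \<Lambda> P Q)) * mono_term P Q X Y) has_sum v) UNIV"
  using assms by (simp add: mono_term_flow mult.assoc case_prod_unfold)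

lemma norm_exp_small_div_le:
  assumes t: "0 \<le> t" "t \<le> 1" and L: "\<forall>j. cmod (\<Lambda> j) \<le> L"
  shows "cmod (exp (of_real t * small_div \<omega> \<Lambda> P Q)) \<le> exp (L * degQ Q)"
proof -
  have L0: "0 \<le> L" using L[rule_format, of undefined] norm_ge_zero order_trans by blast
  have "Re (of_real t * small_div \<omega> \<Lambda> P Q) = t * (\<Sum>j\<in>UNIV. real (Q j) * Re (\<Lambda> j))"
    by (simp add: small_div_def Re_sum)
  also have "\<dots> \<le> t * (\<Sum>j\<in>UNIV. real (Q j) * L)"
    using L t by (intro mult_left_mono sum_mono) (auto intro: order_trans[OF complex_Re_le_cmod])
  also have "\<dots> \<le> 1 * (\<Sum>j\<in>UNIV. real (Q j) * L)"
    using t L0 by (intro mult_right_mono sum_nonneg) auto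
  also have "\<dots> = L * degQ Q" by (simp add: degQ_def sum_distrib_left mult.commute)
  finally show ?thesis by simp
qed

lemma norm_flow_Y_le:
  assumes t: "0 \<le> t" "t \<le> 1" and L: "\<forall>j. cmod (\<Lambda> j) \<le> L" and Y: "cmod (Y j) \<le> s"
  shows "cmod (flow_Y \<Lambda> t Y j) \<le> exp L * s"
proof -
  have L0: "0 \<le> L" using L[rule_format, of j] norm_ge_zero[of "\<Lambda> j"] by linarith
  have "t * Re (\<Lambda> j) \<le> t * L" using t L by (intro mult_left_mono) (auto intro: order_trans[OF complex_Re_le_cmod])
  also have "\<dots> \<le> L" using t L0 mult_right_mono[of t 1 L] by simp
  finally have "cmod (exp (of_real t * \<Lambda> j)) \<le> exp L" by simp
  then show ?thesis unfolding flow_Y_def norm_mult using Y by (intro mult_mono) auto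
qed

lemma eval_fts_flow_resonant:
  assumes an: "analytic_fts r \<rho> A" and res: "\<And>P Q. A P Q \<noteq> 0 \<Longrightarrow> small_div \<omega> \<Lambda> P Q = lam"
    and X: "\<forall>l. \<bar>Im (X l)\<bar> \<le> r" and Y: "\<forall>j. cmod (Y j) \<le> \<rho>" and Yf: "\<forall>j. cmod (flow_Y \<Lambda> t Y j) \<le> \<rho>"
  shows "eval_fts A (flow_X \<omega> t X) (flow_Y \<Lambda> t Y) = exp (of_real t * lam) * eval_fts A X Y"
proof -
  have Xf: "\<forall>l. \<bar>Im (flow_X \<omega> t X l)\<bar> \<le> r" using X by (simp add: Im_flow_X)
  have "(\<lambda>(P, Q). (A P Q * exp (of_real t * small_div \<omega> \<Lambda> P Q)) * mono_term P Q X Y)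
      = (\<lambda>x. exp (of_real t * lam) * (\<lambda>(P, Q). A P Q * mono_term P Q X Y) x)"
    using res by (fastforce simp: fun_eq_iff)
  with has_sum_flow[OF analytic_fts_has_sum[OF an Xf Yf]]
  have "((\<lambda>x. exp (of_real t * lam) * (\<lambda>(P, Q). A P Q * mono_term P Q X Y) x)
      has_sum eval_fts A (flow_X \<omega> t X) (flow_Y \<Lambda> t Y)) UNIV"
    by simp
  from has_sum_unique[OF this has_sum_cmult_right[OF analytic_fts_has_sum[OF an X Y]]] show ?thesis .
qed

text \<open>The coefficients of \<open>a \<circ> e^(tS) - a\<close>; their growth \<open>e^(L|Q|)\<close> is absorbed by shrinking the
  polyradius by the factor \<open>e^L\<close>.\<close>

definition flow_defect :: "('d::finite \<Rightarrow> real) \<Rightarrow> ('n::finite \<Rightarrow> complex) \<Rightarrow> real \<Rightarrow> ('d, 'n) fts \<Rightarrow> ('d, 'n) fts" where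
  "flow_defect \<omega> \<Lambda> t a = (\<lambda>P Q. a P Q * (exp (of_real t * small_div \<omega> \<Lambda> P Q) - 1))"

lemma flow_defect_weight_le:
  assumes an: "analytic_fts r \<rho> a" and t: "0 \<le> t" "t \<le> 1" and L: "\<forall>j. cmod (\<Lambda> j) \<le> L"
  shows "coeff_weight r (\<rho> / exp L) (flow_defect \<omega> \<Lambda> t a) x \<le> 2 * coeff_weight r \<rho> a x"
proof -
  obtain P Q where x: "x = (P, Q)" by (cases x)
  have L0: "0 \<le> L" using L[rule_format, of undefined] norm_ge_zero order_trans by blast
  have rho: "0 < \<rho>" using an by (simp add: analytic_fts_def)
  have "cmod (exp (of_real t * small_div \<omega> \<Lambda> P Q) - 1) \<le> exp (L * degQ Q) + 1"
    using norm_exp_small_div_le[OF t L, of \<omega> P Q] norm_triangle_ineq4[of "exp (of_real t * small_div \<omega> \<Lambda> P Q)" 1]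
    by (simp del: norm_exp_eq_Re)
  moreover have "(\<rho> / exp L) ^ degQ Q * (exp (L * degQ Q) + 1) \<le> 2 * \<rho> ^ degQ Q"
  proof -
    have "(\<rho> / exp L) ^ degQ Q * exp (L * degQ Q) = \<rho> ^ degQ Q"
      by (simp add: power_divide exp_of_nat_mult[symmetric] mult.commute)
    moreover have "(\<rho> / exp L) ^ degQ Q \<le> \<rho> ^ degQ Q"
      using rho L0 by (intro power_mono) (auto simp: field_simps)
    ultimately show ?thesis by (simp add: distrib_left)
  qed
  ultimately have "(\<rho> / exp L) ^ degQ Q * cmod (exp (of_real t * small_div \<omega> \<Lambda> P Q) - 1) \<le> 2 * \<rho> ^ degQ Q"
    using rho by (meson order_trans mult_left_mono zero_le_power divide_nonneg_pos exp_gt_zero less_imp_le)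
  then have "cmod (a P Q) * exp (r * normP P) * ((\<rho> / exp L) ^ degQ Q * cmod (exp (of_real t * small_div \<omega> \<Lambda> P Q) - 1))
      \<le> cmod (a P Q) * exp (r * normP P) * (2 * \<rho> ^ degQ Q)"
    by (intro mult_left_mono) auto
  then show ?thesis by (simp add: x coeff_weight_def flow_defect_def norm_mult mult_ac)
qed

lemma analytic_flow_defect:
  assumes an: "analytic_fts r \<rho> a" and t: "0 \<le> t" "t \<le> 1" and L: "\<forall>j. cmod (\<Lambda> j) \<le> L"
  shows "analytic_fts r (\<rho> / exp L) (flow_defect \<omega> \<Lambda> t a)"
    and "weighted_norm r (\<rho> / exp L) (flow_defect \<omega> \<Lambda> t a) \<le> 2 * weighted_norm r \<rho> a"
proof -
  have pos: "0 < r" "0 < \<rho> / exp L" using an by (auto simp: analytic_fts_def)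
  have ws: "(\<lambda>x. 2 * coeff_weight r \<rho> a x) summable_on UNIV"
    using summable_on_cmult_right[of "coeff_weight r \<rho> a" UNIV 2] an by (simp add: analytic_fts_iff_weight)
  have wd: "coeff_weight r (\<rho> / exp L) (flow_defect \<omega> \<Lambda> t a) summable_on UNIV"
    by (rule summable_on_comparison_test[OF ws flow_defect_weight_le[OF an t L]])
       (use pos in \<open>auto simp: coeff_weight_def split: prod.splits\<close>)
  then show "analytic_fts r (\<rho> / exp L) (flow_defect \<omega> \<Lambda> t a)"
    using pos by (simp add: analytic_fts_iff_weight)
  have "weighted_norm r (\<rho> / exp L) (flow_defect \<omega> \<Lambda> t a) \<le> infsum (\<lambda>x. 2 * coeff_weight r \<rho> a x) UNIV"
    unfolding weighted_norm_def by (rule infsum_mono[OF wd ws flow_defect_weight_le[OF an t L]])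
  also have "\<dots> = 2 * weighted_norm r \<rho> a" unfolding weighted_norm_def by (rule infsum_cmult_right')
  finally show "weighted_norm r (\<rho> / exp L) (flow_defect \<omega> \<Lambda> t a) \<le> 2 * weighted_norm r \<rho> a" .
qed

lemma norm_eval_fts_flow_diff_le:
  assumes an: "analytic_fts r \<rho> a"
    and res: "\<And>P Q. degQ Q < m \<Longrightarrow> a P Q \<noteq> 0 \<Longrightarrow> small_div \<omega> \<Lambda> P Q = 0"
    and t: "0 \<le> t" "t \<le> 1" and L: "\<forall>j. cmod (\<Lambda> j) \<le> L"
    and X: "\<forall>l. \<bar>Im (X l)\<bar> \<le> r" and Y: "\<forall>j. cmod (Y j) \<le> s" and s: "0 \<le> s" "s \<le> \<rho> / exp L"
  shows "cmod (eval_fts a (flow_X \<omega> t X) (flow_Y \<Lambda> t Y) - eval_fts a X Y)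
    \<le> 2 * weighted_norm r \<rho> a * (s * exp L / \<rho>) ^ m"
proof -
  have rho: "0 < \<rho>" using an by (simp add: analytic_fts_def)
  have L0: "0 \<le> L" using L[rule_format, of undefined] norm_ge_zero order_trans by blast
  have "\<rho> / exp L \<le> \<rho>" using rho L0 by (simp add: field_simps)
  have Y1: "\<forall>j. cmod (Y j) \<le> \<rho> / exp L" using Y s by (meson order_trans)
  then have Y0: "\<forall>j. cmod (Y j) \<le> \<rho>" using \<open>\<rho> / exp L \<le> \<rho>\<close> by (meson order_trans)
  have Yf: "\<forall>j. cmod (flow_Y \<Lambda> t Y j) \<le> \<rho>"
  proof
    fix j
    have "cmod (flow_Y \<Lambda> t Y j) \<le> exp L * s" using norm_flow_Y_le[OF t L] Y by blast
    also have "\<dots> \<le> \<rho>" using s by (simp add: field_simps)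
    finally show "cmod (flow_Y \<Lambda> t Y j) \<le> \<rho>" .
  qed
  have Xf: "\<forall>l. \<bar>Im (flow_X \<omega> t X l)\<bar> \<le> r" using X by (simp add: Im_flow_X)
  have "((\<lambda>(P, Q). flow_defect \<omega> \<Lambda> t a P Q * mono_term P Q X Y)
      has_sum (eval_fts a (flow_X \<omega> t X) (flow_Y \<Lambda> t Y) - eval_fts a X Y)) UNIV"
    using has_sum_diff[OF has_sum_flow[OF analytic_fts_has_sum[OF an Xf Yf]] analytic_fts_has_sum[OF an X Y0]]
    by (simp add: flow_defect_def case_prod_unfold algebra_simps)
  then have "eval_fts a (flow_X \<omega> t X) (flow_Y \<Lambda> t Y) - eval_fts a X Y = eval_fts (flow_defect \<omega> \<Lambda> t a) X Y"
    using has_sum_unique analytic_fts_has_sum[OF analytic_flow_defect(1)[OF an t L] X Y1] by blast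
  also have "cmod \<dots> \<le> weighted_norm r (\<rho> / exp L) (flow_defect \<omega> \<Lambda> t a) * (s / (\<rho> / exp L)) ^ m"
  proof (rule norm_eval_fts_le_order[OF analytic_flow_defect(1)[OF an t L] _ X Y s])
    show "has_order m (flow_defect \<omega> \<Lambda> t a)" using res by (fastforce simp: has_order_def flow_defect_def)
  qed
  also have "\<dots> \<le> 2 * weighted_norm r \<rho> a * (s * exp L / \<rho>) ^ m"
  proof -
    have "s / (\<rho> / exp L) = s * exp L / \<rho>" by simp
    then show ?thesis
      using analytic_flow_defect(2)[OF an t L, of \<omega>] s rho by (auto intro!: mult_right_mono)
  qed
  finally show ?thesis .
qed

section \<open>Real points stay strictly inside the strip\<close>

lemma mono_term_periodic:
  assumes "\<forall>l. \<exists>k::int. X' l = X l + 2 * of_real pi * of_int k"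
  shows "mono_term P Q X' Y = mono_term P Q X Y"
proof -
  obtain k where k: "\<And>l. X' l = X l + 2 * of_real pi * of_int (k l)" using assms by metis
  have "exp (\<i> * (\<Sum>l\<in>UNIV. of_int (P l) * X' l))
      = exp (\<i> * (\<Sum>l\<in>UNIV. of_int (P l) * X l)) * exp (\<i> * (of_int (\<Sum>l\<in>UNIV. P l * k l) * (of_real pi * 2)))"
    by (simp add: k distrib_left sum.distrib exp_add[symmetric] sum_distrib_left algebra_simps)
  also have "exp (\<i> * (of_int (\<Sum>l\<in>UNIV. P l * k l) * (of_real pi * 2))) = 1" by (rule exp_2pi_1_int)
  finally show ?thesis by (simp add: mono_term_def)
qed

lemma eval_fts_periodic:
  assumes "\<forall>l. \<exists>k::int. X' l = X l + 2 * of_real pi * of_int k"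
  shows "eval_fts a X' Y = eval_fts a X Y"
  unfolding eval_fts_def mono_term_periodic[OF assms] ..

lemma eval_fts_fundamental_domain:
  fixes x :: "'d::finite \<Rightarrow> real"
  obtains v :: "real^'d" where "v \<in> cbox 0 (\<chi> m. 2 * pi)"
    "eval_fts a (\<lambda>m. of_real (x m)) Y = eval_fts a (\<lambda>m. of_real (v $ m)) Y"
proof
  define v :: "real^'d" where "v = (\<chi> m. x m - 2 * pi * of_int \<lfloor>x m / (2 * pi)\<rfloor>)"
  have "0 \<le> v $ m \<and> v $ m \<le> 2 * pi" for m
  proof -
    have "2 * pi * of_int \<lfloor>x m / (2 * pi)\<rfloor> \<le> x m"
      using mult_left_mono[OF of_int_floor_le[of "x m / (2 * pi)"], of "2 * pi"] by simp
    moreover have "x m < 2 * pi * (of_int \<lfloor>x m / (2 * pi)\<rfloor> + 1)"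
      using real_of_int_floor_add_one_gt[of "x m / (2 * pi)"] by (simp add: field_simps)
    ultimately show ?thesis by (simp add: v_def algebra_simps)
  qed
  then show "v \<in> cbox 0 (\<chi> m. 2 * pi)" by (simp add: mem_box_cart)
  show "eval_fts a (\<lambda>m. of_real (x m)) Y = eval_fts a (\<lambda>m. of_real (v $ m)) Y"
  proof (rule eval_fts_periodic, rule allI)
    fix m
    show "\<exists>k::int. complex_of_real (x m) = complex_of_real (v $ m) + 2 * complex_of_real pi * of_int k"
      by (rule exI[of _ "\<lfloor>x m / (2 * pi)\<rfloor>"]) (simp add: v_def)
  qed
qed

text \<open>By periodicity, the supremum over real points is a maximum over the compact torus.\<close>

lemma Im_eval_fts_real_bounded:
  assumes an: "analytic_fts r \<rho> a"
    and inside: "\<forall>x::'d::finite \<Rightarrow> real. \<bar>Im (eval_fts a (\<lambda>m. of_real (x m)) ((\<lambda>_. 0) :: 'n::finite \<Rightarrow> complex))\<bar> < rV"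
  obtains R where "R < rV" "\<And>x::'d \<Rightarrow> real. \<bar>Im (eval_fts a (\<lambda>m. of_real (x m)) ((\<lambda>_. 0) :: 'n \<Rightarrow> complex))\<bar> \<le> R"
proof -
  have r: "0 < r" using an by (simp add: analytic_fts_def)
  define F :: "real^'d \<Rightarrow> real" where "F v = \<bar>Im (eval_fts a (\<lambda>m. of_real (v $ m)) ((\<lambda>_. 0) :: 'n \<Rightarrow> complex))\<bar>" for v
  have "(weighted_norm r \<rho> a / r)-lipschitz_on UNIV F"
  proof (rule lipschitz_onI)
    fix v w :: "real^'d"
    have "dist (F v) (F w) \<le> cmod (eval_fts a (\<lambda>m. of_real (v $ m)) ((\<lambda>_. 0) :: 'n \<Rightarrow> complex) - eval_fts a (\<lambda>m. of_real (w $ m)) (\<lambda>_. 0))"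
    proof -
      have "\<bar>\<bar>Im (eval_fts a (\<lambda>m. of_real (v $ m)) ((\<lambda>_. 0) :: 'n \<Rightarrow> complex))\<bar> - \<bar>Im (eval_fts a (\<lambda>m. of_real (w $ m)) ((\<lambda>_. 0) :: 'n \<Rightarrow> complex))\<bar>\<bar>
        \<le> \<bar>Im (eval_fts a (\<lambda>m. of_real (v $ m)) ((\<lambda>_. 0) :: 'n \<Rightarrow> complex) - eval_fts a (\<lambda>m. of_real (w $ m)) (\<lambda>_. 0))\<bar>"
        by simp
      also have "\<dots> \<le> cmod (eval_fts a (\<lambda>m. of_real (v $ m)) ((\<lambda>_. 0) :: 'n \<Rightarrow> complex) - eval_fts a (\<lambda>m. of_real (w $ m)) (\<lambda>_. 0))"
        by (rule abs_Im_le_cmod)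
      finally show ?thesis by (simp add: F_def dist_real_def)
    qed
    also have "\<dots> \<le> weighted_norm r \<rho> a * (dist v w / (r - 0))"
    proof (rule norm_eval_fts_diff_X_le[OF an])
      show "\<forall>m. cmod (complex_of_real (v $ m) - complex_of_real (w $ m)) \<le> dist v w"
        using component_le_norm_cart[of "v - w"] by (simp add: dist_norm flip: of_real_diff)
    qed (use an r in \<open>auto simp: analytic_fts_def\<close>)
    finally show "dist (F v) (F w) \<le> weighted_norm r \<rho> a / r * dist v w" by simp
  qed (use weighted_norm_nonneg[OF an] r in simp)
  then have "continuous_on UNIV F" by (rule lipschitz_on_continuous_on)
  moreover have "0 \<in> cbox 0 (\<chi> m. 2 * pi :: real^'d)" by (simp add: mem_box_cart)
  then have "cbox 0 (\<chi> m. 2 * pi) \<noteq> ({} :: (real^'d) set)" by blast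
  ultimately obtain v0 where v0: "v0 \<in> cbox 0 (\<chi> m. 2 * pi)" "\<And>v. v \<in> cbox 0 (\<chi> m. 2 * pi) \<Longrightarrow> F v \<le> F v0"
    using continuous_attains_sup[OF compact_cbox _ continuous_on_subset] by (metis subset_UNIV)
  show ?thesis
  proof
    show "F v0 < rV" using inside[rule_format, of "\<lambda>m. v0 $ m"] by (simp add: F_def)
    fix x :: "'d \<Rightarrow> real"
    obtain v where "v \<in> cbox 0 (\<chi> m. 2 * pi)"
      "eval_fts a (\<lambda>m. of_real (x m)) ((\<lambda>_. 0) :: 'n \<Rightarrow> complex) = eval_fts a (\<lambda>m. of_real (v $ m)) (\<lambda>_. 0)"
      by (rule eval_fts_fundamental_domain)
    then show "\<bar>Im (eval_fts a (\<lambda>m. of_real (x m)) ((\<lambda>_. 0) :: 'n \<Rightarrow> complex))\<bar> \<le> F v0"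
      using v0(2) by (simp add: F_def)
  qed
qed

lemma Im_components_below_strip:
  fixes \<Phi> :: "('d::finite, 'n::finite) fvf"
  assumes an: "\<And>a. analytic_fts r \<rho> (\<Phi> a)"
    and inside: "\<forall>x::'d \<Rightarrow> real. \<forall>l. \<bar>Im (eval_fts (\<Phi> (Inl l)) (\<lambda>m. of_real (x m)) ((\<lambda>_. 0) :: 'n \<Rightarrow> complex))\<bar> < rV"
  obtains r1 \<delta> where "r1 < rV" "0 < \<delta>"
    "\<And>X Y l. \<forall>l. Im (X l) = 0 \<Longrightarrow> \<forall>j. cmod (Y j) \<le> \<delta> \<Longrightarrow> \<bar>Im (eval_fts (\<Phi> (Inl l)) X Y)\<bar> \<le> r1"
proof -
  have pos: "0 < r" "0 < \<rho>" using an by (auto simp: analytic_fts_def)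
  obtain Rf where Rf: "\<And>l. Rf l < rV"
    "\<And>l x. \<bar>Im (eval_fts (\<Phi> (Inl l)) (\<lambda>m. of_real (x m)) ((\<lambda>_. 0) :: 'n \<Rightarrow> complex))\<bar> \<le> Rf l"
  proof -
    have "\<forall>l. \<exists>R. R < rV \<and> (\<forall>x::'d \<Rightarrow> real. \<bar>Im (eval_fts (\<Phi> (Inl l)) (\<lambda>m. of_real (x m)) ((\<lambda>_. 0) :: 'n \<Rightarrow> complex))\<bar> \<le> R)"
    proof
      fix l
      obtain R where "R < rV" "\<And>x::'d \<Rightarrow> real. \<bar>Im (eval_fts (\<Phi> (Inl l)) (\<lambda>m. of_real (x m)) ((\<lambda>_. 0) :: 'n \<Rightarrow> complex))\<bar> \<le> R"
        using Im_eval_fts_real_bounded[OF an] inside by blast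
      then show "\<exists>R. R < rV \<and> (\<forall>x::'d \<Rightarrow> real. \<bar>Im (eval_fts (\<Phi> (Inl l)) (\<lambda>m. of_real (x m)) ((\<lambda>_. 0) :: 'n \<Rightarrow> complex))\<bar> \<le> R)"
        by blast
    qed
    then show ?thesis using that by metis
  qed
  define R where "R = Max (range Rf)"
  have RR: "Rf l \<le> R" for l by (simp add: R_def)
  have RV: "R < rV" using Max_in[of "range Rf"] Rf(1) by (auto simp: R_def)
  define K where "K = (\<Sum>l\<in>UNIV. weighted_norm r \<rho> (\<Phi> (Inl l))) + 1"
  have K: "weighted_norm r \<rho> (\<Phi> (Inl l)) \<le> K - 1" "1 \<le> K" for l
    using member_le_sum[of l UNIV "\<lambda>l. weighted_norm r \<rho> (\<Phi> (Inl l))"]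
      sum_nonneg[of UNIV "\<lambda>l. weighted_norm r \<rho> (\<Phi> (Inl l))"] weighted_norm_nonneg[OF an]
    by (auto simp: K_def)
  define \<delta> where "\<delta> = min \<rho> (\<rho> * (rV - R) / (2 * K))"
  have \<delta>: "0 < \<delta>" "\<delta> \<le> \<rho>" using pos RV K(2) by (auto simp: \<delta>_def)
  show ?thesis
  proof
    show "(R + rV) / 2 < rV" "0 < \<delta>" using RV \<delta> by auto
    fix X :: "'d \<Rightarrow> complex" and Y :: "'n \<Rightarrow> complex" and l
    assume X: "\<forall>l. Im (X l) = 0" and Y: "\<forall>j. cmod (Y j) \<le> \<delta>"
    have "X = (\<lambda>m. of_real (Re (X m)))" using X by (auto simp: fun_eq_iff complex_eq_iff)
    then have "\<bar>Im (eval_fts (\<Phi> (Inl l)) X (\<lambda>_. 0))\<bar> \<le> R"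
      using Rf(2)[of l "\<lambda>m. Re (X m)"] RR[of l] by simp
    moreover have "cmod (eval_fts (\<Phi> (Inl l)) X Y - eval_fts (\<Phi> (Inl l)) X (\<lambda>_. 0)) \<le> (rV - R) / 2"
    proof -
      have "cmod (eval_fts (\<Phi> (Inl l)) X Y - eval_fts (\<Phi> (Inl l)) X (\<lambda>_. 0))
          \<le> weighted_norm r \<rho> (\<Phi> (Inl l)) * (\<delta> / \<rho>)"
        by (rule norm_eval_fts_diff_Y0_le[OF an]) (use X pos Y \<delta> in auto)
      also have "\<dots> \<le> K * ((\<rho> * (rV - R) / (2 * K)) / \<rho>)"
        using K(1)[of l] K(2) \<delta> pos by (intro mult_mono divide_right_mono) (auto simp: \<delta>_def)
      also have "\<dots> = (rV - R) / 2" using K(2) pos by (simp add: field_simps)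
      finally show ?thesis .
    qed
    moreover have "\<bar>Im (eval_fts (\<Phi> (Inl l)) X Y)\<bar>
        \<le> \<bar>Im (eval_fts (\<Phi> (Inl l)) X (\<lambda>_. 0))\<bar> + \<bar>Im (eval_fts (\<Phi> (Inl l)) X Y - eval_fts (\<Phi> (Inl l)) X (\<lambda>_. 0))\<bar>"
      by simp
    ultimately have "\<bar>Im (eval_fts (\<Phi> (Inl l)) X Y)\<bar> \<le> R + (rV - R) / 2"
      using abs_Im_le_cmod[of "eval_fts (\<Phi> (Inl l)) X Y - eval_fts (\<Phi> (Inl l)) X (\<lambda>_. 0)"]
      by (meson add_mono order_trans)
    then show "\<bar>Im (eval_fts (\<Phi> (Inl l)) X Y)\<bar> \<le> (R + rV) / 2" by (simp add: field_simps)
  qed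
qed

section \<open>Coefficients of \<open>D\<Phi> \<cdot> NF\<close>\<close>

lemma finite_below_Q: "finite {Q' :: 'n::finite \<Rightarrow> nat. \<forall>j. Q' j \<le> Q j}"
proof -
  have "{Q' :: 'n \<Rightarrow> nat. \<forall>j. Q' j \<le> Q j} \<subseteq> PiE UNIV (\<lambda>j. {..Q j})" by (auto simp: PiE_def Pi_def)
  moreover have "finite (PiE (UNIV :: 'n set) (\<lambda>j. {..Q j}))" by (simp add: finite_PiE)
  ultimately show ?thesis by (rule finite_subset)
qed

lemma mul_fts_zero:
  assumes "\<And>P' Q'. (\<forall>j. Q' j \<le> Q j) \<Longrightarrow> g P' Q' * f (\<lambda>l. P l - P' l) (\<lambda>j. Q j - Q' j) = 0"
  shows "mul_fts g f P Q = 0"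
proof -
  have "(\<Sum>Q'\<in>{Q'. \<forall>j. Q' j \<le> Q j}. g P' Q' * f (\<lambda>l. P l - P' l) (\<lambda>j. Q j - Q' j)) = 0" for P'
    using assms by (intro sum.neutral) auto
  then show ?thesis unfolding mul_fts_def by simp
qed

lemma mul_fts_single:
  assumes Q1: "\<forall>j. Q1 j \<le> Q j"
    and oth: "\<And>P' Q'. (\<forall>j. Q' j \<le> Q j) \<Longrightarrow> (P', Q') \<noteq> (P1, Q1) \<Longrightarrow> g P' Q' * f (\<lambda>l. P l - P' l) (\<lambda>j. Q j - Q' j) = 0"
  shows "mul_fts g f P Q = g P1 Q1 * f (\<lambda>l. P l - P1 l) (\<lambda>j. Q j - Q1 j)"
proof -
  define c where "c = g P1 Q1 * f (\<lambda>l. P l - P1 l) (\<lambda>j. Q j - Q1 j)"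
  have inner: "(\<Sum>Q'\<in>{Q'. \<forall>j. Q' j \<le> Q j}. g P' Q' * f (\<lambda>l. P l - P' l) (\<lambda>j. Q j - Q' j)) = (if P' = P1 then c else 0)" for P'
  proof (cases "P' = P1")
    case True
    have "(\<Sum>Q'\<in>{Q'. \<forall>j. Q' j \<le> Q j}. g P' Q' * f (\<lambda>l. P l - P' l) (\<lambda>j. Q j - Q' j))
        = g P' Q1 * f (\<lambda>l. P l - P' l) (\<lambda>j. Q j - Q1 j) + (\<Sum>Q'\<in>{Q'. \<forall>j. Q' j \<le> Q j} - {Q1}. g P' Q' * f (\<lambda>l. P l - P' l) (\<lambda>j. Q j - Q' j))"
      using Q1 finite_below_Q by (subst sum.remove[of _ Q1]) auto
    also have "(\<Sum>Q'\<in>{Q'. \<forall>j. Q' j \<le> Q j} - {Q1}. g P' Q' * f (\<lambda>l. P l - P' l) (\<lambda>j. Q j - Q' j)) = 0"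
      using oth True by (intro sum.neutral) auto
    finally show ?thesis using True by (simp add: c_def)
  next
    case False
    then show ?thesis using oth by (intro trans[OF sum.neutral]) auto
  qed
  have "mul_fts g f P Q = infsum (\<lambda>P'. if P' = P1 then c else 0) UNIV"
    unfolding mul_fts_def by (simp add: inner)
  also have "\<dots> = c" by (rule infsumI[OF has_sum_delta])
  finally show ?thesis by (simp add: c_def)
qed


lemma sum_unitQ: "(\<Sum>j\<in>UNIV. of_nat (unitQ i j) * (f j :: complex)) = f (i::'n::finite)"
  by (subst sum.remove[of _ i]) (auto simp: unitQ_def)

lemma small_div_split:
  assumes "\<forall>j. Q' j \<le> Q j"
  shows "small_div \<omega> \<Lambda> P Q = small_div \<omega> \<Lambda> P' Q' + small_div \<omega> \<Lambda> (\<lambda>l. P l - P' l) (\<lambda>j. Q j - Q' j)"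
proof -
  have a: "(\<Sum>l\<in>UNIV. real_of_int (P l) * \<omega> l) = (\<Sum>l\<in>UNIV. real_of_int (P' l) * \<omega> l) + (\<Sum>l\<in>UNIV. real_of_int (P l - P' l) * \<omega> l)"
    by (simp add: sum.distrib[symmetric] algebra_simps)
  have b: "(\<Sum>j\<in>UNIV. of_nat (Q j) * \<Lambda> j) = (\<Sum>j\<in>UNIV. of_nat (Q' j) * \<Lambda> j) + (\<Sum>j\<in>UNIV. of_nat (Q j - Q' j) * \<Lambda> j)"
    using assms by (simp add: sum.distrib[symmetric] of_nat_diff algebra_simps)
  show ?thesis unfolding small_div_def a b by (simp add: algebra_simps)
qed

lemma small_div_plus_unit: "small_div \<omega> \<Lambda> P (\<lambda>j. Q j + unitQ i j) = small_div \<omega> \<Lambda> P Q + \<Lambda> i"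
proof -
  have "(\<Sum>j\<in>UNIV. of_nat (Q j + unitQ i j) * \<Lambda> j) = (\<Sum>j\<in>UNIV. of_nat (Q j) * \<Lambda> j) + (\<Sum>j\<in>UNIV. of_nat (unitQ i j) * \<Lambda> j)"
    by (simp add: sum.distrib[symmetric] algebra_simps)
  also have "(\<Sum>j\<in>UNIV. of_nat (unitQ i j) * \<Lambda> j) = \<Lambda> i" by (rule sum_unitQ)
  finally show ?thesis unfolding small_div_def by (simp add: algebra_simps)
qed

lemma small_div_zero: "small_div \<omega> \<Lambda> (\<lambda>_. 0) (\<lambda>_. 0) = 0" by (simp add: small_div_def)

lemma degQ_minus: "\<forall>j. Q' j \<le> Q j \<Longrightarrow> degQ (\<lambda>j. Q j - Q' j) = degQ Q - degQ Q'"
  by (simp add: degQ_def sum_subtractf_nat)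

lemma degQ_mono: "\<forall>j. Q' j \<le> Q j \<Longrightarrow> degQ Q' \<le> degQ Q"
  by (simp add: degQ_def sum_mono)

lemma degQ_plus_unit: "degQ (\<lambda>j. Q j + unitQ i j) = degQ Q + 1"
  by (simp add: degQ_def sum.distrib unitQ_def)

lemma degQ_unit: "degQ (unitQ i :: 'n::finite \<Rightarrow> nat) = 1"
  by (simp add: degQ_def unitQ_def)

lemma NF_Inl_nonzero:
  "add_vf (S_vf \<omega> \<Lambda>) Rn (Inl m) P Q \<noteq> 0 \<Longrightarrow> (P = (\<lambda>_. 0) \<and> Q = (\<lambda>_. 0)) \<or> Rn (Inl m) P Q \<noteq> 0"
  by (auto simp: add_vf_def S_vf_def split: if_splits)

lemma NF_Inr_nonzero:
  "add_vf (S_vf \<omega> \<Lambda>) Rn (Inr j) P Q \<noteq> 0 \<Longrightarrow> (P = (\<lambda>_. 0) \<and> Q = unitQ j) \<or> Rn (Inr j) P Q \<noteq> 0"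
  by (auto simp: add_vf_def S_vf_def split: if_splits)

lemma minus_P_eq_0_iff: "((\<lambda>l. P l - P' l) = (\<lambda>_. (0::int))) \<longleftrightarrow> P' = P"
  by (auto simp: fun_eq_iff)

lemma minus_Q_eq_0_iff: "\<forall>j. Q' j \<le> Q j \<Longrightarrow> ((\<lambda>j. Q j - Q' j) = (\<lambda>_. (0::nat))) \<longleftrightarrow> Q' = Q"
  by (auto simp: fun_eq_iff intro: antisym)

lemma minus_Q_eq_unit_iff: "\<forall>j. Q' j \<le> Q j \<Longrightarrow> ((\<lambda>j'. Q j' - Q' j') = unitQ j) \<longleftrightarrow> (1 \<le> Q j \<and> Q' = (\<lambda>j'. Q j' - unitQ j j'))" (is "?a \<Longrightarrow> ?b \<longleftrightarrow> ?c")
proof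
  assume a: "\<forall>j. Q' j \<le> Q j" and e: "(\<lambda>j'. Q j' - Q' j') = unitQ j"
  have "Q j - Q' j = 1" using fun_cong[OF e, of j] by (simp add: unitQ_def)
  moreover have "Q' j' = Q j' - unitQ j j'" for j'
    using fun_cong[OF e, of j'] a[rule_format, of j'] by (auto simp: unitQ_def split: if_splits)
  ultimately show "1 \<le> Q j \<and> Q' = (\<lambda>j'. Q j' - unitQ j j')" by auto
next
  assume a: "\<forall>j. Q' j \<le> Q j" and b: "1 \<le> Q j \<and> Q' = (\<lambda>j'. Q j' - unitQ j j')"
  then show "(\<lambda>j'. Q j' - Q' j') = unitQ j" by (auto simp: fun_eq_iff unitQ_def)
qed

lemma minus_unit_plus_unit: "1 \<le> Q j \<Longrightarrow> (\<lambda>j'. (Q j' - unitQ j j') + unitQ j j') = Q"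
  by (auto simp: fun_eq_iff unitQ_def)

lemma sum_UNIV_Plus: "(\<Sum>b\<in>(UNIV :: ('a::finite + 'b::finite) set). f b) = (\<Sum>l\<in>UNIV. f (Inl l)) + (\<Sum>j\<in>UNIV. f (Inr j))"
proof -
  have "sum f ((UNIV :: 'a set) <+> (UNIV :: 'b set)) = sum (f \<circ> Inl) UNIV + sum (f \<circ> Inr) UNIV"
    by (rule sum.Plus) simp_all
  then show ?thesis by (simp only: UNIV_Plus_UNIV comp_def)
qed

lemma degQ_minus_unit: "1 \<le> Q i \<Longrightarrow> degQ (\<lambda>j. Q j - unitQ i j) = degQ Q - 1"
  using degQ_plus_unit[of "\<lambda>j. Q j - unitQ i j" i] minus_unit_plus_unit[of Q i] by simp

text \<open>The \<open>Y\<close>-components of \<open>\<Phi>\<close> are \<open>Y_i \<Phi>t_i\<close>, so the coefficient of \<open>\<Phi>t_i\<close> at \<open>Q\<close> appears in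
  \<open>D\<Phi> \<cdot> NF\<close> at \<open>Q + e_i\<close>, and the eigenvalue \<open>\<lambda>_i\<close> is added to the divisor.\<close>

definition vf_eigenvalue :: "('n \<Rightarrow> complex) \<Rightarrow> 'd + 'n \<Rightarrow> complex" where
  "vf_eigenvalue \<Lambda> a = (case a of Inl _ \<Rightarrow> 0 | Inr j \<Rightarrow> \<Lambda> j)"

definition vf_shift :: "'d + 'n \<Rightarrow> nat" where
  "vf_shift a = (case a of Inl _ \<Rightarrow> 0 | Inr _ \<Rightarrow> 1)"

definition shiftQ :: "'d + 'n \<Rightarrow> ('n \<Rightarrow> nat) \<Rightarrow> 'n \<Rightarrow> nat" where
  "shiftQ a Q = (case a of Inl _ \<Rightarrow> Q | Inr i \<Rightarrow> (\<lambda>j. Q j + unitQ i j))"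

lemma degQ_shiftQ: "degQ (shiftQ a Q) = degQ Q + vf_shift a"
  by (cases a) (simp_all add: shiftQ_def vf_shift_def degQ_plus_unit)

lemma quasi_order_iff: "quasi_order k F \<longleftrightarrow> (\<forall>a. has_order (k + vf_shift a) (F a))"
  by (auto simp: quasi_order_def vf_shift_def split: sum.splits)

lemma resonant_vf_iff:
  "resonant_vf \<omega> \<Lambda> F \<longleftrightarrow> (\<forall>a P Q. F a P Q \<noteq> 0 \<longrightarrow> small_div \<omega> \<Lambda> P Q = vf_eigenvalue \<Lambda> a)"
  by (auto simp: resonant_vf_def resonant_def vf_eigenvalue_def split: sum.splits)


lemma jac_Inr_Inr_coeff:
  assumes "1 \<le> Q0 j + unitQ i j"
  shows "jac \<Phi> (Inr i) (Inr j) P (\<lambda>k. Q0 k + unitQ i k - unitQ j k)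
    = (if i = j then \<Phi> (Inr i) P Q0 else 0) + of_nat (Q0 j) * \<Phi> (Inr i) P Q0"
proof -
  define Q1 where "Q1 = (\<lambda>k. Q0 k + unitQ i k - unitQ j k)"
  have "jac \<Phi> (Inr i) (Inr j) P Q1 = (if i = j then \<Phi> (Inr i) P Q0 else 0) + of_nat (Q0 j) * \<Phi> (Inr i) P Q0"
  proof (cases "i = j")
    case True
    have q1: "Q1 = Q0" by (simp add: Q1_def True)
    show ?thesis
    proof (cases "1 \<le> Q0 i")
      case c: True
      have "(\<lambda>k. (Q0 k - unitQ i k) + unitQ i k) = Q0" by (rule minus_unit_plus_unit[of Q0 i, OF c])
      moreover have "1 + of_nat (Q0 i - unitQ i i) = (of_nat (Q0 i) :: complex)" using c by (simp add: unitQ_def of_nat_diff)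
      ultimately show ?thesis using c by (simp add: jac_def q1 True mulY_def dY_def)
    next
      case c: False
      then show ?thesis by (simp add: jac_def q1 True mulY_def)
    qed
  next
    case False
    have Q0j: "1 \<le> Q0 j" using assms False by (simp add: unitQ_def)
    have q1i: "1 \<le> Q1 i" using False by (simp add: Q1_def unitQ_def)
    have R: "(\<lambda>k. Q1 k - unitQ i k) = (\<lambda>k. Q0 k - unitQ j k)"
      using False by (auto simp: Q1_def unitQ_def fun_eq_iff)
    have "(\<lambda>k. (Q0 k - unitQ j k) + unitQ j k) = Q0" by (rule minus_unit_plus_unit[of Q0 j, OF Q0j])
    moreover have "1 + of_nat (Q0 j - unitQ j j) = (of_nat (Q0 j) :: complex)" using Q0j by (simp add: unitQ_def of_nat_diff)
    ultimately have R1: "(\<lambda>k. Q1 k - unitQ i k + unitQ j k) = Q0"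
      and R2: "1 + of_nat (Q1 j - unitQ i j) = (of_nat (Q0 j) :: complex)"
      using R fun_cong[OF R, of j] by (auto simp: fun_eq_iff dest: fun_cong)
    show ?thesis using False q1i by (simp add: jac_def mulY_def dY_def R1 R2)
  qed
  then show ?thesis by (simp add: Q1_def)
qed

text \<open>Under the induction hypothesis that the coefficients of \<open>\<Phi>\<close> of degree below \<open>m\<close> are
  resonant, at a non-resonant index of degree \<open>m\<close> only the linear part \<open>S\<close> of the normal
  form contributes to \<open>D\<Phi> \<cdot> NF\<close>: every other product of coefficients would force the
  index to be resonant.\<close>

context
  fixes \<omega> :: "'d::finite \<Rightarrow> real" and \<Lambda> :: "'n::finite \<Rightarrow> complex"
    and \<Phi> Rn :: "('d, 'n) fvf" and m :: nat
  assumes RnX: "\<And>m' P Q. Rn (Inl m') P Q \<noteq> 0 \<Longrightarrow> small_div \<omega> \<Lambda> P Q = 0 \<and> 1 \<le> degQ Q"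
    and RnY: "\<And>j P Q. Rn (Inr j) P Q \<noteq> 0 \<Longrightarrow> small_div \<omega> \<Lambda> P Q = \<Lambda> j \<and> 2 \<le> degQ Q"
    and IH: "\<And>a P Q. degQ Q < m \<Longrightarrow> \<Phi> a P Q \<noteq> 0 \<Longrightarrow> small_div \<omega> \<Lambda> P Q = 0"
begin

lemma coeff_jac_NF_Inl_Inl:
  assumes dQ: "degQ Q = m" and sdn: "small_div \<omega> \<Lambda> P Q \<noteq> 0"
  shows "mul_fts (jac \<Phi> (Inl l) (Inl m')) (add_vf (S_vf \<omega> \<Lambda>) Rn (Inl m')) P Q
     = \<i> * of_int (P m') * \<Phi> (Inl l) P Q * of_real (\<omega> m')"
proof -
  have one0: "one_fts P Q = 0"
    using sdn by (auto simp: one_fts_def small_div_zero)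
  have f00: "add_vf (S_vf \<omega> \<Lambda>) Rn (Inl m') (\<lambda>_. 0) (\<lambda>_. 0) = of_real (\<omega> m')"
    using RnX[of m' "\<lambda>_. 0" "\<lambda>_. 0"] by (auto simp: add_vf_def S_vf_def degQ_def)
  have "mul_fts (jac \<Phi> (Inl l) (Inl m')) (add_vf (S_vf \<omega> \<Lambda>) Rn (Inl m')) P Q
      = jac \<Phi> (Inl l) (Inl m') P Q * add_vf (S_vf \<omega> \<Lambda>) Rn (Inl m') (\<lambda>l. P l - P l) (\<lambda>j. Q j - Q j)"
  proof (rule mul_fts_single)
    fix P' Q' assume le: "\<forall>j. Q' j \<le> Q j" and ne: "(P', Q') \<noteq> (P, Q)"
    show "jac \<Phi> (Inl l) (Inl m') P' Q' * add_vf (S_vf \<omega> \<Lambda>) Rn (Inl m') (\<lambda>l. P l - P' l) (\<lambda>j. Q j - Q' j) = 0"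
    proof (rule ccontr)
      assume "\<not> ?thesis"
      then have g: "jac \<Phi> (Inl l) (Inl m') P' Q' \<noteq> 0" and f: "add_vf (S_vf \<omega> \<Lambda>) Rn (Inl m') (\<lambda>l. P l - P' l) (\<lambda>j. Q j - Q' j) \<noteq> 0"
        by auto
      have rn: "Rn (Inl m') (\<lambda>l. P l - P' l) (\<lambda>j. Q j - Q' j) \<noteq> 0"
        using NF_Inl_nonzero[OF f] ne le by (auto simp: minus_P_eq_0_iff minus_Q_eq_0_iff)
      from RnX[OF rn] have s2: "small_div \<omega> \<Lambda> (\<lambda>l. P l - P' l) (\<lambda>j. Q j - Q' j) = 0"
        and d2: "1 \<le> degQ (\<lambda>j. Q j - Q' j)" by auto
      have dlt: "degQ Q' < m" using d2 dQ le degQ_minus[OF le] degQ_mono[OF le] by linarith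
      have s1: "small_div \<omega> \<Lambda> P' Q' = 0"
      proof (cases "one_fts P' Q' \<noteq> 0 \<and> l = m'")
        case True then show ?thesis by (auto simp: one_fts_def small_div_zero split: if_splits)
      next
        case False
        then have "dX m' (\<Phi> (Inl l)) P' Q' \<noteq> 0" using g by (auto simp: jac_def split: if_splits)
        then have "\<Phi> (Inl l) P' Q' \<noteq> 0" by (simp add: dX_def)
        then show ?thesis using IH dlt by blast
      qed
      show False using small_div_split[OF le, of \<omega> \<Lambda> P P'] s1 s2 sdn by simp
    qed
  qed simp
  also have "\<dots> = \<i> * of_int (P m') * \<Phi> (Inl l) P Q * of_real (\<omega> m')"
    using f00 one0 by (simp add: jac_def dX_def)
  finally show ?thesis .
qed

lemma coeff_jac_NF_Inl_Inr:
  assumes dQ: "degQ Q = m" and sdn: "small_div \<omega> \<Lambda> P Q \<noteq> 0"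
  shows "mul_fts (jac \<Phi> (Inl l) (Inr j)) (add_vf (S_vf \<omega> \<Lambda>) Rn (Inr j)) P Q
     = of_nat (Q j) * \<Phi> (Inl l) P Q * \<Lambda> j"
proof -
  have oth: "jac \<Phi> (Inl l) (Inr j) P' Q' * add_vf (S_vf \<omega> \<Lambda>) Rn (Inr j) (\<lambda>l. P l - P' l) (\<lambda>j. Q j - Q' j) = 0"
    if le: "\<forall>j. Q' j \<le> Q j" and ne: "\<not> (1 \<le> Q j \<and> (P', Q') = (P, \<lambda>j'. Q j' - unitQ j j'))" for P' Q'
  proof (rule ccontr)
    assume "\<not> ?thesis"
    then have g: "jac \<Phi> (Inl l) (Inr j) P' Q' \<noteq> 0" and f: "add_vf (S_vf \<omega> \<Lambda>) Rn (Inr j) (\<lambda>l. P l - P' l) (\<lambda>j. Q j - Q' j) \<noteq> 0"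
      by auto
    have rn: "Rn (Inr j) (\<lambda>l. P l - P' l) (\<lambda>j. Q j - Q' j) \<noteq> 0"
      using NF_Inr_nonzero[OF f] ne le by (auto simp: minus_P_eq_0_iff minus_Q_eq_unit_iff[OF le])
    from RnY[OF rn] have s2: "small_div \<omega> \<Lambda> (\<lambda>l. P l - P' l) (\<lambda>j. Q j - Q' j) = \<Lambda> j"
      and d2: "2 \<le> degQ (\<lambda>j. Q j - Q' j)" by auto
    have dlt: "degQ (\<lambda>j'. Q' j' + unitQ j j') < m"
      using d2 dQ le degQ_minus[OF le] degQ_mono[OF le] degQ_plus_unit[of Q' j] by linarith
    have "\<Phi> (Inl l) P' (\<lambda>j'. Q' j' + unitQ j j') \<noteq> 0" using g by (simp add: jac_def dY_def)
    then have "small_div \<omega> \<Lambda> P' (\<lambda>j'. Q' j' + unitQ j j') = 0" using IH dlt by blast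
    then have s1: "small_div \<omega> \<Lambda> P' Q' = - \<Lambda> j" using small_div_plus_unit[of \<omega> \<Lambda> P' Q' j] by (simp add: eq_neg_iff_add_eq_0)
    show False using small_div_split[OF le, of \<omega> \<Lambda> P P'] s1 s2 sdn by simp
  qed
  show ?thesis
  proof (cases "1 \<le> Q j")
    case True
    define Q1 where "Q1 = (\<lambda>j'. Q j' - unitQ j j')"
    have le1: "\<forall>j'. Q1 j' \<le> Q j'" by (simp add: Q1_def)
    have "mul_fts (jac \<Phi> (Inl l) (Inr j)) (add_vf (S_vf \<omega> \<Lambda>) Rn (Inr j)) P Q
        = jac \<Phi> (Inl l) (Inr j) P Q1 * add_vf (S_vf \<omega> \<Lambda>) Rn (Inr j) (\<lambda>l. P l - P l) (\<lambda>j'. Q j' - Q1 j')"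
      by (rule mul_fts_single[OF le1]) (use oth True in \<open>auto simp: Q1_def\<close>)
    also have "(\<lambda>j'. Q j' - Q1 j') = unitQ j" using True by (auto simp: Q1_def fun_eq_iff unitQ_def)
    also have "add_vf (S_vf \<omega> \<Lambda>) Rn (Inr j) (\<lambda>l. P l - P l) (unitQ j) = \<Lambda> j"
      using RnY[of j "\<lambda>_. 0" "unitQ j"] by (auto simp: add_vf_def S_vf_def degQ_unit)
    also have "jac \<Phi> (Inl l) (Inr j) P Q1 = of_nat (Q j) * \<Phi> (Inl l) P Q"
      using True minus_unit_plus_unit[of Q j, OF True] by (simp add: jac_def dY_def Q1_def unitQ_def)
    finally show ?thesis .
  next
    case False
    have "mul_fts (jac \<Phi> (Inl l) (Inr j)) (add_vf (S_vf \<omega> \<Lambda>) Rn (Inr j)) P Q = 0"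
      by (rule mul_fts_zero) (use oth False in auto)
    then show ?thesis using False by simp
  qed
qed

lemma coeff_jac_apply_NF_Inl:
  assumes dQ: "degQ Q = m" and sdn: "small_div \<omega> \<Lambda> P Q \<noteq> 0"
  shows "jac_apply \<Phi> (add_vf (S_vf \<omega> \<Lambda>) Rn) (Inl l) P Q = small_div \<omega> \<Lambda> P Q * \<Phi> (Inl l) P Q"
proof -
  have "jac_apply \<Phi> (add_vf (S_vf \<omega> \<Lambda>) Rn) (Inl l) P Q
      = (\<Sum>m'\<in>UNIV. \<i> * of_int (P m') * \<Phi> (Inl l) P Q * of_real (\<omega> m')) + (\<Sum>j\<in>UNIV. of_nat (Q j) * \<Phi> (Inl l) P Q * \<Lambda> j)"
    unfolding jac_apply_def sum_UNIV_Plus using coeff_jac_NF_Inl_Inl[OF dQ sdn] coeff_jac_NF_Inl_Inr[OF dQ sdn] by simp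
  also have "\<dots> = small_div \<omega> \<Lambda> P Q * \<Phi> (Inl l) P Q"
    unfolding small_div_def by (simp add: sum_distrib_left sum_distrib_right algebra_simps)
  finally show ?thesis .
qed

lemma coeff_jac_NF_Inr_Inl:
  assumes dQ: "degQ Q0 = m" and sdn: "small_div \<omega> \<Lambda> P Q0 \<noteq> 0"
  shows "mul_fts (jac \<Phi> (Inr i) (Inl m')) (add_vf (S_vf \<omega> \<Lambda>) Rn (Inl m')) P (\<lambda>j. Q0 j + unitQ i j)
     = \<i> * of_int (P m') * \<Phi> (Inr i) P Q0 * of_real (\<omega> m')"
proof -
  define Q where "Q = (\<lambda>j. Q0 j + unitQ i j)"
  have Qi: "1 \<le> Q i" by (simp add: Q_def unitQ_def)
  have QQ0: "(\<lambda>j. Q j - unitQ i j) = Q0" by (simp add: Q_def)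
  have dQQ: "degQ Q = m + 1" by (simp add: Q_def degQ_plus_unit dQ)
  have sdQ: "small_div \<omega> \<Lambda> P Q = small_div \<omega> \<Lambda> P Q0 + \<Lambda> i" by (simp add: Q_def small_div_plus_unit)
  have f00: "add_vf (S_vf \<omega> \<Lambda>) Rn (Inl m') (\<lambda>_. 0) (\<lambda>_. 0) = of_real (\<omega> m')"
    using RnX[of m' "\<lambda>_. 0" "\<lambda>_. 0"] by (auto simp: add_vf_def S_vf_def degQ_def)
  have "mul_fts (jac \<Phi> (Inr i) (Inl m')) (add_vf (S_vf \<omega> \<Lambda>) Rn (Inl m')) P Q
      = jac \<Phi> (Inr i) (Inl m') P Q * add_vf (S_vf \<omega> \<Lambda>) Rn (Inl m') (\<lambda>l. P l - P l) (\<lambda>j. Q j - Q j)"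
  proof (rule mul_fts_single)
    fix P' Q' assume le: "\<forall>j. Q' j \<le> Q j" and ne: "(P', Q') \<noteq> (P, Q)"
    show "jac \<Phi> (Inr i) (Inl m') P' Q' * add_vf (S_vf \<omega> \<Lambda>) Rn (Inl m') (\<lambda>l. P l - P' l) (\<lambda>j. Q j - Q' j) = 0"
    proof (rule ccontr)
      assume "\<not> ?thesis"
      then have g: "jac \<Phi> (Inr i) (Inl m') P' Q' \<noteq> 0" and f: "add_vf (S_vf \<omega> \<Lambda>) Rn (Inl m') (\<lambda>l. P l - P' l) (\<lambda>j. Q j - Q' j) \<noteq> 0"
        by auto
      have rn: "Rn (Inl m') (\<lambda>l. P l - P' l) (\<lambda>j. Q j - Q' j) \<noteq> 0"
        using NF_Inl_nonzero[OF f] ne le by (auto simp: minus_P_eq_0_iff minus_Q_eq_0_iff)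
      from RnX[OF rn] have s2: "small_div \<omega> \<Lambda> (\<lambda>l. P l - P' l) (\<lambda>j. Q j - Q' j) = 0"
        and d2: "1 \<le> degQ (\<lambda>j. Q j - Q' j)" by auto
      have Q'i: "1 \<le> Q' i" and phi: "\<Phi> (Inr i) P' (\<lambda>j. Q' j - unitQ i j) \<noteq> 0"
        using g by (auto simp: jac_def mulY_def dX_def split: if_splits)
      have dd: "degQ (\<lambda>j. Q' j - unitQ i j) = degQ Q' - 1"
        using degQ_minus_unit[of Q' i] Q'i by simp
      have dlt: "degQ (\<lambda>j. Q' j - unitQ i j) < m"
      proof -
        have "Q' i \<le> degQ Q'" unfolding degQ_def by (rule member_le_sum) auto
        then show ?thesis using d2 dQQ le degQ_minus[OF le] degQ_mono[OF le] dd Q'i by linarith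
      qed
      have "small_div \<omega> \<Lambda> P' (\<lambda>j. Q' j - unitQ i j) = 0" using IH dlt phi by blast
      then have s1: "small_div \<omega> \<Lambda> P' Q' = \<Lambda> i"
        using small_div_plus_unit[of \<omega> \<Lambda> P' "\<lambda>j. Q' j - unitQ i j" i] minus_unit_plus_unit[of Q' i, OF Q'i] by simp
      show False using small_div_split[OF le, of \<omega> \<Lambda> P P'] s1 s2 sdn sdQ by simp
    qed
  qed simp
  also have "\<dots> = \<i> * of_int (P m') * \<Phi> (Inr i) P Q0 * of_real (\<omega> m')"
    using f00 Qi QQ0 by (simp add: jac_def dX_def mulY_def)
  finally show ?thesis by (simp add: Q_def)
qed

lemma coeff_jac_NF_Inr_Inr_other:
  assumes Q: "Q = (\<lambda>k. Q0 k + unitQ i k)" and dQ: "degQ Q0 = m" and sdn: "small_div \<omega> \<Lambda> P Q0 \<noteq> 0"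
    and le: "\<forall>k. Q' k \<le> Q k" and ne: "\<not> (1 \<le> Q j \<and> (P', Q') = (P, \<lambda>k. Q k - unitQ j k))"
  shows "jac \<Phi> (Inr i) (Inr j) P' Q' * add_vf (S_vf \<omega> \<Lambda>) Rn (Inr j) (\<lambda>l. P l - P' l) (\<lambda>k. Q k - Q' k) = 0"
proof (rule ccontr)
  have dQQ: "degQ Q = m + 1" using Q dQ by (simp add: degQ_plus_unit)
  have sdQ: "small_div \<omega> \<Lambda> P Q = small_div \<omega> \<Lambda> P Q0 + \<Lambda> i" using Q by (simp add: small_div_plus_unit)
  assume "\<not> ?thesis"
  then have g: "jac \<Phi> (Inr i) (Inr j) P' Q' \<noteq> 0" and f: "add_vf (S_vf \<omega> \<Lambda>) Rn (Inr j) (\<lambda>l. P l - P' l) (\<lambda>k. Q k - Q' k) \<noteq> 0"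
    by auto
  have rn: "Rn (Inr j) (\<lambda>l. P l - P' l) (\<lambda>k. Q k - Q' k) \<noteq> 0"
    using NF_Inr_nonzero[OF f] ne le by (auto simp: minus_P_eq_0_iff minus_Q_eq_unit_iff[OF le])
  from RnY[OF rn] have s2: "small_div \<omega> \<Lambda> (\<lambda>l. P l - P' l) (\<lambda>k. Q k - Q' k) = \<Lambda> j"
    and d2: "2 \<le> degQ (\<lambda>k. Q k - Q' k)" by auto
  have dlt: "degQ Q' < m" using d2 dQQ le degQ_minus[OF le] degQ_mono[OF le] by linarith
  have split: "small_div \<omega> \<Lambda> P Q = small_div \<omega> \<Lambda> P' Q' + \<Lambda> j" using small_div_split[OF le, of \<omega> \<Lambda> P P'] s2 by simp
  show False
  proof (cases "i = j \<and> \<Phi> (Inr i) P' Q' \<noteq> 0")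
    case True
    then have "small_div \<omega> \<Lambda> P' Q' = 0" using IH dlt by blast
    then show False using split sdQ sdn True by simp
  next
    case False
    then have Q'i: "1 \<le> Q' i" and phi: "\<Phi> (Inr i) P' (\<lambda>k. (Q' k - unitQ i k) + unitQ j k) \<noteq> 0"
      using g by (auto simp: jac_def mulY_def dY_def split: if_splits)
    have dd: "degQ (\<lambda>k. (Q' k - unitQ i k) + unitQ j k) = degQ Q'"
    proof -
      have "Q' i \<le> degQ Q'" unfolding degQ_def by (rule member_le_sum) auto
      then show ?thesis using degQ_plus_unit[of "\<lambda>k. Q' k - unitQ i k" j] degQ_minus_unit[of Q' i] Q'i by simp
    qed
    have "small_div \<omega> \<Lambda> P' (\<lambda>k. (Q' k - unitQ i k) + unitQ j k) = 0" using IH dlt dd phi by simp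
    then have "small_div \<omega> \<Lambda> P' (\<lambda>k. Q' k - unitQ i k) = - \<Lambda> j"
      using small_div_plus_unit[of \<omega> \<Lambda> P' "\<lambda>k. Q' k - unitQ i k" j] by (simp add: eq_neg_iff_add_eq_0)
    then have "small_div \<omega> \<Lambda> P' Q' = \<Lambda> i - \<Lambda> j"
      using small_div_plus_unit[of \<omega> \<Lambda> P' "\<lambda>k. Q' k - unitQ i k" i] minus_unit_plus_unit[of Q' i, OF Q'i] by simp
    then show False using split sdQ sdn by simp
  qed
qed

lemma coeff_jac_NF_Inr_Inr:
  assumes dQ: "degQ Q0 = m" and sdn: "small_div \<omega> \<Lambda> P Q0 \<noteq> 0"
  shows "mul_fts (jac \<Phi> (Inr i) (Inr j)) (add_vf (S_vf \<omega> \<Lambda>) Rn (Inr j)) P (\<lambda>k. Q0 k + unitQ i k)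
     = \<Lambda> j * ((if i = j then \<Phi> (Inr i) P Q0 else 0) + of_nat (Q0 j) * \<Phi> (Inr i) P Q0)"
proof -
  define Q where "Q = (\<lambda>k. Q0 k + unitQ i k)"
  have Qi: "1 \<le> Q i" by (simp add: Q_def unitQ_def)
  have oth: "jac \<Phi> (Inr i) (Inr j) P' Q' * add_vf (S_vf \<omega> \<Lambda>) Rn (Inr j) (\<lambda>l. P l - P' l) (\<lambda>k. Q k - Q' k) = 0"
    if "\<forall>k. Q' k \<le> Q k" "\<not> (1 \<le> Q j \<and> (P', Q') = (P, \<lambda>k. Q k - unitQ j k))" for P' Q'
    by (rule coeff_jac_NF_Inr_Inr_other[OF Q_def dQ sdn that])
  show ?thesis
  proof (cases "1 \<le> Q j")
    case True
    define Q1 where "Q1 = (\<lambda>k. Q k - unitQ j k)"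
    have le1: "\<forall>k. Q1 k \<le> Q k" by (simp add: Q1_def)
    have "mul_fts (jac \<Phi> (Inr i) (Inr j)) (add_vf (S_vf \<omega> \<Lambda>) Rn (Inr j)) P Q
        = jac \<Phi> (Inr i) (Inr j) P Q1 * add_vf (S_vf \<omega> \<Lambda>) Rn (Inr j) (\<lambda>l. P l - P l) (\<lambda>k. Q k - Q1 k)"
      by (rule mul_fts_single[OF le1]) (use oth True in \<open>auto simp: Q1_def\<close>)
    also have "(\<lambda>k. Q k - Q1 k) = unitQ j" using True by (auto simp: Q1_def fun_eq_iff unitQ_def)
    also have "add_vf (S_vf \<omega> \<Lambda>) Rn (Inr j) (\<lambda>l. P l - P l) (unitQ j) = \<Lambda> j"
      using RnY[of j "\<lambda>_. 0" "unitQ j"] by (auto simp: add_vf_def S_vf_def degQ_unit)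
    also have "jac \<Phi> (Inr i) (Inr j) P Q1 = (if i = j then \<Phi> (Inr i) P Q0 else 0) + of_nat (Q0 j) * \<Phi> (Inr i) P Q0"
      unfolding Q1_def Q_def by (rule jac_Inr_Inr_coeff[of Q0 j i, OF True[unfolded Q_def]])
    finally show ?thesis by (simp add: Q_def mult.commute)
  next
    case False
    have ji: "j \<noteq> i" using False Qi by auto
    have Q0j: "Q0 j = 0" using False ji by (simp add: Q_def unitQ_def)
    have "mul_fts (jac \<Phi> (Inr i) (Inr j)) (add_vf (S_vf \<omega> \<Lambda>) Rn (Inr j)) P Q = 0"
      by (rule mul_fts_zero) (use oth False in auto)
    then show ?thesis using ji Q0j by (simp add: Q_def)
  qed
qed

lemma coeff_jac_apply_NF_Inr:
  assumes dQ: "degQ Q0 = m" and sdn: "small_div \<omega> \<Lambda> P Q0 \<noteq> 0"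
  shows "jac_apply \<Phi> (add_vf (S_vf \<omega> \<Lambda>) Rn) (Inr i) P (\<lambda>k. Q0 k + unitQ i k)
      = (small_div \<omega> \<Lambda> P Q0 + \<Lambda> i) * \<Phi> (Inr i) P Q0"
proof -
  have "jac_apply \<Phi> (add_vf (S_vf \<omega> \<Lambda>) Rn) (Inr i) P (\<lambda>k. Q0 k + unitQ i k)
      = (\<Sum>m'\<in>UNIV. \<i> * of_int (P m') * \<Phi> (Inr i) P Q0 * of_real (\<omega> m'))
        + (\<Sum>j\<in>UNIV. \<Lambda> j * ((if i = j then \<Phi> (Inr i) P Q0 else 0) + of_nat (Q0 j) * \<Phi> (Inr i) P Q0))"
    unfolding jac_apply_def sum_UNIV_Plus using coeff_jac_NF_Inr_Inl[OF dQ sdn] coeff_jac_NF_Inr_Inr[OF dQ sdn] by simp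
  also have "(\<Sum>j\<in>UNIV. \<Lambda> j * ((if i = j then \<Phi> (Inr i) P Q0 else 0) + of_nat (Q0 j) * \<Phi> (Inr i) P Q0))
      = \<Lambda> i * \<Phi> (Inr i) P Q0 + (\<Sum>j\<in>UNIV. \<Lambda> j * of_nat (Q0 j) * \<Phi> (Inr i) P Q0)"
  proof -
    have d: "(\<Sum>j\<in>UNIV. \<Lambda> j * (if i = j then \<Phi> (Inr i) P Q0 else 0)) = \<Lambda> i * \<Phi> (Inr i) P Q0"
      by (subst sum.remove[of _ i]) auto
    show ?thesis by (simp add: distrib_left sum.distrib d mult.assoc)
  qed
  also have "(\<Sum>m'\<in>UNIV. \<i> * of_int (P m') * \<Phi> (Inr i) P Q0 * of_real (\<omega> m')) + (\<Lambda> i * \<Phi> (Inr i) P Q0 + (\<Sum>j\<in>UNIV. \<Lambda> j * of_nat (Q0 j) * \<Phi> (Inr i) P Q0))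
      = (small_div \<omega> \<Lambda> P Q0 + \<Lambda> i) * \<Phi> (Inr i) P Q0"
    unfolding small_div_def by (simp add: sum_distrib_left sum_distrib_right algebra_simps)
  finally show ?thesis .
qed

lemma coeff_jac_apply_NF:
  assumes "degQ Q = m" and "small_div \<omega> \<Lambda> P Q \<noteq> 0"
  shows "jac_apply \<Phi> (add_vf (S_vf \<omega> \<Lambda>) Rn) a P (shiftQ a Q) = (small_div \<omega> \<Lambda> P Q + vf_eigenvalue \<Lambda> a) * \<Phi> a P Q"
  using coeff_jac_apply_NF_Inl[OF assms] coeff_jac_apply_NF_Inr[OF assms]
  by (cases a) (simp_all add: shiftQ_def vf_eigenvalue_def)

end

definition S_comp :: "('d \<Rightarrow> real) \<Rightarrow> ('n \<Rightarrow> complex) \<Rightarrow> ('d, 'n) fvf \<Rightarrow> ('d, 'n) fvf" where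
  "S_comp \<omega> \<Lambda> \<Phi> a = (case a of
      Inl l \<Rightarrow> (\<lambda>P Q. of_real (\<omega> l) * one_fts P Q)
    | Inr i \<Rightarrow> (\<lambda>P Q. \<Lambda> i * mulY i (\<Phi> (Inr i)) P Q))"

lemma S_comp_shiftQ:
  assumes "small_div \<omega> \<Lambda> P Q \<noteq> 0"
  shows "S_comp \<omega> \<Lambda> \<Phi> a P (shiftQ a Q) = vf_eigenvalue \<Lambda> a * \<Phi> a P Q"
  using assms by (cases a) (auto simp: S_comp_def shiftQ_def vf_eigenvalue_def one_fts_def small_div_zero mulY_def unitQ_def)
lemma has_sum_one_fts:
  "((\<lambda>(P, Q). (c * one_fts P Q) * mono_term P Q X Y) has_sum c) UNIV"
proof -
  have "(\<lambda>(P, Q). (c * one_fts P Q) * mono_term P Q X Y) = (\<lambda>x. if x = ((\<lambda>_. 0), (\<lambda>_. 0)) then c else 0)"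
    by (auto simp: fun_eq_iff one_fts_def mono_term_def)
  then show ?thesis using has_sum_delta by simp
qed

lemma mono_term_unitQ: "mono_term (\<lambda>_. 0) (unitQ i) X Y = Y i"
proof -
  have "(\<Prod>j\<in>UNIV. Y j ^ unitQ i j) = Y i"
    by (subst prod.remove[of _ i]) (auto simp: unitQ_def)
  then show ?thesis by (simp add: mono_term_def)
qed

lemma has_sum_unitQ_coeff:
  "((\<lambda>(P, Q). (if P = (\<lambda>_. 0) \<and> Q = unitQ i then c else 0) * mono_term P Q X Y) has_sum (c * Y i)) UNIV"
proof -
  have "(\<lambda>(P, Q). (if P = (\<lambda>_. 0) \<and> Q = unitQ i then c else 0) * mono_term P Q X Y) = (\<lambda>x. if x = ((\<lambda>_. 0), unitQ i) then c * Y i else 0)"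
    by (rule ext) (clarsimp simp: mono_term_unitQ split: if_splits)
  then show ?thesis using has_sum_delta by simp
qed

lemma mono_term_plus_unitQ: "mono_term P (\<lambda>j. Q j + unitQ i j) X Y = Y i * mono_term P Q X Y"
proof -
  have "(\<Prod>j\<in>UNIV. Y j ^ (Q j + unitQ i j)) = (\<Prod>j\<in>UNIV. Y j ^ unitQ i j) * (\<Prod>j\<in>UNIV. Y j ^ Q j)"
    by (simp add: power_add prod.distrib mult.commute)
  also have "(\<Prod>j\<in>UNIV. Y j ^ unitQ i j) = Y i"
    by (subst prod.remove[of _ i]) (auto simp: unitQ_def)
  finally show ?thesis by (simp add: mono_term_def mult_ac)
qed

lemma has_sum_mulY:
  assumes "((\<lambda>(P, Q). f P Q * mono_term P Q X Y) has_sum v) UNIV"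
  shows "((\<lambda>(P, Q). mulY i f P Q * mono_term P Q X Y) has_sum (Y i * v)) UNIV"
proof -
  define h where "h = (\<lambda>(P :: 'a \<Rightarrow> int, Q :: 'b \<Rightarrow> nat). (P, \<lambda>j. Q j + unitQ i j))"
  have inj: "inj_on h UNIV" by (auto simp: h_def inj_on_def fun_eq_iff)
  have h1: "((\<lambda>(P, Q). Y i * (f P Q * mono_term P Q X Y)) has_sum (Y i * v)) UNIV"
    using has_sum_cmult_right[OF assms, of "Y i"] by (simp add: case_prod_unfold)
  have "((\<lambda>(P, Q). mulY i f P Q * mono_term P Q X Y) \<circ> h) = (\<lambda>(P, Q). Y i * (f P Q * mono_term P Q X Y))"
  proof (rule ext)
    fix x :: "('a \<Rightarrow> int) \<times> ('b \<Rightarrow> nat)"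
    obtain P Q where x: "x = (P, Q)" by (cases x)
    have u: "unitQ i i = 1" by (simp add: unitQ_def)
    show "((\<lambda>(P, Q). mulY i f P Q * mono_term P Q X Y) \<circ> h) x = (\<lambda>(P, Q). Y i * (f P Q * mono_term P Q X Y)) x"
      by (simp add: x h_def mulY_def u mono_term_plus_unitQ)
  qed
  with h1 have "(((\<lambda>(P, Q). mulY i f P Q * mono_term P Q X Y) \<circ> h) has_sum (Y i * v)) UNIV" by simp
  then have h2: "((\<lambda>(P, Q). mulY i f P Q * mono_term P Q X Y) has_sum (Y i * v)) (h ` UNIV)"
    using has_sum_reindex[OF inj] by blast
  show ?thesis
  proof (rule has_sum_cong_neutral[THEN iffD1, OF _ _ _ h2])
    fix x assume "x \<in> UNIV - h ` UNIV"
    then obtain P Q where x: "x = (P, Q)" and nx: "x \<notin> h ` UNIV" by (cases x) auto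
    have "\<not> 1 \<le> Q i"
    proof
      assume "1 \<le> Q i"
      then have "x = h (P, \<lambda>j. Q j - unitQ i j)" by (simp add: x h_def minus_unit_plus_unit)
      then show False using nx by auto
    qed
    then show "(\<lambda>(P, Q). mulY i f P Q * mono_term P Q X Y) x = 0" by (simp add: x mulY_def)
  qed auto
qed


definition S_value :: "('d \<Rightarrow> real) \<Rightarrow> ('n \<Rightarrow> complex) \<Rightarrow> ('n \<Rightarrow> complex) \<Rightarrow> 'd + 'n \<Rightarrow> complex" where
  "S_value \<omega> \<Lambda> Y a = (case a of Inl l \<Rightarrow> of_real (\<omega> l) | Inr i \<Rightarrow> \<Lambda> i * Y i)"

lemma has_sum_S_vf:
  "((\<lambda>(P, Q). S_vf \<omega> \<Lambda> a P Q * mono_term P Q X Y) has_sum S_value \<omega> \<Lambda> Y a) UNIV"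
proof (cases a)
  case (Inl l)
  show ?thesis
  proof -
    have "S_vf \<omega> \<Lambda> a = (\<lambda>P Q. of_real (\<omega> l) * one_fts P Q)"
      using Inl by (auto simp: S_vf_def one_fts_def fun_eq_iff)
    then show ?thesis using has_sum_one_fts[of "of_real (\<omega> l)" X Y] Inl by (simp add: S_value_def)
  qed
next
  case (Inr i)
  then show ?thesis using has_sum_unitQ_coeff[of i "\<Lambda> i" X Y] by (simp add: S_vf_def S_value_def)
qed

lemma has_sum_S_comp:
  assumes "analytic_fts r \<rho> (\<Phi> a)" "\<forall>l. \<bar>Im (X l)\<bar> \<le> r" "\<forall>j. cmod (Y j) \<le> \<rho>"
  shows "((\<lambda>(P, Q). S_comp \<omega> \<Lambda> \<Phi> a P Q * mono_term P Q X Y) has_sum S_value \<omega> \<Lambda> (map_Y \<Phi> X Y) a) UNIV"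
proof (cases a)
  case (Inl l)
  then show ?thesis using has_sum_one_fts[of "of_real (\<omega> l)" X Y] by (simp add: S_comp_def S_value_def)
next
  case (Inr i)
  then show ?thesis
    using has_sum_cmult_right[OF has_sum_mulY[OF analytic_fts_has_sum[OF assms]], of "\<Lambda> i" i]
    by (simp add: S_comp_def S_value_def map_Y_def case_prod_unfold mult_ac)
qed

section \<open>Twisting by the flow\<close>

lemma exp_ne_1_small_time:
  fixes \<mu> :: complex
  assumes "\<mu> \<noteq> 0"
  defines "t \<equiv> min 1 (pi / cmod \<mu>)"
  shows "0 < t" "t \<le> 1" "exp (of_real t * \<mu>) \<noteq> 1"
proof -
  show t0: "0 < t" using assms by (simp add: t_def)
  show "t \<le> 1" by (simp add: t_def)
  have tm: "t * cmod \<mu> \<le> pi"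
  proof -
    have "t \<le> pi / cmod \<mu>" by (simp add: t_def)
    then have "t * cmod \<mu> \<le> (pi / cmod \<mu>) * cmod \<mu>" by (rule mult_right_mono) simp
    then show ?thesis using assms by simp
  qed
  show "exp (of_real t * \<mu>) \<noteq> 1"
  proof
    assume "exp (of_real t * \<mu>) = 1"
    then obtain n where re: "Re (of_real t * \<mu>) = 0" and im: "Im (of_real t * \<mu>) = real_of_int (2 * n) * pi"
      unfolding exp_eq_1 by blast
    have "\<bar>Im (of_real t * \<mu>)\<bar> \<le> cmod (of_real t * \<mu>)" by (rule abs_Im_le_cmod)
    also have "\<dots> = t * cmod \<mu>" using t0 by (simp add: norm_mult)
    also have "\<dots> \<le> pi" by (rule tm)
    finally have h: "\<bar>Im (of_real t * \<mu>)\<bar> \<le> pi" .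
    have "\<bar>real_of_int (2 * n)\<bar> * pi = \<bar>Im (of_real t * \<mu>)\<bar>" unfolding im by (simp add: abs_mult)
    with h have "\<bar>real_of_int (2 * n)\<bar> * pi \<le> 1 * pi" by simp
    then have "\<bar>real_of_int (2 * n)\<bar> \<le> 1" using pi_gt_zero mult_le_cancel_right_pos by blast
    then have "n = 0" by linarith
    then have "of_real t * \<mu> = 0" using re im by (simp add: complex_eq_iff)
    then show False using t0 assms by simp
  qed
qed

lemma norm_twisted_diff_le:
  fixes A B :: "('d::finite, 'n::finite) fts"
  assumes anA: "analytic_fts rV \<rho>V A" and anB: "analytic_fts rV \<rho>V B"
    and resA: "\<And>P Q. A P Q \<noteq> 0 \<Longrightarrow> small_div \<omega> \<Lambda> P Q = lam"
    and ordA: "has_order ko A" and ko: "1 \<le> ko" and ordB: "has_order M B"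
    and r1: "r1 < rV" and \<rho>': "\<rho>' < \<rho>V" and s: "0 < s" "s \<le> \<rho>'"
    and X1: "\<forall>l. \<bar>Im (X1 l)\<bar> \<le> r1" and X2: "\<forall>l. \<bar>Im (X2 l)\<bar> \<le> r1"
    and Y1: "\<forall>j. cmod (Y1 j) \<le> s" and Y2: "\<forall>j. cmod (Y2 j) \<le> s"
    and Yt: "\<forall>j. cmod (flow_Y \<Lambda> t Y1 j) \<le> s"
    and eX: "\<forall>l. cmod (X1 l - X2 l) \<le> eX" and eY: "\<forall>j. cmod (Y1 j - Y2 j) \<le> eY"
  defines "G \<equiv> \<lambda>X Y. eval_fts A X Y + eval_fts B X Y"
    and "e \<equiv> exp (of_real t * lam)"
  shows "cmod (G (flow_X \<omega> t X1) (flow_Y \<Lambda> t Y1) - e * G X2 Y2)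
    \<le> cmod e * weighted_norm rV \<rho>V A * (s ^ ko * eX / ((rV - r1) * \<rho>' ^ ko) + s ^ (ko - 1) * eY / ((1 - \<rho>' / \<rho>V) * \<rho>' ^ ko))
      + (1 + cmod e) * weighted_norm rV \<rho>V B * (s / \<rho>V) ^ M"
proof -
  have inV: "\<forall>l. \<bar>Im (X l)\<bar> \<le> rV" if "\<forall>l. \<bar>Im (X l)\<bar> \<le> r1" for X :: "'d \<Rightarrow> complex"
    using that r1 by (meson less_imp_le order_trans)
  have sV: "s \<le> \<rho>V" using s \<rho>' by linarith
  have inV': "\<forall>j. cmod (Y j) \<le> \<rho>V" if "\<forall>j. cmod (Y j) \<le> s" for Y :: "'n \<Rightarrow> complex"
    using that sV by (meson order_trans)
  have Xt: "\<forall>l. \<bar>Im (flow_X \<omega> t X1 l)\<bar> \<le> rV" using inV[OF X1] by (simp add: Im_flow_X)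
  have dA: "cmod (eval_fts A X1 Y1 - eval_fts A X2 Y2) \<le> weighted_norm rV \<rho>V A *
      (s ^ ko * eX / ((rV - r1) * \<rho>' ^ ko) + s ^ (ko - 1) * eY / ((1 - \<rho>' / \<rho>V) * \<rho>' ^ ko))"
    by (rule norm_eval_fts_diff_le[OF anA ordA ko r1 \<rho>' s X1 X2 Y1 Y2 eX eY])
  have dBt: "cmod (eval_fts B (flow_X \<omega> t X1) (flow_Y \<Lambda> t Y1)) \<le> weighted_norm rV \<rho>V B * (s / \<rho>V) ^ M"
    using norm_eval_fts_le_order[OF anB ordB Xt Yt] s sV by simp
  have dB2: "cmod (eval_fts B X2 Y2) \<le> weighted_norm rV \<rho>V B * (s / \<rho>V) ^ M"
    using norm_eval_fts_le_order[OF anB ordB inV[OF X2] Y2] s sV by simp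
  have "eval_fts A (flow_X \<omega> t X1) (flow_Y \<Lambda> t Y1) = e * eval_fts A X1 Y1"
    unfolding e_def by (rule eval_fts_flow_resonant[OF anA resA inV[OF X1] inV'[OF Y1] inV'[OF Yt]])
  then have eqG: "G (flow_X \<omega> t X1) (flow_Y \<Lambda> t Y1) - e * G X2 Y2
      = e * (eval_fts A X1 Y1 - eval_fts A X2 Y2) + eval_fts B (flow_X \<omega> t X1) (flow_Y \<Lambda> t Y1) - e * eval_fts B X2 Y2"
    by (simp add: G_def algebra_simps)
  have "cmod (G (flow_X \<omega> t X1) (flow_Y \<Lambda> t Y1) - e * G X2 Y2) \<le> cmod e * cmod (eval_fts A X1 Y1 - eval_fts A X2 Y2)
      + cmod (eval_fts B (flow_X \<omega> t X1) (flow_Y \<Lambda> t Y1)) + cmod e * cmod (eval_fts B X2 Y2)"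
  proof -
    have "cmod (x + y - z) \<le> cmod x + cmod y + cmod z" for x y z :: complex
      using norm_triangle_ineq4[of "x + y" z] norm_triangle_ineq[of x y] by linarith
    from this[of "e * (eval_fts A X1 Y1 - eval_fts A X2 Y2)" "eval_fts B (flow_X \<omega> t X1) (flow_Y \<Lambda> t Y1)"
        "e * eval_fts B X2 Y2"]
    show ?thesis by (simp only: eqG norm_mult)
  qed
  also have "\<dots> \<le> cmod e * (weighted_norm rV \<rho>V A * (s ^ ko * eX / ((rV - r1) * \<rho>' ^ ko) + s ^ (ko - 1) * eY / ((1 - \<rho>' / \<rho>V) * \<rho>' ^ ko)))
      + weighted_norm rV \<rho>V B * (s / \<rho>V) ^ M + cmod e * (weighted_norm rV \<rho>V B * (s / \<rho>V) ^ M)"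
    using add_mono[OF add_mono[OF mult_left_mono[OF dA] dBt] mult_left_mono[OF dB2]] by simp
  finally show ?thesis by (simp add: distrib_right mult.assoc)
qed

lemma twisted_bound_collect:
  fixes \<epsilon> c3 C\<phi> :: real
  assumes ko: "1 \<le> ko"
    and "Lip = c3 ^ ko * C\<phi> / ((rV - r1) * \<rho>' ^ ko) + c3 ^ (ko - 1) * C\<phi> / ((1 - \<rho>' / \<rho>V) * \<rho>' ^ ko)"
  shows "El * KA * ((c3 * \<epsilon>) ^ ko * (C\<phi> * \<epsilon> ^ m) / ((rV - r1) * \<rho>' ^ ko)
          + (c3 * \<epsilon>) ^ (ko - 1) * (\<epsilon> * (C\<phi> * \<epsilon> ^ m)) / ((1 - \<rho>' / \<rho>V) * \<rho>' ^ ko))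
        + (1 + El) * KB * (c3 * \<epsilon> / \<rho>V) ^ M
    = El * KA * Lip * \<epsilon> ^ (m + ko) + (1 + El) * KB * (c3 / \<rho>V) ^ M * \<epsilon> ^ M"
proof -
  obtain k where k: "ko = Suc k" using ko by (cases ko) auto
  show ?thesis
    unfolding assms(2) k by (simp add: power_mult_distrib power_divide power_add field_simps)
qed

lemma exp_ne_small_time:
  fixes a b :: complex
  assumes "a \<noteq> b"
  obtains t :: real where "0 < t" "t \<le> 1" "exp (of_real t * a) \<noteq> exp (of_real t * b)"
proof -
  define t where "t = min 1 (pi / cmod (a - b))"
  have t: "0 < t" "t \<le> 1" "exp (of_real t * (a - b)) \<noteq> 1"
    using exp_ne_1_small_time[of "a - b"] assms by (simp_all add: t_def)
  have "exp (of_real t * a) \<noteq> exp (of_real t * b)"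
  proof
    assume "exp (of_real t * a) = exp (of_real t * b)"
    then have "exp (of_real t * (a - b)) = 1"
      by (simp add: right_diff_distrib exp_diff)
    with t(3) show False ..
  qed
  with t(1,2) that show ?thesis by blast
qed


locale flow_twist =
  fixes \<omega> :: "'d::finite \<Rightarrow> real" and \<Lambda> :: "'n::finite \<Rightarrow> complex" and \<Phi> :: "('d, 'n) fvf"
    and A B :: "('d, 'n) fts" and lam :: complex and ko M m :: nat and r0 \<rho>0 rV \<rho>V r1 \<delta>1 :: real
  assumes an\<Phi>: "\<And>a. analytic_fts r0 \<rho>0 (\<Phi> a)"
    and anA: "analytic_fts rV \<rho>V A" and anB: "analytic_fts rV \<rho>V B"
    and resA: "\<And>P Q. A P Q \<noteq> 0 \<Longrightarrow> small_div \<omega> \<Lambda> P Q = lam"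
    and ordA: "has_order ko A" and ko: "1 \<le> ko" and ordB: "has_order M B"
    and r1: "r1 < rV" and \<delta>1: "0 < \<delta>1"
    and margin: "\<And>X Y l. \<forall>l. Im (X l) = 0 \<Longrightarrow> \<forall>j. cmod (Y j) \<le> \<delta>1 \<Longrightarrow> \<bar>Im (eval_fts (\<Phi> (Inl l)) X Y)\<bar> \<le> r1"
    and res_below: "\<And>a P Q. degQ Q < m \<Longrightarrow> \<Phi> a P Q \<noteq> 0 \<Longrightarrow> small_div \<omega> \<Lambda> P Q = 0"
begin

definition G :: "('d \<Rightarrow> complex) \<Rightarrow> ('n \<Rightarrow> complex) \<Rightarrow> complex" where
  "G X Y = eval_fts A (map_X \<Phi> X Y) (map_Y \<Phi> X Y) + eval_fts B (map_X \<Phi> X Y) (map_Y \<Phi> X Y)"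

text \<open>\<open>EL\<close> bounds the growth of \<open>|Y|\<close> along the flow for \<open>0 \<le> t \<le> 1\<close>, \<open>c3 \<epsilon>\<close> the
  \<open>Y\<close>-parts of all points involved, and \<open>C\<phi> \<epsilon>^m\<close> the failure of \<open>\<Phi>\<close> to commute with
  the flow.\<close>

definition EL :: real where "EL = exp (\<Sum>j\<in>UNIV. cmod (\<Lambda> j))"
definition K\<Phi> :: real where "K\<Phi> = (\<Sum>a\<in>UNIV. weighted_norm r0 \<rho>0 (\<Phi> a))"
definition c3 :: real where "c3 = EL * (K\<Phi> + 1)"
definition C\<phi> :: real where "C\<phi> = 2 * K\<Phi> * (EL / \<rho>0) ^ m"

lemma norm_Lambda_le: "\<forall>j. cmod (\<Lambda> j) \<le> ln EL"
  by (auto simp: EL_def intro: member_le_sum)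

lemma constants_bounds:
  shows "1 \<le> EL" "0 \<le> K\<Phi>" "0 < c3" "0 \<le> C\<phi>" "0 < r0" "0 < \<rho>0" "0 < rV" "0 < \<rho>V"
    and "weighted_norm r0 \<rho>0 (\<Phi> a) \<le> K\<Phi>"
proof -
  show KK: "weighted_norm r0 \<rho>0 (\<Phi> a) \<le> K\<Phi>"
    unfolding K\<Phi>_def by (rule member_le_sum) (auto intro: weighted_norm_nonneg an\<Phi>)
  show EL: "1 \<le> EL" by (simp add: EL_def sum_nonneg)
  show K: "0 \<le> K\<Phi>" using KK weighted_norm_nonneg[OF an\<Phi>] by (meson order_trans)
  show "0 < r0" "0 < \<rho>0" "0 < rV" "0 < \<rho>V" using an\<Phi>[of a] anA by (auto simp: analytic_fts_def)
  then show "0 < c3" "0 \<le> C\<phi>" using EL K by (simp_all add: c3_def C\<phi>_def)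
qed

text \<open>The two points compared in the twisting argument: \<open>U1\<close>, whose image under the flow is
  \<open>\<Phi> \<circ> e^(tS)\<close>, and \<open>\<Phi>\<close> itself.\<close>

lemma flowed_points_close:
  assumes t: "0 \<le> t" "t \<le> 1" and e: "0 < \<epsilon>" "\<epsilon> * EL \<le> \<rho>0" "\<epsilon> * EL \<le> \<delta>1"
    and X: "\<forall>l. Im (X l) = 0" and Y: "\<forall>j. cmod (Y j) \<le> \<epsilon>"
  defines "U1X \<equiv> \<lambda>l. X l + eval_fts (\<Phi> (Inl l)) (flow_X \<omega> t X) (flow_Y \<Lambda> t Y)"
    and "U1Y \<equiv> \<lambda>j. Y j * eval_fts (\<Phi> (Inr j)) (flow_X \<omega> t X) (flow_Y \<Lambda> t Y)"
  shows "flow_X \<omega> t U1X = map_X \<Phi> (flow_X \<omega> t X) (flow_Y \<Lambda> t Y)"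
    and "flow_Y \<Lambda> t U1Y = map_Y \<Phi> (flow_X \<omega> t X) (flow_Y \<Lambda> t Y)"
    and "\<forall>l. \<bar>Im (U1X l)\<bar> \<le> r1" "\<forall>l. \<bar>Im (map_X \<Phi> X Y l)\<bar> \<le> r1"
    and "\<forall>j. cmod (U1Y j) \<le> c3 * \<epsilon>" "\<forall>j. cmod (map_Y \<Phi> X Y j) \<le> c3 * \<epsilon>"
    and "\<forall>j. cmod (flow_Y \<Lambda> t U1Y j) \<le> c3 * \<epsilon>"
    and "\<forall>l. cmod (U1X l - map_X \<Phi> X Y l) \<le> C\<phi> * \<epsilon> ^ m"
    and "\<forall>j. cmod (U1Y j - map_Y \<Phi> X Y j) \<le> \<epsilon> * (C\<phi> * \<epsilon> ^ m)"
proof -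
  note c = constants_bounds
  have eEL: "\<epsilon> \<le> \<epsilon> * EL" using c(1) e by simp
  define Xt where "Xt = flow_X \<omega> t X"
  define Yt where "Yt = flow_Y \<Lambda> t Y"
  have Xt: "\<forall>l. Im (Xt l) = 0" using X by (simp add: Xt_def Im_flow_X)
  have Ytle: "\<forall>j. cmod (Yt j) \<le> \<epsilon> * EL"
    using norm_flow_Y_le[OF t norm_Lambda_le] Y c(1) by (auto simp: Yt_def mult.commute)
  have Y0: "\<forall>j. cmod (Y j) \<le> \<rho>0" and Yt0: "\<forall>j. cmod (Yt j) \<le> \<rho>0"
    using Y Ytle e(2) eEL by (meson order_trans)+
  have X0: "\<forall>l. \<bar>Im (X l)\<bar> \<le> r0" and Xt0: "\<forall>l. \<bar>Im (Xt l)\<bar> \<le> r0" using X Xt c by auto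
  define ph where "ph a = eval_fts (\<Phi> a) X Y" for a
  define pht where "pht a = eval_fts (\<Phi> a) Xt Yt" for a
  have phb: "cmod (ph a) \<le> K\<Phi>" "cmod (pht a) \<le> K\<Phi>" for a
    using norm_eval_fts_le_order[OF an\<Phi> _ X0 Y0, of 0] norm_eval_fts_le_order[OF an\<Phi> _ Xt0 Yt0, of 0]
      c(9)[of a] c(6) by (auto simp: ph_def pht_def has_order_def intro: order_trans)
  have phd: "cmod (pht a - ph a) \<le> C\<phi> * \<epsilon> ^ m" for a
  proof -
    have "cmod (pht a - ph a) \<le> 2 * weighted_norm r0 \<rho>0 (\<Phi> a) * (\<epsilon> * EL / \<rho>0) ^ m"
      using norm_eval_fts_flow_diff_le[OF an\<Phi> res_below t norm_Lambda_le X0 Y] e c(1)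
      by (simp add: pht_def ph_def Xt_def Yt_def field_simps)
    also have "\<dots> \<le> 2 * K\<Phi> * (\<epsilon> * EL / \<rho>0) ^ m"
      using c(9)[of a] e c(1) c(6) by (intro mult_right_mono) auto
    also have "\<dots> = C\<phi> * \<epsilon> ^ m" by (simp add: C\<phi>_def power_mult_distrib power_divide field_simps)
    finally show ?thesis .
  qed
  have U1: "U1X = (\<lambda>l. X l + pht (Inl l))" "U1Y = (\<lambda>j. Y j * pht (Inr j))"
    by (simp_all add: U1X_def U1Y_def pht_def Xt_def Yt_def)
  show flow_U1: "flow_X \<omega> t U1X = map_X \<Phi> (flow_X \<omega> t X) (flow_Y \<Lambda> t Y)"
    "flow_Y \<Lambda> t U1Y = map_Y \<Phi> (flow_X \<omega> t X) (flow_Y \<Lambda> t Y)"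
    by (auto simp: flow_X_def flow_Y_def U1X_def U1Y_def map_X_def map_Y_def fun_eq_iff)
  have "0 \<le> EL * \<epsilon>" using e c(1) by simp
  then have c3e2: "\<epsilon> * EL * K\<Phi> \<le> c3 * \<epsilon>" by (simp add: c3_def algebra_simps)
  have c3e1: "\<epsilon> * K\<Phi> \<le> c3 * \<epsilon>" using mult_right_mono[OF eEL c(2)] c3e2 by linarith
  show "\<forall>j. cmod (U1Y j) \<le> c3 * \<epsilon>"
    using Y phb(2) c3e1 e unfolding U1 norm_mult by (meson mult_mono norm_ge_zero order_trans less_imp_le)
  show "\<forall>j. cmod (map_Y \<Phi> X Y j) \<le> c3 * \<epsilon>"
    using Y phb(1) c3e1 e unfolding map_Y_def norm_mult ph_def by (meson mult_mono norm_ge_zero order_trans less_imp_le)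
  show "\<forall>j. cmod (flow_Y \<Lambda> t U1Y j) \<le> c3 * \<epsilon>"
    using Ytle phb(2) c3e2 e c(1) unfolding flow_U1 map_Y_def norm_mult pht_def Xt_def Yt_def
    by (meson mult_mono norm_ge_zero order_trans)
  show "\<forall>l. \<bar>Im (map_X \<Phi> X Y l)\<bar> \<le> r1"
    using margin[OF X] Y e(3) eEL X by (simp add: map_X_def) (meson order_trans)
  show "\<forall>l. \<bar>Im (U1X l)\<bar> \<le> r1"
    using margin[OF Xt] Ytle e(3) X by (simp add: U1 pht_def) (meson order_trans)
  show "\<forall>l. cmod (U1X l - map_X \<Phi> X Y l) \<le> C\<phi> * \<epsilon> ^ m"
    using phd by (simp add: U1 map_X_def ph_def)
  show "\<forall>j. cmod (U1Y j - map_Y \<Phi> X Y j) \<le> \<epsilon> * (C\<phi> * \<epsilon> ^ m)"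
  proof
    fix j
    have "cmod (U1Y j - map_Y \<Phi> X Y j) = cmod (Y j) * cmod (pht (Inr j) - ph (Inr j))"
      by (simp add: U1 map_Y_def ph_def right_diff_distrib[symmetric] norm_mult)
    also have "\<dots> \<le> \<epsilon> * (C\<phi> * \<epsilon> ^ m)" using Y phd e by (intro mult_mono) auto
    finally show "cmod (U1Y j - map_Y \<Phi> X Y j) \<le> \<epsilon> * (C\<phi> * \<epsilon> ^ m)" .
  qed
qed

text \<open>Since \<open>A\<close> is resonant, \<open>A \<circ> e^(tS) = e^(t lam) A\<close>; the points \<open>\<Phi> \<circ> e^(tS)\<close> and
  \<open>e^(tS) \<circ> \<Phi>\<close> are \<open>O(\<epsilon>^m)\<close>-close in \<open>X\<close> and \<open>O(\<epsilon>^(m+1))\<close>-close in \<open>Y\<close>, and \<open>A\<close> has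
  order \<open>ko\<close>, so \<open>A\<close> contributes \<open>O(\<epsilon>^(m+ko))\<close> to the defect and \<open>B\<close> contributes \<open>O(\<epsilon>^M)\<close>.\<close>

lemma twisted_composition_bound:
  assumes t: "0 \<le> t" "t \<le> 1"
  obtains \<epsilon>0 C where "0 < \<epsilon>0"
    "\<And>\<epsilon> X Y. 0 < \<epsilon> \<Longrightarrow> \<epsilon> \<le> \<epsilon>0 \<Longrightarrow> \<forall>l. Im (X l) = 0 \<Longrightarrow> \<forall>j. cmod (Y j) = \<epsilon> \<Longrightarrow>
       cmod (G (flow_X \<omega> t X) (flow_Y \<Lambda> t Y) - exp (of_real t * lam) * G X Y) \<le> C * \<epsilon> ^ min M (m + ko)"
proof
  note c = constants_bounds
  define \<rho>' where "\<rho>' = \<rho>V / 2"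
  have \<rho>': "0 < \<rho>'" "\<rho>' < \<rho>V" using c by (auto simp: \<rho>'_def)
  define \<epsilon>0 where "\<epsilon>0 = min (min 1 (\<rho>0 / EL)) (min (\<delta>1 / EL) (\<rho>' / c3))"
  define El where "El = cmod (exp (of_real t * lam))"
  define KA where "KA = weighted_norm rV \<rho>V A"
  define KB where "KB = weighted_norm rV \<rho>V B"
  define Lip where "Lip = c3 ^ ko * C\<phi> / ((rV - r1) * \<rho>' ^ ko) + c3 ^ (ko - 1) * C\<phi> / ((1 - \<rho>' / \<rho>V) * \<rho>' ^ ko)"
  have Lip0: "0 \<le> Lip" using c r1 \<rho>' by (simp add: Lip_def)
  show "0 < \<epsilon>0" using c \<delta>1 \<rho>' by (simp add: \<epsilon>0_def)
  fix \<epsilon> :: real and X :: "'d \<Rightarrow> complex" and Y :: "'n \<Rightarrow> complex"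
  assume e: "0 < \<epsilon>" "\<epsilon> \<le> \<epsilon>0" and X: "\<forall>l. Im (X l) = 0" and Y: "\<forall>j. cmod (Y j) = \<epsilon>"
  have e1: "\<epsilon> \<le> 1" and e2: "\<epsilon> * EL \<le> \<rho>0" and e3: "\<epsilon> * EL \<le> \<delta>1" and e5: "c3 * \<epsilon> \<le> \<rho>'"
    using e c by (auto simp: \<epsilon>0_def field_simps)
  note U = flowed_points_close[OF t e(1) e2 e3 X, of Y]
  have "cmod (G (flow_X \<omega> t X) (flow_Y \<Lambda> t Y) - exp (of_real t * lam) * G X Y)
    \<le> El * KA * ((c3 * \<epsilon>) ^ ko * (C\<phi> * \<epsilon> ^ m) / ((rV - r1) * \<rho>' ^ ko)
        + (c3 * \<epsilon>) ^ (ko - 1) * (\<epsilon> * (C\<phi> * \<epsilon> ^ m)) / ((1 - \<rho>' / \<rho>V) * \<rho>' ^ ko))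
      + (1 + El) * KB * (c3 * \<epsilon> / \<rho>V) ^ M"
    using norm_twisted_diff_le[OF anA anB resA ordA ko ordB r1 \<rho>'(2) mult_pos_pos[OF c(3) e(1)] e5
        U(3-9)] Y
    unfolding G_def El_def KA_def KB_def by (simp add: U(1,2))
  also have "\<dots> = El * KA * Lip * \<epsilon> ^ (m + ko) + (1 + El) * KB * (c3 / \<rho>V) ^ M * \<epsilon> ^ M"
    by (rule twisted_bound_collect[OF ko]) (simp add: Lip_def)
  also have "\<dots> \<le> (El * KA * Lip + (1 + El) * KB * (c3 / \<rho>V) ^ M) * \<epsilon> ^ min M (m + ko)"
    using e e1 Lip0 c weighted_norm_nonneg[OF anA] weighted_norm_nonneg[OF anB]
    by (auto simp: distrib_right El_def KA_def KB_def intro!: add_mono mult_left_mono power_decreasing)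
  finally show "cmod (G (flow_X \<omega> t X) (flow_Y \<Lambda> t Y) - exp (of_real t * lam) * G X Y)
      \<le> (El * KA * Lip + (1 + El) * KB * (c3 / \<rho>V) ^ M) * \<epsilon> ^ min M (m + ko)" .
qed

text \<open>The coefficients of the defect \<open>G \<circ> e^(tS) - e^(t lam) G\<close> are those of \<open>G\<close> times
  \<open>e^(t \<mu>) - e^(t lam)\<close>, where \<open>\<mu>\<close> is the small divisor.\<close>

lemma twisted_coeff_vanishes:
  fixes cW :: "('d, 'n) fts"
  assumes \<rho>: "0 < \<rho>"
    and rep: "\<And>X Y. \<forall>l. Im (X l) = 0 \<Longrightarrow> \<forall>j. cmod (Y j) < \<rho> \<Longrightarrow>
       ((\<lambda>(P, Q). cW P Q * mono_term P Q X Y) has_sum G X Y) UNIV"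
    and deg: "degQ Q < M" "degQ Q < m + ko"
    and sdn: "small_div \<omega> \<Lambda> P Q \<noteq> lam"
  shows "cW P Q = 0"
proof -
  obtain t where t: "0 < t" "t \<le> 1" and tne: "exp (of_real t * small_div \<omega> \<Lambda> P Q) \<noteq> exp (of_real t * lam)"
    using exp_ne_small_time[OF sdn] by blast
  obtain \<epsilon>0 C where \<epsilon>0: "0 < \<epsilon>0" and bound: "\<And>\<epsilon> X Y. 0 < \<epsilon> \<Longrightarrow> \<epsilon> \<le> \<epsilon>0 \<Longrightarrow> \<forall>l. Im (X l) = 0 \<Longrightarrow>
      \<forall>j. cmod (Y j) = \<epsilon> \<Longrightarrow> cmod (G (flow_X \<omega> t X) (flow_Y \<Lambda> t Y) - exp (of_real t * lam) * G X Y) \<le> C * \<epsilon> ^ min M (m + ko)"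
    using twisted_composition_bound[OF less_imp_le[OF t(1)] t(2)] by blast
  define L where "L = (\<Sum>j\<in>UNIV. cmod (\<Lambda> j))"
  have L: "\<forall>j. cmod (\<Lambda> j) \<le> L" unfolding L_def by (auto intro: member_le_sum)
  have EL: "1 \<le> exp L" by (simp add: L_def sum_nonneg)
  define \<epsilon>1 where "\<epsilon>1 = min \<epsilon>0 (\<rho> / (2 * exp L))"
  define d where "d P Q = cW P Q * (exp (of_real t * small_div \<omega> \<Lambda> P Q) - exp (of_real t * lam))" for P Q
  have "d P Q = 0"
  proof (rule coeff_zero_if_small[where h = "\<lambda>X Y. G (flow_X \<omega> t X) (flow_Y \<Lambda> t Y) - exp (of_real t * lam) * G X Y"])
    show "0 < \<epsilon>1" using \<epsilon>0 \<rho> by (simp add: \<epsilon>1_def)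
    show "degQ Q < min M (m + ko)" using deg by simp
    fix \<epsilon> :: real and X :: "'d \<Rightarrow> complex" and Y :: "'n \<Rightarrow> complex"
    assume e: "0 < \<epsilon>" "\<epsilon> \<le> \<epsilon>1" and X: "\<forall>l. Im (X l) = 0" and Y: "\<forall>j. cmod (Y j) = \<epsilon>"
    show "cmod (G (flow_X \<omega> t X) (flow_Y \<Lambda> t Y) - exp (of_real t * lam) * G X Y) \<le> C * \<epsilon> ^ min M (m + ko)"
      using bound[OF e(1) _ X Y] e by (simp add: \<epsilon>1_def)
    have e\<rho>: "exp L * \<epsilon> < \<rho>"
      using e \<rho> EL by (simp add: \<epsilon>1_def field_simps)
    have Yt: "\<forall>j. cmod (flow_Y \<Lambda> t Y j) < \<rho>"
      using norm_flow_Y_le[OF less_imp_le[OF t(1)] t(2) L] Y e\<rho> by (metis order_eq_refl le_less_trans)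
    have Yr: "\<forall>j. cmod (Y j) < \<rho>" using Y e\<rho> EL e by (smt (verit) mult_le_cancel_right1)
    have Xt: "\<forall>l. Im (flow_X \<omega> t X l) = 0" using X by (simp add: Im_flow_X)
    show "((\<lambda>(P, Q). d P Q * mono_term P Q X Y) has_sum
        G (flow_X \<omega> t X) (flow_Y \<Lambda> t Y) - exp (of_real t * lam) * G X Y) UNIV"
      using has_sum_diff[OF has_sum_flow[OF rep[OF Xt Yt]] has_sum_cmult_right[OF rep[OF X Yr], of "exp (of_real t * lam)"]]
      by (simp add: d_def case_prod_unfold algebra_simps)
  qed
  with tne show ?thesis by (simp add: d_def)
qed

end

section \<open>The conjugacy equation forces resonance\<close>

lemma eval_fts_split:
  assumes anV: "analytic_fts rV \<rho>V Va"
    and split: "\<And>P Q. Va P Q = s P Q + A P Q + B P Q"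
    and anA: "analytic_fts rV \<rho>V A" and anB: "analytic_fts rV \<rho>V B"
    and hs: "((\<lambda>(P, Q). s P Q * mono_term P Q X Y) has_sum sv) UNIV"
    and X: "\<forall>l. \<bar>Im (X l)\<bar> \<le> rV" and Y: "\<forall>j. cmod (Y j) \<le> \<rho>V"
  shows "eval_fts Va X Y = sv + eval_fts A X Y + eval_fts B X Y"
proof -
  note hA = analytic_fts_has_sum[OF anA X Y]
  note hB = analytic_fts_has_sum[OF anB X Y]
  note hV = analytic_fts_has_sum[OF anV X Y]
  have h: "((\<lambda>x. ((\<lambda>(P, Q). s P Q * mono_term P Q X Y) x + (\<lambda>(P, Q). A P Q * mono_term P Q X Y) x) + (\<lambda>(P, Q). B P Q * mono_term P Q X Y) x)
     has_sum (sv + eval_fts A X Y + eval_fts B X Y)) UNIV"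
    by (intro has_sum_add hs hA hB)
  have "(\<lambda>(P, Q). Va P Q * mono_term P Q X Y) = (\<lambda>x. ((\<lambda>(P, Q). s P Q * mono_term P Q X Y) x + (\<lambda>(P, Q). A P Q * mono_term P Q X Y) x) + (\<lambda>(P, Q). B P Q * mono_term P Q X Y) x)"
    by (auto simp: fun_eq_iff split distrib_right)
  with h have "((\<lambda>(P, Q). Va P Q * mono_term P Q X Y) has_sum (sv + eval_fts A X Y + eval_fts B X Y)) UNIV" by simp
  from has_sum_unique[OF hV this] show ?thesis .
qed

lemma trunc_eq_coeff:
  assumes "trunc k f = trunc k g" "degQ Q \<le> k"
  shows "f P Q = g P Q"
  using fun_cong[OF fun_cong[OF assms(1), of P], of Q] assms(2) by (simp add: trunc_def)


lemma small_div_shiftQ: "small_div \<omega> \<Lambda> P (shiftQ a Q) = small_div \<omega> \<Lambda> P Q + vf_eigenvalue \<Lambda> a"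
  by (cases a) (simp_all add: shiftQ_def vf_eigenvalue_def small_div_plus_unit)

lemma trunc_vf_apply: "trunc_vf k F a = trunc (k + vf_shift a) (F a)"
  by (cases a) (simp_all add: trunc_vf_def vf_shift_def)

locale conjugacy =
  fixes \<omega> :: "'d::finite \<Rightarrow> real" and \<Lambda> :: "'n::finite \<Rightarrow> complex"
    and \<Phi> N R Rn c :: "('d, 'n) fvf" and k :: nat and r0 \<rho>0 rV \<rho>V r \<rho> :: real
  assumes an\<Phi>: "\<And>a. analytic_fts r0 \<rho>0 (\<Phi> a)"
    and deg\<Phi>: "\<And>a. trunc k (\<Phi> a) = \<Phi> a"
    and resN: "resonant_vf \<omega> \<Lambda> N" and ordN: "quasi_order 1 N" and ordR: "quasi_order (k + 1) R"
    and anV: "\<And>a. analytic_fts rV \<rho>V (add_vf (S_vf \<omega> \<Lambda>) (add_vf N R) a)"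
    and ordRn: "quasi_order 1 Rn" and resNF: "resonant_vf \<omega> \<Lambda> (add_vf (S_vf \<omega> \<Lambda>) Rn)"
    and pos: "0 < r" "0 < \<rho>"
    and maps_into: "\<forall>(X, Y)\<in>dom_strip r \<rho>. (map_X \<Phi> X Y, map_Y \<Phi> X Y) \<in> dom_strip rV \<rho>V"
    and rep_c: "\<And>a. represents (c a)
      (\<lambda>X Y. eval_fts (add_vf (S_vf \<omega> \<Lambda>) (add_vf N R) a) (map_X \<Phi> X Y) (map_Y \<Phi> X Y)) (dom_strip r \<rho>)"
    and conj: "trunc_vf k (jac_apply \<Phi> (add_vf (S_vf \<omega> \<Lambda>) Rn)) = trunc_vf k c"
begin

abbreviation V :: "('d, 'n) fvf" where
  "V \<equiv> add_vf (S_vf \<omega> \<Lambda>) (add_vf N R)"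

text \<open>The split of \<open>N + R\<close> into its part of quasi-degree at most \<open>k\<close>, which is resonant
  since \<open>R\<close> does not reach it, and a remainder of higher order.\<close>

definition low :: "('d, 'n) fvf" where
  "low a = (\<lambda>P Q. if degQ Q \<le> k + vf_shift a then N a P Q + R a P Q else 0)"

definition high :: "('d, 'n) fvf" where
  "high a = (\<lambda>P Q. if degQ Q \<le> k + vf_shift a then 0 else N a P Q + R a P Q)"

lemma Rn_Inl_nonzero:
  assumes "Rn (Inl m') P Q \<noteq> 0"
  shows "small_div \<omega> \<Lambda> P Q = 0 \<and> 1 \<le> degQ Q"
proof -
  have d: "1 \<le> degQ Q" using ordRn assms by (auto simp: quasi_order_def has_order_def not_le[symmetric])
  then have "add_vf (S_vf \<omega> \<Lambda>) Rn (Inl m') P Q \<noteq> 0" using assms by (auto simp: add_vf_def S_vf_def degQ_def)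
  with resNF d show ?thesis by (auto simp: resonant_vf_def resonant_def)
qed

lemma Rn_Inr_nonzero:
  assumes "Rn (Inr j) P Q \<noteq> 0"
  shows "small_div \<omega> \<Lambda> P Q = \<Lambda> j \<and> 2 \<le> degQ Q"
proof -
  have "\<not> degQ Q < 1 + 1" using ordRn assms by (auto simp: quasi_order_def has_order_def)
  then have d: "2 \<le> degQ Q" by simp
  then have "add_vf (S_vf \<omega> \<Lambda>) Rn (Inr j) P Q \<noteq> 0"
    using assms degQ_unit[of j] by (auto simp: add_vf_def S_vf_def)
  with resNF d show ?thesis by (auto simp: resonant_vf_def)
qed

lemma N_plus_R_nonzero:
  assumes "N a P Q + R a P Q \<noteq> 0"
  shows "1 + vf_shift a \<le> degQ Q" and "S_vf \<omega> \<Lambda> a P Q = 0"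
proof -
  show deg: "1 + vf_shift a \<le> degQ Q"
  proof (rule ccontr)
    assume "\<not> 1 + vf_shift a \<le> degQ Q"
    then have "degQ Q < 1 + vf_shift a" "degQ Q < k + 1 + vf_shift a" by simp_all
    then have "N a P Q = 0" "R a P Q = 0" using ordN ordR by (simp_all add: quasi_order_iff has_order_def)
    with assms show False by simp
  qed
  show "S_vf \<omega> \<Lambda> a P Q = 0"
  proof (cases a)
    case (Inl l)
    then show ?thesis using deg by (auto simp: S_vf_def vf_shift_def degQ_def)
  next
    case (Inr i)
    then have "Q \<noteq> unitQ i" using deg degQ_unit[of i] by (auto simp: vf_shift_def)
    then show ?thesis using Inr by (simp add: S_vf_def)
  qed
qed

lemma V_split: "V a P Q = S_vf \<omega> \<Lambda> a P Q + low a P Q + high a P Q"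
  by (simp add: add_vf_def low_def high_def)

lemma norm_N_plus_R_le: "cmod (N a P Q + R a P Q) \<le> cmod (V a P Q)"
  using N_plus_R_nonzero(2) by (cases "N a P Q + R a P Q = 0") (auto simp: add_vf_def)

lemma analytic_low: "analytic_fts rV \<rho>V (low a)"
  and analytic_high: "analytic_fts rV \<rho>V (high a)"
  using norm_N_plus_R_le by (auto intro!: analytic_fts_dominated[OF anV[of a]] simp: low_def high_def)

lemma resonant_low: "low a P Q \<noteq> 0 \<Longrightarrow> small_div \<omega> \<Lambda> P Q = vf_eigenvalue \<Lambda> a"
  using resN ordR
  by (auto simp: low_def resonant_vf_iff quasi_order_iff has_order_def split: if_splits)

lemma order_low: "has_order (1 + vf_shift a) (low a)"
  using N_plus_R_nonzero(1)[of a] by (force simp: has_order_def low_def)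

lemma order_high: "has_order (k + 1 + vf_shift a) (high a)"
  by (simp add: has_order_def high_def)

lemma real_points_in_strip:
  assumes "\<forall>l. Im (X l) = 0" "\<forall>j. cmod (Y j) < \<rho>"
  shows "\<forall>l. \<bar>Im (map_X \<Phi> X Y l)\<bar> \<le> rV" "\<forall>j. cmod (map_Y \<Phi> X Y j) \<le> \<rho>V"
    and "((\<lambda>(P, Q). c a P Q * mono_term P Q X Y) has_sum eval_fts (V a) (map_X \<Phi> X Y) (map_Y \<Phi> X Y)) UNIV"
proof -
  have XY: "(X, Y) \<in> dom_strip r \<rho>" using assms pos by (simp add: dom_strip_def)
  then show "\<forall>l. \<bar>Im (map_X \<Phi> X Y l)\<bar> \<le> rV" "\<forall>j. cmod (map_Y \<Phi> X Y j) \<le> \<rho>V"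
    using maps_into by (auto simp: dom_strip_def less_imp_le)
  show "((\<lambda>(P, Q). c a P Q * mono_term P Q X Y) has_sum eval_fts (V a) (map_X \<Phi> X Y) (map_Y \<Phi> X Y)) UNIV"
    using rep_c[of a] XY by (auto simp: represents_def)
qed

lemma margin:
  obtains r1 \<delta>1 where "r1 < rV" "0 < \<delta>1"
    "\<And>X Y l. \<forall>l. Im (X l) = 0 \<Longrightarrow> \<forall>j. cmod (Y j) \<le> \<delta>1 \<Longrightarrow> \<bar>Im (eval_fts (\<Phi> (Inl l)) X Y)\<bar> \<le> r1"
proof (rule Im_components_below_strip[OF an\<Phi>])
  show "\<forall>x::'d \<Rightarrow> real. \<forall>l. \<bar>Im (eval_fts (\<Phi> (Inl l)) (\<lambda>m. of_real (x m)) ((\<lambda>_. 0) :: 'n \<Rightarrow> complex))\<bar> < rV"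
  proof (intro allI)
    fix x :: "'d \<Rightarrow> real" and l
    have "((\<lambda>m. of_real (x m)), ((\<lambda>_. 0) :: 'n \<Rightarrow> complex)) \<in> dom_strip r \<rho>" using pos by (simp add: dom_strip_def)
    then have "(map_X \<Phi> (\<lambda>m. of_real (x m)) (\<lambda>_. 0), map_Y \<Phi> (\<lambda>m. of_real (x m)) ((\<lambda>_. 0) :: 'n \<Rightarrow> complex)) \<in> dom_strip rV \<rho>V"
      using maps_into by blast
    then show "\<bar>Im (eval_fts (\<Phi> (Inl l)) (\<lambda>m. of_real (x m)) ((\<lambda>_. 0) :: 'n \<Rightarrow> complex))\<bar> < rV"
      by (simp add: dom_strip_def map_X_def)
  qed
qed (use that in blast)

lemma c_eq_S_comp:
  assumes IH: "\<And>a P Q. degQ Q < m \<Longrightarrow> \<Phi> a P Q \<noteq> 0 \<Longrightarrow> small_div \<omega> \<Lambda> P Q = 0"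
    and deg: "degQ Q \<le> k + vf_shift a" "degQ Q \<le> m + vf_shift a"
    and sdn: "small_div \<omega> \<Lambda> P Q \<noteq> vf_eigenvalue \<Lambda> a"
  shows "c a P Q = S_comp \<omega> \<Lambda> \<Phi> a P Q"
proof -
  obtain r1 \<delta>1 where r1: "r1 < rV" and \<delta>1: "0 < \<delta>1" and mar:
    "\<And>X Y l. \<forall>l. Im (X l) = 0 \<Longrightarrow> \<forall>j. cmod (Y j) \<le> \<delta>1 \<Longrightarrow> \<bar>Im (eval_fts (\<Phi> (Inl l)) X Y)\<bar> \<le> r1"
    using margin by blast
  interpret twist: flow_twist \<omega> \<Lambda> \<Phi> "low a" "high a" "vf_eigenvalue \<Lambda> a" "1 + vf_shift a"
    "k + 1 + vf_shift a" m r0 \<rho>0 rV \<rho>V r1 \<delta>1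
    using an\<Phi> analytic_low analytic_high resonant_low order_low order_high r1 \<delta>1 mar IH
    by unfold_locales auto
  have pos0: "0 < r0" "0 < \<rho>0" using an\<Phi>[of a] by (auto simp: analytic_fts_def)
  have "c a P Q - S_comp \<omega> \<Lambda> \<Phi> a P Q = 0"
  proof (rule twist.twisted_coeff_vanishes[where \<rho> = "min \<rho> \<rho>0"])
    fix X :: "'d \<Rightarrow> complex" and Y :: "'n \<Rightarrow> complex"
    assume X: "\<forall>l. Im (X l) = 0" and Y: "\<forall>j. cmod (Y j) < min \<rho> \<rho>0"
    have Y\<rho>: "\<forall>j. cmod (Y j) < \<rho>" and Y0: "\<forall>j. cmod (Y j) \<le> \<rho>0" using Y by (auto intro: less_imp_le)
    have X0: "\<forall>l. \<bar>Im (X l)\<bar> \<le> r0" using X pos0 by simp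
    have "eval_fts (V a) (map_X \<Phi> X Y) (map_Y \<Phi> X Y) = S_value \<omega> \<Lambda> (map_Y \<Phi> X Y) a + twist.G X Y"
      using eval_fts_split[OF anV V_split analytic_low analytic_high has_sum_S_vf real_points_in_strip(1,2)[OF X Y\<rho>]]
      by (simp add: twist.G_def add.assoc)
    with has_sum_diff[OF real_points_in_strip(3)[OF X Y\<rho>, of a]
        has_sum_S_comp[where \<omega> = \<omega> and \<Lambda> = \<Lambda> and \<Phi> = \<Phi> and a = a, OF an\<Phi>[of a] X0 Y0]]
    show "((\<lambda>(P, Q). (c a P Q - S_comp \<omega> \<Lambda> \<Phi> a P Q) * mono_term P Q X Y) has_sum twist.G X Y) UNIV"
      by (simp add: case_prod_unfold left_diff_distrib)
  qed (use pos pos0 deg sdn in auto)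
  then show ?thesis by simp
qed

theorem resonant_coeffs: "\<Phi> a P Q \<noteq> 0 \<Longrightarrow> small_div \<omega> \<Lambda> P Q = 0"
proof (induction "degQ Q" arbitrary: a P Q rule: less_induct)
  case less
  show ?case
  proof (rule ccontr)
    assume sdn: "small_div \<omega> \<Lambda> P Q \<noteq> 0"
    define m where "m = degQ Q"
    have IH: "\<And>a P Q'. degQ Q' < m \<Longrightarrow> \<Phi> a P Q' \<noteq> 0 \<Longrightarrow> small_div \<omega> \<Lambda> P Q' = 0"
      using less.hyps by (simp add: m_def)
    have mk: "m \<le> k"
      using less.prems fun_cong[OF fun_cong[OF deg\<Phi>[of a], of P], of Q] by (auto simp: m_def trunc_def split: if_splits)
    have "(small_div \<omega> \<Lambda> P Q + vf_eigenvalue \<Lambda> a) * \<Phi> a P Q = jac_apply \<Phi> (add_vf (S_vf \<omega> \<Lambda>) Rn) a P (shiftQ a Q)"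
      using coeff_jac_apply_NF[OF Rn_Inl_nonzero Rn_Inr_nonzero IH m_def[symmetric] sdn] by simp
    also have "\<dots> = c a P (shiftQ a Q)"
      using trunc_eq_coeff[OF conj[THEN fun_cong, of a, unfolded trunc_vf_apply]] mk
      by (simp add: degQ_shiftQ m_def)
    also have "\<dots> = S_comp \<omega> \<Lambda> \<Phi> a P (shiftQ a Q)"
      using c_eq_S_comp[OF IH] mk sdn by (simp add: degQ_shiftQ small_div_shiftQ m_def)
    also have "\<dots> = vf_eigenvalue \<Lambda> a * \<Phi> a P Q" by (rule S_comp_shiftQ[OF sdn])
    finally show False using sdn less.prems by (simp add: distrib_right)
  qed
qed

end

theorem proposition5p3:
  fixes \<omega> :: "'d::finite \<Rightarrow> real" and \<Lambda> :: "'n::finite \<Rightarrow> complex"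
    and \<Phi>t :: "nat \<Rightarrow> ('d, 'n) fvf"
    and N R Rn :: "('d, 'n) fvf" and k :: nat and rV \<rho>V :: real
  assumes "formal_diffeo \<Phi>t"
    and "formal_vf N" "resonant_vf \<omega> \<Lambda> N" "quasi_order 1 N"
    and "formal_vf R" "quasi_order (k + 1) R"
    and "\<forall>a. analytic_fts rV \<rho>V (add_vf (S_vf \<omega> \<Lambda>) (add_vf N R) a)"
    and "formal_vf Rn" "quasi_order 1 Rn" "resonant_vf \<omega> \<Lambda> (add_vf (S_vf \<omega> \<Lambda>) Rn)"
    and "\<forall>j. conj_eq rV \<rho>V (add_vf (S_vf \<omega> \<Lambda>) (add_vf N R)) (add_vf (S_vf \<omega> \<Lambda>) Rn) (\<Phi>t j) j"
  shows "\<forall>a. resonant \<omega> \<Lambda> (\<Phi>t k a)"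
proof -
  obtain r0 \<rho>0 :: "nat \<Rightarrow> real" where an\<Phi>: "analytic_diffeo (r0 k) (\<rho>0 k) (\<Phi>t k)"
    and deg\<Phi>: "\<And>a. trunc k (\<Phi>t k a) = \<Phi>t k a"
    using assms(1) unfolding formal_diffeo_def by blast
  obtain r \<rho> c where "0 < r" "0 < \<rho>"
    "\<forall>(X, Y)\<in>dom_strip r \<rho>. (map_X (\<Phi>t k) X Y, map_Y (\<Phi>t k) X Y) \<in> dom_strip rV \<rho>V"
    "\<And>a. represents (c a) (\<lambda>X Y. eval_fts (add_vf (S_vf \<omega> \<Lambda>) (add_vf N R) a)
       (map_X (\<Phi>t k) X Y) (map_Y (\<Phi>t k) X Y)) (dom_strip r \<rho>)"
    "trunc_vf k (jac_apply (\<Phi>t k) (add_vf (S_vf \<omega> \<Lambda>) Rn)) = trunc_vf k c"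
    using assms(11) unfolding conj_eq_def by blast
  then interpret conjugacy \<omega> \<Lambda> "\<Phi>t k" N R Rn c k "r0 k" "\<rho>0 k" rV \<rho>V r \<rho>
    using an\<Phi> deg\<Phi> assms(3,4,6,7,9,10) by unfold_locales (auto simp: analytic_diffeo_def)
  show ?thesis using resonant_coeffs by (auto simp: resonant_def)
qed

end
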